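(* For each $A\in\Pi^{\imath}_{n,d}$, $\sigma_\imath(A)=PT_\imath(w_A^+)$.
   Context: $d\ge1$, $n=2r\ge2$. $W_{C_d}$: permutations $w$ of $\{\pm1,\dots,\pm d\}$ with $w(-i)=-w(i)$. $\Pi^{\imath}_{n,d}$: matrices $(a_{ij})_{i,j\in[-r,r]\setminus\{0\}}$ over $\mathbb N$ with $a_{ij}=a_{-i,-j}$, $\sum a_{ij}=2d$. For symmetric $\lambda$ with sum $2d$: $R_i^\lambda=[\lambda_1+\dots+\lambda_{i-1}+1,\lambda_1+\dots+\lambda_i]$ ($i>0$), $R_{-i}^\lambda=-R_i^\lambda$, $W_\lambda=\{w:w(R_i^\lambda)=R_i^\lambda\ \forall i\}$. $w_A^+$ is the longest element of the unique double coset $W_{ro(A)}yW_{co(A)}$ with $\sharp(R_i^{ro(A)}\cap y(R_j^{co(A)}))=a_{ij}$ ($ro,co$ = row/column sum vectors). $\sigma_\imath(A)$: order $([-r,r]\setminus\{0\})^2$ by $(i,j)\le(i',j')$ iff $i\ge i'$ and $j\le j'$; $\mathfrak s_k(A)$ is the max over unions $F$ of $k$ disjoint chains of $\sum_{(i,j)\in F}a_{ij}$, $\mathfrak s_0=0$; $\sigma_\imath(A)=(\mathfrak s_i(A)-\mathfrak s_{i-1}(A))_{1\le i\le n}$. $PT_\imath(w)$: regard $w$ as a permutation of $\{1,\dots,2d\}$ via $-d\leftrightarrow1,\dots,-1\leftrightarrow d,1\leftrightarrow d+1,\dots,d\leftrightarrow2d$, with $w_t$ the image of $t$. For a tableau $T$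 with entries decreasing along rows and columns, $T\leftarrow k$: if $k_1=k$ is $\le$ every entry of the first row, append it there; otherwise replace the largest entry $k_2<k_1$ of the first row by $k_1$ and insert $k_2$ into the next row likewise, etc. $P_0=\emptyset$, $P_t=P_{t-1}\leftarrow w_t$; $PT_\imath(w)$ is the shape of $P_{2d}$. *)

theory Defs
  imports Main
begin

definition Ir :: "nat \<Rightarrow> int set" where
  "Ir r = {- int r .. int r} - {0}"

definition signedset :: "nat \<Rightarrow> int set" where
  "signedset d = {- int d .. int d} - {0}"

section \<open>Matrices Pi^i_{n,d} (n = 2r), entries indexed by Ir r \<times> Ir r\<close>

definition Pi_i :: "nat \<Rightarrow> nat \<Rightarrow> (int \<Rightarrow> int \<Rightarrow> nat) set" where
  "Pi_i r d = {A. (\<forall>i\<in>Ir r. \<forall>j\<in>Ir r. A i j = A (-i) (-j)) \<and>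
                  (\<Sum>(i,j)\<in>Ir r \<times> Ir r. A i j) = 2 * d}"

definition ro :: "nat \<Rightarrow> (int \<Rightarrow> int \<Rightarrow> nat) \<Rightarrow> int \<Rightarrow> nat" where
  "ro r A i = (\<Sum>j\<in>Ir r. A i j)"

definition co :: "nat \<Rightarrow> (int \<Rightarrow> int \<Rightarrow> nat) \<Rightarrow> int \<Rightarrow> nat" where
  "co r A j = (\<Sum>i\<in>Ir r. A i j)"

definition W_C :: "nat \<Rightarrow> (int \<Rightarrow> int) set" where
  "W_C d = {w. bij_betw w (signedset d) (signedset d) \<and>
               (\<forall>i\<in>signedset d. w (-i) = - w i) \<and>
               (\<forall>x. x \<notin> signedset d \<longrightarrow> w x = x)}"

text \<open>Coxeter length of type B/C (Bjorner--Brenti): inv + nsp.\<close>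
definition lenC :: "nat \<Rightarrow> (int \<Rightarrow> int) \<Rightarrow> nat" where
  "lenC d w = card {(i,j). i \<in> {1..int d} \<and> j \<in> {1..int d} \<and> i < j \<and> w i > w j}
            + card {(i,j). i \<in> {1..int d} \<and> j \<in> {1..int d} \<and> i \<le> j \<and> w i + w j < 0}"

definition Rblk :: "(int \<Rightarrow> nat) \<Rightarrow> int \<Rightarrow> int set" where
  "Rblk lam i =
     (if i > 0 then {int (\<Sum>k\<in>{1..<nat i}. lam (int k)) + 1 .. int (\<Sum>k\<in>{1..nat i}. lam (int k))}
      else uminus ` {int (\<Sum>k\<in>{1..<nat (-i)}. lam (int k)) + 1 .. int (\<Sum>k\<in>{1..nat (-i)}. lam (int k))})"

definition W_par :: "nat \<Rightarrow> nat \<Rightarrow> (int \<Rightarrow> nat) \<Rightarrow> (int \<Rightarrow> int) set" where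
  "W_par r d lam = {w \<in> W_C d. \<forall>i\<in>Ir r. w ` Rblk lam i = Rblk lam i}"

definition dcoset :: "nat \<Rightarrow> nat \<Rightarrow> (int \<Rightarrow> nat) \<Rightarrow> (int \<Rightarrow> int) \<Rightarrow> (int \<Rightarrow> nat) \<Rightarrow> (int \<Rightarrow> int) set" where
  "dcoset r d lam y mu = {u \<circ> y \<circ> v | u v. u \<in> W_par r d lam \<and> v \<in> W_par r d mu}"

definition wAplus :: "nat \<Rightarrow> nat \<Rightarrow> (int \<Rightarrow> int \<Rightarrow> nat) \<Rightarrow> (int \<Rightarrow> int)" where
  "wAplus r d A = (THE w. \<exists>y\<in>W_C d.
      (\<forall>i\<in>Ir r. \<forall>j\<in>Ir r. card (Rblk (ro r A) i \<inter> y ` Rblk (co r A) j) = A i j) \<and>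
      w \<in> dcoset r d (ro r A) y (co r A) \<and>
      (\<forall>v\<in>dcoset r d (ro r A) y (co r A). lenC d v \<le> lenC d w))"

definition ple :: "int \<times> int \<Rightarrow> int \<times> int \<Rightarrow> bool" where
  "ple x y = (fst x \<ge> fst y \<and> snd x \<le> snd y)"

definition is_chain :: "(int \<times> int) set \<Rightarrow> bool" where
  "is_chain C = (\<forall>x\<in>C. \<forall>y\<in>C. ple x y \<or> ple y x)"

definition sfrak :: "nat \<Rightarrow> (int \<Rightarrow> int \<Rightarrow> nat) \<Rightarrow> nat \<Rightarrow> nat" where
  "sfrak r A k = Max {(\<Sum>(i,j)\<in>F. A i j) | F. \<exists>C :: nat \<Rightarrow> (int \<times> int) set.
      (\<forall>l<k. C l \<subseteq> Ir r \<times> Ir r \<and> is_chain (C l)) \<and>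
      (\<forall>l<k. \<forall>m<k. l \<noteq> m \<longrightarrow> C l \<inter> C m = {}) \<and>
      F = (\<Union>l<k. C l)}"

definition sigma_i :: "nat \<Rightarrow> (int \<Rightarrow> int \<Rightarrow> nat) \<Rightarrow> nat \<Rightarrow> nat" where
  "sigma_i r A i = (if 1 \<le> i \<and> i \<le> 2 * r then sfrak r A i - sfrak r A (i - 1) else 0)"

fun tab_ins :: "nat list list \<Rightarrow> nat \<Rightarrow> nat list list" where
  "tab_ins [] k = [[k]]"
| "tab_ins (row # rows) k =
     (if \<forall>x\<in>set row. k \<le> x then (row @ [k]) # rows
      else (let k2 = Max {x \<in> set row. x < k}
            in map (\<lambda>x. if x = k2 then k else x) row # tab_ins rows k2))"

text \<open>identification -d..-1,1..d  with 1..2d\<close>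
definition to_pos :: "nat \<Rightarrow> int \<Rightarrow> nat" where
  "to_pos d x = (if x < 0 then nat (x + int d + 1) else nat (x + int d))"

definition from_pos :: "nat \<Rightarrow> nat \<Rightarrow> int" where
  "from_pos d t = (if t \<le> d then int t - int d - 1 else int t - int d)"

definition word_of :: "nat \<Rightarrow> (int \<Rightarrow> int) \<Rightarrow> nat list" where
  "word_of d w = map (\<lambda>t. to_pos d (w (from_pos d t))) [1..<2 * d + 1]"

definition shape :: "nat list list \<Rightarrow> nat \<Rightarrow> nat" where
  "shape P i = (if 1 \<le> i \<and> i \<le> length P then length (P ! (i - 1)) else 0)"

definition PT_i :: "nat \<Rightarrow> (int \<Rightarrow> int) \<Rightarrow> nat \<Rightarrow> nat" where
  "PT_i d w = shape (foldl tab_ins [] (word_of d w))"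

end

theory Submission
  imports Defs "HOL-Library.Disjoint_Sets"
begin

text \<open>
  Read \<open>w\<^sub>A\<^sup>+\<close> as a word of \<open>1..2d\<close>. By Greene's theorem the partial sums of the shape of
  its insertion tableau (rows and columns decreasing) are the maximal sizes of unions of \<open>k\<close>
  decreasing subsequences: these Greene numbers are invariant under Knuth moves, the reading
  word of the tableau is Knuth equivalent to the word, and for a reading word they are the sums
  of the first \<open>k\<close> row lengths.

  On the other side, \<open>w\<^sub>A\<^sup>+\<close> is the unique element \<open>x\<close> of its double coset that reverses the
  order inside every block of \<open>co(A)\<close> and inside the preimage of every block of \<open>ro(A)\<close>. Such
  an element exists (a minimizer of \<open>\<Sum>\<^sub>s (s + x s)\<^sup>2\<close> over the coset, since block-preserving
  swaps of an increasing pair decrease this sum), and it is the longest one: twice the length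
  counts the inversions of \<open>x\<close> plus a number of sign changes that is constant on the coset, and
  its only non-inversions are the unavoidable pairs whose cells increase strictly in both
  coordinates. Sending \<open>s\<close> to the cell \<open>(i, j)\<close> with \<open>x s \<in> R\<^sub>i\<^sup>r\<^sup>o\<^sup>(\<^sup>A\<^sup>)\<close> and \<open>s \<in> R\<^sub>j\<^sup>c\<^sup>o\<^sup>(\<^sup>A\<^sup>)\<close>,
  decreasing subsequences of \<open>x\<close> become chains of cells, cell \<open>(i, j)\<close> holding \<open>a\<^sub>i\<^sub>j\<close>
  letters, so the Greene numbers of \<open>x\<close> are the chain maxima of \<open>A\<close>.
\<close>

section \<open>Greene's theorem for decreasing subsequences\<close>

definition precedes :: "nat list \<Rightarrow> nat \<Rightarrow> nat \<Rightarrow> bool" where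
  "precedes xs b a \<longleftrightarrow> (\<exists>i j. i < j \<and> j < length xs \<and> xs ! i = b \<and> xs ! j = a)"

lemma precedes_Nil [simp]: "\<not> precedes [] b a"
  by (simp add: precedes_def)

lemma precedes_Cons [simp]:
  "precedes (x # xs) b a \<longleftrightarrow> (b = x \<and> a \<in> set xs) \<or> precedes xs b a"
proof
  assume "precedes (x # xs) b a"
  then obtain i j where ij: "i < j" "j < length (x # xs)" "(x # xs) ! i = b" "(x # xs) ! j = a"
    unfolding precedes_def by blast
  then obtain j' where j: "j = Suc j'" by (cases j) auto
  show "(b = x \<and> a \<in> set xs) \<or> precedes xs b a"
  proof (cases i)
    case 0
    then show ?thesis using ij j by auto
  next
    case (Suc i')
    then show ?thesis using ij j unfolding precedes_def by auto
  qed
next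
  assume "(b = x \<and> a \<in> set xs) \<or> precedes xs b a"
  then show "precedes (x # xs) b a"
  proof
    assume "b = x \<and> a \<in> set xs"
    then obtain j where "j < length xs" "xs ! j = a" by (auto simp: in_set_conv_nth)
    then show ?thesis unfolding precedes_def using \<open>b = x \<and> a \<in> set xs\<close>
      by (intro exI[of _ 0] exI[of _ "Suc j"]) auto
  next
    assume "precedes xs b a"
    then obtain i j where "i < j" "j < length xs" "xs ! i = b" "xs ! j = a"
      unfolding precedes_def by blast
    then show ?thesis unfolding precedes_def by (intro exI[of _ "Suc i"] exI[of _ "Suc j"]) auto
  qed
qed

lemma precedes_append [simp]:
  "precedes (xs @ ys) b a \<longleftrightarrow> precedes xs b a \<or> precedes ys b a \<or> (b \<in> set xs \<and> a \<in> set ys)"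
  by (induction xs) auto

lemma precedes_set: "precedes xs b a \<Longrightarrow> b \<in> set xs \<and> a \<in> set xs"
  by (induction xs) auto

lemma precedes_asym: "distinct xs \<Longrightarrow> precedes xs b a \<Longrightarrow> \<not> precedes xs a b"
  by (induction xs) (auto dest: precedes_set)

lemma precedes_rev: "precedes (rev xs) b a \<longleftrightarrow> precedes xs a b"
  by (induction xs) auto

lemma precedes_map:
  assumes "inj_on f (set xs)" "a \<in> set xs" "b \<in> set xs"
  shows "precedes (map f xs) (f b) (f a) \<longleftrightarrow> precedes xs b a"
proof
  assume "precedes (map f xs) (f b) (f a)"
  then obtain i j where ij: "i < j" "j < length xs" "f (xs ! i) = f b" "f (xs ! j) = f a"
    unfolding precedes_def by auto
  then have "xs ! i = b" "xs ! j = a" using assms by (auto simp: inj_on_eq_iff)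
  then show "precedes xs b a" unfolding precedes_def using ij(1,2) by blast
next
  assume "precedes xs b a"
  then show "precedes (map f xs) (f b) (f a)" unfolding precedes_def by fastforce
qed

definition decr_in :: "nat list \<Rightarrow> nat set \<Rightarrow> bool" where
  "decr_in xs V \<longleftrightarrow> V \<subseteq> set xs \<and> (\<forall>a\<in>V. \<forall>b\<in>V. a < b \<longrightarrow> precedes xs b a)"

definition decr_family :: "nat list \<Rightarrow> nat \<Rightarrow> (nat \<Rightarrow> nat set) \<Rightarrow> bool" where
  "decr_family xs k C \<longleftrightarrow> (\<forall>l<k. decr_in xs (C l))"

definition greene :: "nat list \<Rightarrow> nat \<Rightarrow> nat" where
  "greene xs k = Max {card (\<Union>l<k. C l) | C. decr_family xs k C}"

lemma decr_in_subset: "decr_in xs V \<Longrightarrow> W \<subseteq> V \<Longrightarrow> decr_in xs W"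
  unfolding decr_in_def by blast

lemma decr_in_empty [simp]: "decr_in xs {}"
  by (simp add: decr_in_def)

lemma decr_in_singleton: "a \<in> set xs \<Longrightarrow> decr_in xs {a}"
  unfolding decr_in_def by simp

lemma decr_in_less:
  assumes "distinct xs" "decr_in xs V" "a \<in> V" "b \<in> V" "precedes xs b a"
  shows "a < b"
proof (rule ccontr)
  assume "\<not> a < b"
  moreover have "a \<noteq> b" using precedes_asym[OF assms(1,5)] assms(5) by blast
  ultimately have "precedes xs a b" using assms(2-4) unfolding decr_in_def by simp
  then show False using precedes_asym[OF assms(1,5)] by blast
qed

lemma decr_in_Un:
  assumes "decr_in xs S1" "decr_in xs S2" "\<And>a b. a \<in> S1 \<Longrightarrow> b \<in> S2 \<Longrightarrow> precedes xs a b \<and> b < a"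
  shows "decr_in xs (S1 \<union> S2)"
  using assms unfolding decr_in_def by (metis Un_iff Un_least not_less_iff_gr_or_eq)

lemma decr_in_swap:
  assumes "distinct (u @ [p, q] @ v)" "decr_in (u @ [p, q] @ v) S" "\<not> (p \<in> S \<and> q \<in> S)"
  shows "decr_in (u @ [q, p] @ v) S"
  using assms unfolding decr_in_def by auto

lemma decr_family_Union_subset: "decr_family xs k C \<Longrightarrow> (\<Union>l<k. C l) \<subseteq> set xs"
  unfolding decr_family_def decr_in_def by blast

lemma finite_greene_candidates: "finite {card (\<Union>l<k. C l) | C. decr_family xs k C}"
proof -
  have "{card (\<Union>l<k. C l) | C. decr_family xs k C} \<subseteq> {..card (set xs)}"
    using decr_family_Union_subset by (auto simp: card_mono)
  then show ?thesis using finite_subset by blast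
qed

lemma card_Union_le_greene: "decr_family xs k C \<Longrightarrow> card (\<Union>l<k. C l) \<le> greene xs k"
  unfolding greene_def using finite_greene_candidates by (intro Max_ge) auto

lemma greene_attained:
  obtains C where "decr_family xs k C" "disjoint_family_on C {..<k}"
    "card (\<Union>l<k. C l) = greene xs k"
proof -
  have "decr_family xs k (\<lambda>_. {})" by (simp add: decr_family_def)
  then have "card (\<Union>l<k. {}) \<in> {card (\<Union>l<k. C l) | C. decr_family xs k C}"
    by (intro CollectI exI[of _ "\<lambda>_. {}"]) simp
  then have ne: "{card (\<Union>l<k. C l) | C. decr_family xs k C} \<noteq> {}" by (metis empty_iff)
  have "greene xs k \<in> {card (\<Union>l<k. C l) | C. decr_family xs k C}"
    unfolding greene_def by (rule Max_in[OF finite_greene_candidates ne])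
  then obtain C where C: "decr_family xs k C" "card (\<Union>l<k. C l) = greene xs k" by auto
  show ?thesis
  proof (rule that)
    show "decr_family xs k (disjointed C)"
      using C(1) decr_in_subset[OF _ Diff_subset] unfolding decr_family_def disjointed_def by blast
    show "disjoint_family_on (disjointed C) {..<k}"
      by (rule disjoint_family_on_mono[OF subset_UNIV disjoint_family_disjointed])
    have "(\<Union>l<k. disjointed C l) = (\<Union>l<k. C l)"
      using finite_UN_disjointed_eq[of C k] by (simp add: atLeast0LessThan)
    then show "card (\<Union>l<k. disjointed C l) = greene xs k" using C(2) by simp
  qed
qed

lemma inj_on_if_antitone:
  fixes f :: "'a::linorder \<Rightarrow> 'b::order"
  assumes "\<And>a b. a \<in> A \<Longrightarrow> b \<in> A \<Longrightarrow> a < b \<Longrightarrow> f b < f a"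
  shows "inj_on f A"
proof (rule inj_onI)
  fix a b assume "a \<in> A" "b \<in> A" "f a = f b"
  then show "a = b" using assms[of a b] assms[of b a] by (cases a b rule: linorder_cases) auto
qed

lemma decr_in_map_rev_iff:
  assumes anti: "\<And>a b. a \<in> set xs \<Longrightarrow> b \<in> set xs \<Longrightarrow> a < b \<Longrightarrow> f b < f a" and V: "V \<subseteq> set xs"
  shows "decr_in (map f (rev xs)) (f ` V) \<longleftrightarrow> decr_in xs V"
proof -
  have inj: "inj_on f (set xs)" using anti by (rule inj_on_if_antitone)
  have prec: "precedes (map f (rev xs)) (f a) (f b) \<longleftrightarrow> precedes xs b a"
    if "a \<in> set xs" "b \<in> set xs" for a b
    using precedes_map[of f "rev xs" b a] inj that by (simp add: precedes_rev)
  have less: "f b < f a \<longleftrightarrow> a < b" if "a \<in> set xs" "b \<in> set xs" for a b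
    using anti[OF that] anti[OF that(2,1)] by (cases a b rule: linorder_cases) auto
  have "decr_in (map f (rev xs)) (f ` V) \<longleftrightarrow>
      (\<forall>a\<in>V. \<forall>b\<in>V. f b < f a \<longrightarrow> precedes (map f (rev xs)) (f a) (f b))"
    using V unfolding decr_in_def by auto
  also have "\<dots> \<longleftrightarrow> (\<forall>a\<in>V. \<forall>b\<in>V. a < b \<longrightarrow> precedes xs b a)"
    using V less prec by (intro ball_cong) (auto simp: subset_iff)
  also have "\<dots> \<longleftrightarrow> decr_in xs V"
    using V unfolding decr_in_def by auto
  finally show ?thesis .
qed

lemma greene_map_rev:
  assumes anti: "\<And>a b. a \<in> set xs \<Longrightarrow> b \<in> set xs \<Longrightarrow> a < b \<Longrightarrow> f b < f a"
  shows "greene (map f (rev xs)) k = greene xs k"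
proof -
  have inj: "inj_on f (set xs)" using anti by (rule inj_on_if_antitone)
  have decr: "decr_in (map f (rev xs)) (f ` V) \<longleftrightarrow> decr_in xs V" if "V \<subseteq> set xs" for V
    using anti that by (rule decr_in_map_rev_iff)
  show ?thesis
  proof (rule antisym)
    obtain C where C: "decr_family xs k C" "card (\<Union>l<k. C l) = greene xs k"
      by (rule greene_attained)
    have "decr_family (map f (rev xs)) k (\<lambda>l. f ` C l)" unfolding decr_family_def
    proof (intro allI impI)
      fix l assume "l < k"
      then have "decr_in xs (C l)" using C(1) unfolding decr_family_def by blast
      then show "decr_in (map f (rev xs)) (f ` C l)" using decr decr_in_def by blast
    qed
    moreover have "card (\<Union>l<k. f ` C l) = card (\<Union>l<k. C l)"
    proof -
      have "(\<Union>l<k. f ` C l) = f ` (\<Union>l<k. C l)" by auto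
      moreover have "inj_on f (\<Union>l<k. C l)"
        using inj decr_family_Union_subset[OF C(1)] by (rule inj_on_subset)
      ultimately show ?thesis by (simp add: card_image)
    qed
    ultimately show "greene xs k \<le> greene (map f (rev xs)) k"
      using C(2) card_Union_le_greene by metis
  next
    obtain D where D: "decr_family (map f (rev xs)) k D" "card (\<Union>l<k. D l) = greene (map f (rev xs)) k"
      by (rule greene_attained)
    define C where "C l = {a \<in> set xs. f a \<in> D l}" for l
    have DC: "D l = f ` C l" if "l < k" for l
      using D(1) that unfolding decr_family_def decr_in_def C_def by auto
    have "decr_family xs k C" unfolding decr_family_def
    proof (intro allI impI)
      fix l assume "l < k"
      have "decr_in (map f (rev xs)) (f ` C l)"
        using D(1) DC[OF \<open>l < k\<close>] unfolding decr_family_def by (metis \<open>l < k\<close>)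
      then show "decr_in xs (C l)" using decr[of "C l"] by (auto simp: C_def)
    qed
    moreover have "card (\<Union>l<k. D l) = card (\<Union>l<k. C l)"
    proof -
      have "(\<Union>l<k. D l) = f ` (\<Union>l<k. C l)" using DC by auto
      moreover have "inj_on f (\<Union>l<k. C l)" using inj by (rule inj_on_subset) (auto simp: C_def)
      ultimately show ?thesis by (simp add: card_image)
    qed
    ultimately show "greene (map f (rev xs)) k \<le> greene xs k"
      using D(2) card_Union_le_greene by metis
  qed
qed

definition between :: "nat \<Rightarrow> nat \<Rightarrow> nat \<Rightarrow> bool" where
  "between y x z \<longleftrightarrow> (x < y \<and> y < z) \<or> (z < y \<and> y < x)"

lemma decr_in_split:
  assumes "distinct (u @ m @ v)" "decr_in (u @ m @ v) S"
  shows "S = (S \<inter> set u) \<union> (S \<inter> set m) \<union> (S \<inter> set v)"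
    and "a \<in> S \<inter> set u \<Longrightarrow> e \<in> S \<inter> set m \<Longrightarrow> e < a"
    and "e \<in> S \<inter> set m \<Longrightarrow> b \<in> S \<inter> set v \<Longrightarrow> b < e"
  using assms(2) decr_in_less[OF assms, of e a] decr_in_less[OF assms, of b e]
  unfolding decr_in_def by auto

lemma decr_in_glue:
  assumes "decr_in (u @ m @ v) P" "decr_in (u @ m @ v) M" "decr_in (u @ m @ v) Q"
    and "P \<subseteq> set u" "M \<subseteq> set m" "Q \<subseteq> set v"
    and "\<And>a b. a \<in> P \<Longrightarrow> b \<in> M \<union> Q \<Longrightarrow> b < a" "\<And>a b. a \<in> M \<Longrightarrow> b \<in> Q \<Longrightarrow> b < a"
  shows "decr_in (u @ m @ v) (P \<union> M \<union> Q)"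
proof -
  have "decr_in (u @ m @ v) (M \<union> Q)"
    by (rule decr_in_Un) (use assms(2,3,5,6,8) in auto)
  then have "decr_in (u @ m @ v) (P \<union> (M \<union> Q))"
    by (rule decr_in_Un[OF assms(1)]) (use assms(4-7) in auto)
  then show ?thesis by (simp add: Un_assoc)
qed

lemma card_le_if_exchange:
  assumes "finite B" "x \<in> A" "y \<in> B" "A - {x} \<subseteq> B - {y}"
  shows "card A \<le> card B"
proof -
  have "finite A" using assms by (metis finite_Diff finite_subset finite_insert insert_Diff)
  then have "card A = Suc (card (A - {x}))" using assms(2) by (rule card.remove)
  also have "\<dots> \<le> Suc (card (B - {y}))" using assms by (intro Suc_le_mono[THEN iffD2] card_mono) auto
  also have "\<dots> = card B" using assms by (metis card.remove)
  finally show ?thesis .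
qed

text \<open>The Knuth move \<open>y x z \<mapsto> y z x\<close> with \<open>z < y < x\<close>: a chain through \<open>x\<close> and \<open>z\<close> can be
  rerouted through \<open>y\<close> instead of \<open>x\<close>, and if \<open>y\<close> already lies on a second chain, the two chains
  can exchange their tails.\<close>

lemma knuth_step1_reroute:
  assumes dist: "distinct (u @ [y,x,z] @ v)" and zyx: "z < y" "y < x"
    and S: "decr_in (u @ [y,x,z] @ v) S" "x \<in> S" "z \<in> S"
  shows "decr_in (u @ [y,z,x] @ v) ((S \<inter> set u) \<union> {y, z} \<union> (S \<inter> set v))"
proof (rule decr_in_glue)
  let ?L = "u @ [y,x,z] @ v"
  note split = decr_in_split[of u "[y,x,z]" v S, OF dist S(1)]
  show "decr_in (u @ [y,z,x] @ v) (S \<inter> set u)" "decr_in (u @ [y,z,x] @ v) (S \<inter> set v)"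
    using decr_in_swap[of "u @ [y]" x z v] decr_in_subset[OF S(1)] dist by auto
  show "decr_in (u @ [y,z,x] @ v) {y, z}" using zyx unfolding decr_in_def by auto
  show "b < a" if "a \<in> S \<inter> set u" "b \<in> {y, z} \<union> S \<inter> set v" for a b
    using that split(2)[of a x] split(3)[of z b] S zyx by fastforce
  show "b < a" if "a \<in> {y, z}" "b \<in> S \<inter> set v" for a b
    using that split(3)[of z b] S zyx by fastforce
qed auto

lemma knuth_step1_exchange:
  assumes dist: "distinct (u @ [y,x,z] @ v)" and zyx: "z < y" "y < x"
    and S: "decr_in (u @ [y,x,z] @ v) S" "x \<in> S" "z \<in> S"
    and T: "decr_in (u @ [y,x,z] @ v) T" "y \<in> T" "x \<notin> T"
  shows "decr_in (u @ [y,z,x] @ v) ((S \<inter> set u) \<union> {x} \<union> (T \<inter> set v))"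
    and "decr_in (u @ [y,z,x] @ v) ((T \<inter> set u) \<union> {y, z} \<union> (S \<inter> set v))"
proof -
  note splitS = decr_in_split[of u "[y,x,z]" v S, OF dist S(1)]
  note splitT = decr_in_split[of u "[y,x,z]" v T, OF dist T(1)]
  have part: "decr_in (u @ [y,z,x] @ v) (S \<inter> set u)" "decr_in (u @ [y,z,x] @ v) (S \<inter> set v)"
    "decr_in (u @ [y,z,x] @ v) (T \<inter> set u)" "decr_in (u @ [y,z,x] @ v) (T \<inter> set v)"
    using decr_in_swap[of "u @ [y]" x z v] decr_in_subset[OF S(1)] decr_in_subset[OF T(1)] dist T(3)
    by auto
  show "decr_in (u @ [y,z,x] @ v) ((S \<inter> set u) \<union> {x} \<union> (T \<inter> set v))"
  proof (rule decr_in_glue)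
    show "b < a" if "a \<in> S \<inter> set u" "b \<in> {x} \<union> T \<inter> set v" for a b
      using that splitS(2)[of a x] splitT(3)[of y b] S T zyx by fastforce
    show "b < a" if "a \<in> {x}" "b \<in> T \<inter> set v" for a b
      using that splitT(3)[of y b] T zyx by fastforce
  qed (use part in \<open>auto simp: decr_in_singleton\<close>)
  show "decr_in (u @ [y,z,x] @ v) ((T \<inter> set u) \<union> {y, z} \<union> (S \<inter> set v))"
  proof (rule decr_in_glue)
    show "decr_in (u @ [y,z,x] @ v) {y, z}" using zyx unfolding decr_in_def by auto
    show "b < a" if "a \<in> T \<inter> set u" "b \<in> {y, z} \<union> S \<inter> set v" for a b
      using that splitT(2)[of a y] splitS(3)[of z b] S T zyx by fastforce
    show "b < a" if "a \<in> {y, z}" "b \<in> S \<inter> set v" for a b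
      using that splitS(3)[of z b] S zyx by fastforce
  qed (use part in auto)
qed

lemma knuth_step1_family_free:
  assumes dist: "distinct (u @ [y,x,z] @ v)" and zyx: "z < y" "y < x"
    and fam: "decr_family (u @ [y,x,z] @ v) k C" and dj: "disjoint_family_on C {..<k}"
    and l: "l < k" "x \<in> C l" "z \<in> C l" and y: "\<forall>m<k. y \<notin> C m"
  shows "\<exists>D. decr_family (u @ [y,z,x] @ v) k D \<and> card (\<Union>l<k. C l) \<le> card (\<Union>l<k. D l)"
proof -
  let ?L = "u @ [y,x,z] @ v" and ?R = "u @ [y,z,x] @ v"
  have decr: "decr_in ?L (C i)" if "i < k" for i using fam that unfolding decr_family_def by blast
  define S where "S = (C l \<inter> set u) \<union> {y, z} \<union> (C l \<inter> set v)"
  define D where "D = C(l := S)"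
  have "decr_family ?R k D" unfolding decr_family_def
  proof (intro allI impI)
    fix i assume "i < k"
    show "decr_in ?R (D i)"
    proof (cases "i = l")
      case True
      then show ?thesis unfolding D_def S_def using knuth_step1_reroute[OF dist zyx decr l(2,3)] l by simp
    next
      case False
      then have "x \<notin> C i" using dj l \<open>i < k\<close> unfolding disjoint_family_on_def by blast
      then show ?thesis unfolding D_def
        using decr_in_swap[of "u @ [y]" x z v "C i"] decr[OF \<open>i < k\<close>] dist False by simp
    qed
  qed
  moreover have "card (\<Union>l<k. C l) \<le> card (\<Union>l<k. D l)"
  proof (rule card_le_if_exchange)
    show "finite (\<Union>l<k. D l)"
      using decr_family_Union_subset[OF \<open>decr_family ?R k D\<close>] by (rule finite_subset) simp
    show "x \<in> (\<Union>l<k. C l)" "y \<in> (\<Union>l<k. D l)" using l by (auto simp: D_def S_def)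
    have "C l \<subseteq> (C l \<inter> set u) \<union> {x, z} \<union> (C l \<inter> set v)"
      using decr_in_split(1)[OF dist decr[OF l(1)]] y l(1) by auto
    then show "(\<Union>l<k. C l) - {x} \<subseteq> (\<Union>l<k. D l) - {y}"
      using y l(1) by (auto simp: D_def S_def)
  qed
  ultimately show ?thesis by blast
qed

lemma knuth_step1_family_chained:
  assumes dist: "distinct (u @ [y,x,z] @ v)" and zyx: "z < y" "y < x"
    and fam: "decr_family (u @ [y,x,z] @ v) k C" and dj: "disjoint_family_on C {..<k}"
    and l: "l < k" "x \<in> C l" "z \<in> C l" and m: "m < k" "y \<in> C m"
  shows "\<exists>D. decr_family (u @ [y,z,x] @ v) k D \<and> card (\<Union>l<k. C l) \<le> card (\<Union>l<k. D l)"
proof -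
  let ?L = "u @ [y,x,z] @ v" and ?R = "u @ [y,z,x] @ v"
  have decr: "decr_in ?L (C i)" if "i < k" for i using fam that unfolding decr_family_def by blast
  have ml: "m \<noteq> l"
    using decr_in_less[OF dist decr[OF l(1)] l(2) _, of y] m zyx by auto
  then have xm: "x \<notin> C m" "z \<notin> C m" using dj l m unfolding disjoint_family_on_def by auto
  note exchange = knuth_step1_exchange[OF dist zyx decr[OF l(1)] l(2,3) decr[OF m(1)] m(2) xm(1)]
  define D where "D = C(l := (C l \<inter> set u) \<union> {x} \<union> (C m \<inter> set v),
                        m := (C m \<inter> set u) \<union> {y, z} \<union> (C l \<inter> set v))"
  have "decr_family ?R k D" unfolding decr_family_def
  proof (intro allI impI)
    fix i assume "i < k"
    show "decr_in ?R (D i)"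
    proof (cases "i = l \<or> i = m")
      case True
      then show ?thesis unfolding D_def using exchange ml by auto
    next
      case False
      then have "x \<notin> C i" using dj l \<open>i < k\<close> unfolding disjoint_family_on_def by blast
      then show ?thesis unfolding D_def
        using decr_in_swap[of "u @ [y]" x z v "C i"] decr[OF \<open>i < k\<close>] dist False by simp
    qed
  qed
  moreover have "(\<Union>l<k. C l) \<subseteq> (\<Union>l<k. D l)"
  proof
    fix c assume "c \<in> (\<Union>l<k. C l)"
    then obtain i where i: "i < k" "c \<in> C i" by blast
    have "y \<notin> C l" using dj l m ml unfolding disjoint_family_on_def by blast
    then have "c \<in> D i \<or> c \<in> D l \<or> c \<in> D m"
      using i xm ml decr_in_split(1)[OF dist decr[OF i(1)]]
      by (cases "i = l \<or> i = m") (auto simp: D_def)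
    then show "c \<in> (\<Union>l<k. D l)" using i l m by blast
  qed
  moreover have "finite (\<Union>l<k. D l)"
    using decr_family_Union_subset[OF \<open>decr_family ?R k D\<close>] by (rule finite_subset) simp
  ultimately show ?thesis by (blast intro: card_mono)
qed

inductive knuth_step :: "nat list \<Rightarrow> nat list \<Rightarrow> bool" where
  step1: "between y x z \<Longrightarrow> knuth_step (u @ [y,x,z] @ v) (u @ [y,z,x] @ v)"
| step2: "between y x z \<Longrightarrow> knuth_step (u @ [x,z,y] @ v) (u @ [z,x,y] @ v)"

lemma between_sym: "between y x z \<Longrightarrow> between y z x"
  unfolding between_def by auto

lemma knuth_step_sym: "knuth_step xs ys \<Longrightarrow> knuth_step ys xs"
proof (induction rule: knuth_step.induct)
  case (step1 y x z u v)
  then show ?case using knuth_step.step1[of y z x u v] between_sym by blast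
next
  case (step2 y x z u v)
  then show ?case using knuth_step.step2[of y z x u v] between_sym by blast
qed

lemma knuth_step_set: "knuth_step xs ys \<Longrightarrow> set xs = set ys \<and> length xs = length ys \<and> (distinct xs \<longleftrightarrow> distinct ys)"
  by (induction rule: knuth_step.induct) auto

lemma knuth_step_distinct: "knuth_step xs ys \<Longrightarrow> distinct xs \<Longrightarrow> distinct ys"
  using knuth_step_set by blast

lemma greene_le_knuth_step1:
  assumes dist: "distinct (u @ [y,x,z] @ v)" and btw: "between y x z"
  shows "greene (u @ [y,x,z] @ v) k \<le> greene (u @ [y,z,x] @ v) k"
proof -
  let ?L = "u @ [y,x,z] @ v" and ?R = "u @ [y,z,x] @ v"
  obtain C where C: "decr_family ?L k C" "disjoint_family_on C {..<k}" "card (\<Union>l<k. C l) = greene ?L k"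
    by (rule greene_attained)
  have "\<exists>D. decr_family ?R k D \<and> card (\<Union>l<k. C l) \<le> card (\<Union>l<k. D l)"
  proof (cases "\<exists>l<k. x \<in> C l \<and> z \<in> C l")
    case False
    have "decr_family ?R k C" unfolding decr_family_def
    proof (intro allI impI)
      fix l assume "l < k"
      then show "decr_in ?R (C l)"
        using C(1) decr_in_swap[of "u @ [y]" x z v "C l"] dist False unfolding decr_family_def by simp
    qed
    then show ?thesis by blast
  next
    case True
    then obtain l where l: "l < k" "x \<in> C l" "z \<in> C l" by blast
    have "z < x" using decr_in_less[OF dist _ l(3) l(2)] C(1) l(1) unfolding decr_family_def by simp
    then have zyx: "z < y" "y < x" using btw unfolding between_def by auto
    show ?thesis
    proof (cases "\<exists>m<k. y \<in> C m")
      case False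
      then show ?thesis using knuth_step1_family_free[OF dist zyx C(1,2) l] by blast
    next
      case True
      then obtain m where "m < k" "y \<in> C m" by blast
      then show ?thesis using knuth_step1_family_chained[OF dist zyx C(1,2) l] by blast
    qed
  qed
  then show ?thesis using C(3) card_Union_le_greene by (metis le_trans)
qed

text \<open>The second Knuth move is the first one read backwards in the complemented alphabet.\<close>

lemma greene_le_knuth_step2:
  assumes dist: "distinct (u @ [x,z,y] @ v)" and btw: "between y x z"
  shows "greene (u @ [x,z,y] @ v) k \<le> greene (u @ [z,x,y] @ v) k"
proof -
  let ?L = "u @ [x,z,y] @ v" and ?R = "u @ [z,x,y] @ v"
  define f where "f a = Max (set ?L) - a" for a
  have anti: "f b < f a" if "a \<in> set ?L" "b \<in> set ?L" "a < b" for a b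
    using that Max_ge[of "set ?L" b] unfolding f_def by (intro diff_less_mono2) auto
  have "greene ?L k = greene (map f (rev v) @ [f y, f z, f x] @ map f (rev u)) k"
    using greene_map_rev[of ?L f k, OF anti] by simp
  also have "\<dots> \<le> greene (map f (rev v) @ [f y, f x, f z] @ map f (rev u)) k"
  proof (rule greene_le_knuth_step1)
    have "inj_on f (set ?L)" using anti by (rule inj_on_if_antitone)
    then have "distinct (map f (rev ?L))" using dist by (simp only: distinct_map distinct_rev set_rev)
    then show "distinct (map f (rev v) @ [f y, f z, f x] @ map f (rev u))" by simp
    show "between (f y) (f z) (f x)" using btw anti unfolding between_def by auto
  qed
  also have "\<dots> = greene ?R k"
  proof -
    have "f b < f a" if "a \<in> set ?R" "b \<in> set ?R" "a < b" for a b using anti that by auto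
    then show ?thesis using greene_map_rev[of ?R f k] by simp
  qed
  finally show ?thesis .
qed

lemma greene_le_knuth_step: "knuth_step xs ys \<Longrightarrow> distinct xs \<Longrightarrow> greene xs k \<le> greene ys k"
proof (induction rule: knuth_step.induct)
  case (step1 y x z u v)
  then show ?case by (intro greene_le_knuth_step1)
next
  case (step2 y x z u v)
  then show ?case by (intro greene_le_knuth_step2)
qed

lemma greene_knuth_step: "knuth_step xs ys \<Longrightarrow> distinct xs \<Longrightarrow> greene xs k = greene ys k"
  by (meson antisym knuth_step_distinct greene_le_knuth_step knuth_step_sym)

abbreviation knuth_equiv :: "nat list \<Rightarrow> nat list \<Rightarrow> bool" where
  "knuth_equiv \<equiv> knuth_step\<^sup>*\<^sup>*"

lemma knuth_equiv_distinct: "knuth_equiv xs ys \<Longrightarrow> distinct xs \<Longrightarrow> distinct ys"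
  by (induction rule: rtranclp_induct) (auto dest: knuth_step_distinct)

lemma greene_knuth_equiv: "knuth_equiv xs ys \<Longrightarrow> distinct xs \<Longrightarrow> greene xs k = greene ys k"
  by (induction rule: rtranclp_induct) (auto dest: greene_knuth_step knuth_equiv_distinct)

lemma knuth_step_append_cong: "knuth_step xs ys \<Longrightarrow> knuth_step (a @ xs @ b) (a @ ys @ b)"
proof (induction rule: knuth_step.induct)
  case (step1 y x z u v)
  then show ?case using knuth_step.step1[of y x z "a @ u" "v @ b"] by simp
next
  case (step2 y x z u v)
  then show ?case using knuth_step.step2[of y x z "a @ u" "v @ b"] by simp
qed

lemma knuth_equiv_append_cong: "knuth_equiv xs ys \<Longrightarrow> knuth_equiv (a @ xs @ b) (a @ ys @ b)"
  by (induction rule: rtranclp_induct) (auto intro: rtranclp.rtrancl_into_rtrancl knuth_step_append_cong)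

lemma knuth_equiv_append: "knuth_equiv xs ys \<Longrightarrow> knuth_equiv xs' ys' \<Longrightarrow> knuth_equiv (xs @ xs') (ys @ ys')"
proof -
  assume a: "knuth_equiv xs ys" "knuth_equiv xs' ys'"
  have "knuth_equiv ([] @ xs @ xs') ([] @ ys @ xs')" using knuth_equiv_append_cong[OF a(1)] by blast
  moreover have "knuth_equiv (ys @ xs' @ []) (ys @ ys' @ [])" using knuth_equiv_append_cong[OF a(2)] by blast
  ultimately show ?thesis by simp
qed

lemma knuth_equiv_sym: "knuth_equiv xs ys \<Longrightarrow> knuth_equiv ys xs"
  by (induction rule: rtranclp_induct) (auto intro: converse_rtranclp_into_rtranclp knuth_step_sym)

lemma knuth_equiv_step1: "between y x z \<Longrightarrow> knuth_equiv (u @ [y,x,z] @ v) (u @ [y,z,x] @ v)"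
  by (intro r_into_rtranclp knuth_step.step1)

lemma knuth_equiv_step2: "between y x z \<Longrightarrow> knuth_equiv (u @ [x,z,y] @ v) (u @ [z,x,y] @ v)"
  by (intro r_into_rtranclp knuth_step.step2)

lemma knuth_equiv_move_after_head:
  assumes "sorted_wrt (>) (b # S)" "b < a"
  shows "knuth_equiv (b # S @ [a]) (b # a # S)"
  using assms
proof (induction S rule: rev_induct)
  case Nil
  then show ?case by simp
next
  case (snoc s S)
  obtain W y where Wy: "b # S = W @ [y]" by (cases "b # S" rule: rev_exhaust) auto
  have "y \<in> set (b # S)" using Wy by simp
  moreover have "\<forall>x\<in>set (b # S). s < x" using snoc.prems(1)
    by (simp add: sorted_wrt_append)
  ultimately have sy: "s < y" by blast
  have ya: "y < a"
  proof -
    have "y = b \<or> y \<in> set S" using \<open>y \<in> set (b # S)\<close> by auto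
    then show ?thesis using snoc.prems by (auto simp: sorted_wrt_append)
  qed
  have "knuth_equiv (W @ [y,s,a] @ []) (W @ [y,a,s] @ [])"
    by (rule knuth_equiv_step1) (simp add: between_def sy ya)
  then have 1: "knuth_equiv (b # (S @ [s]) @ [a]) (b # S @ [a] @ [s])" using Wy
    by (metis append.assoc append_Cons append_Nil append_self_conv)
  have "sorted_wrt (>) (b # S)" using snoc.prems by (simp add: sorted_wrt_append)
  then have "knuth_equiv (b # S @ [a]) (b # a # S)" using snoc.IH snoc.prems by simp
  then have "knuth_equiv ([] @ (b # S @ [a]) @ [s]) ([] @ (b # a # S) @ [s])" by (rule knuth_equiv_append_cong)
  then have 2: "knuth_equiv (b # S @ [a] @ [s]) (b # a # S @ [s])" by simp
  show ?case using 1 2 by simp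
qed

lemma knuth_equiv_move_to_front:
  assumes "sorted_wrt (>) (L @ [c])" "b < c"
  shows "knuth_equiv (L @ [b, c]) (b # L @ [c])"
  using assms
proof (induction L arbitrary: c rule: rev_induct)
  case Nil
  then show ?case by simp
next
  case (snoc l L)
  have lc: "c < l" using snoc.prems(1) by (simp add: sorted_wrt_append)
  have "knuth_equiv (L @ [l,b,c] @ []) (L @ [b,l,c] @ [])"
    by (rule knuth_equiv_step2) (simp add: between_def lc snoc.prems(2))
  then have 1: "knuth_equiv ((L @ [l]) @ [b, c]) ((L @ [b, l]) @ [c])" by simp
  have "sorted_wrt (>) (L @ [l])" using snoc.prems(1) by (simp add: sorted_wrt_append)
  then have "knuth_equiv (L @ [b, l]) (b # L @ [l])" using snoc.IH snoc.prems lc by simp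
  then have "knuth_equiv ([] @ (L @ [b, l]) @ [c]) ([] @ (b # L @ [l]) @ [c])" by (rule knuth_equiv_append_cong)
  then show ?case using 1 by (simp add: rtranclp_trans)
qed

definition bump_pos :: "nat list \<Rightarrow> nat \<Rightarrow> nat" where
  "bump_pos R a = length (takeWhile (\<lambda>x. a < x) R)"

lemma bump_pos_le: "bump_pos R a \<le> length R"
  unfolding bump_pos_def by (rule length_takeWhile_le)

lemma bump_pos_before: "i < bump_pos R a \<Longrightarrow> a < R ! i"
  unfolding bump_pos_def by (metis nth_mem set_takeWhileD takeWhile_nth)

lemma bump_pos_at: "bump_pos R a < length R \<Longrightarrow> \<not> a < R ! bump_pos R a"
  unfolding bump_pos_def by (rule nth_length_takeWhile)

lemma sorted_wrt_greater_nth: "sorted_wrt (>) R \<Longrightarrow> i < j \<Longrightarrow> j < length R \<Longrightarrow> R ! j < R ! i"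
  using sorted_wrt_nth_less by fastforce

lemma bump_pos_after:
  assumes "sorted_wrt (>) R" "a \<notin> set R" "bump_pos R a \<le> i" "i < length R"
  shows "R ! i < a"
proof -
  have q: "bump_pos R a < length R" using assms by simp
  have "R ! bump_pos R a < a" using bump_pos_at[OF q] assms(2) q by (metis linorder_neqE_nat nth_mem)
  then show ?thesis using assms sorted_wrt_greater_nth[OF assms(1), of "bump_pos R a" i]
    by (cases "bump_pos R a = i") auto
qed

lemma tab_ins_append:
  assumes "sorted_wrt (>) R" "a \<notin> set R" "bump_pos R a = length R"
  shows "tab_ins (R # T) a = (R @ [a]) # T"
proof -
  have "\<forall>x\<in>set R. a \<le> x" using bump_pos_before[of _ R a] assms(3)
    by (metis in_set_conv_nth less_imp_le_nat)
  then show ?thesis by simp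
qed

lemma tab_ins_bump:
  assumes "sorted_wrt (>) R" "distinct R" "a \<notin> set R" "bump_pos R a < length R"
  shows "tab_ins (R # T) a = R[bump_pos R a := a] # tab_ins T (R ! bump_pos R a)"
proof -
  let ?q = "bump_pos R a"
  have lt: "R ! ?q < a" using bump_pos_after[OF assms(1,3)] assms(4) by simp
  then have nall: "\<not> (\<forall>x\<in>set R. a \<le> x)" using assms(4) by (meson leD nth_mem)
  have mx: "Max {x \<in> set R. x < a} = R ! ?q"
  proof (rule Max_eqI)
    show "finite {x \<in> set R. x < a}" by simp
    show "R ! ?q \<in> {x \<in> set R. x < a}" using lt assms(4) by simp
    fix y assume "y \<in> {x \<in> set R. x < a}"
    then obtain i where i: "i < length R" "R ! i = y" "y < a" by (auto simp: in_set_conv_nth)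
    have "\<not> i < ?q" using bump_pos_before[of i R a] i by auto
    then show "y \<le> R ! ?q" using i sorted_wrt_greater_nth[OF assms(1), of ?q i]
      by (cases "i = ?q") auto
  qed
  have "map (\<lambda>x. if x = R ! ?q then a else x) R = R[?q := a]"
  proof (rule nth_equalityI)
    fix i assume "i < length (map (\<lambda>x. if x = R ! ?q then a else x) R)"
    then have i: "i < length R" by simp
    have "R ! i = R ! ?q \<longleftrightarrow> i = ?q" using assms(2,4) i nth_eq_iff_index_eq by blast
    then show "map (\<lambda>x. if x = R ! ?q then a else x) R ! i = R[?q := a] ! i" using i by simp
  qed simp
  moreover have "tab_ins (R # T) a = (let step2 = Max {x \<in> set R. x < a}
      in map (\<lambda>x. if x = step2 then a else x) R # tab_ins T step2)"
    using nall by (simp only: tab_ins.simps if_False)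
  ultimately show ?thesis using mx by (simp add: Let_def)
qed

lemma knuth_equiv_row_bump:
  assumes "sorted_wrt (>) R" "a \<notin> set R" "bump_pos R a < length R"
  shows "knuth_equiv (R @ [a]) (R ! bump_pos R a # R[bump_pos R a := a])"
proof -
  let ?q = "bump_pos R a"
  define L where "L = take ?q R"
  define b where "b = R ! ?q"
  define S where "S = drop (Suc ?q) R"
  have R: "R = L @ b # S" unfolding L_def b_def S_def using assms(3) by (simp add: id_take_nth_drop)
  have R': "R[?q := a] = L @ a # S" unfolding L_def S_def using assms(3)
    by (simp add: upd_conv_take_nth_drop)
  have ba: "b < a" unfolding b_def using bump_pos_after[OF assms(1,2)] assms(3) by simp
  have La: "\<forall>x\<in>set L. a < x" unfolding L_def bump_pos_def by (metis set_takeWhileD takeWhile_eq_take)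
  have sbS: "sorted_wrt (>) (b # S)" using assms(1) R by (simp add: sorted_wrt_append)
  have sL: "sorted_wrt (>) (L @ [a])" using assms(1) R La by (simp add: sorted_wrt_append)
  have "knuth_equiv (b # S @ [a]) (b # a # S)" by (rule knuth_equiv_move_after_head[OF sbS ba])
  then have 1: "knuth_equiv (L @ (b # S @ [a]) @ []) (L @ (b # a # S) @ [])" by (rule knuth_equiv_append_cong)
  have "knuth_equiv (L @ [b, a]) (b # L @ [a])" by (rule knuth_equiv_move_to_front[OF sL ba])
  then have 2: "knuth_equiv ([] @ (L @ [b, a]) @ S) ([] @ (b # L @ [a]) @ S)" by (rule knuth_equiv_append_cong)
  have "knuth_equiv (R @ [a]) (L @ b # a # S)" using 1 R by simp
  also have "knuth_equiv (L @ b # a # S) (b # L @ a # S)" using 2 by simp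
  finally show ?thesis using R' b_def by simp
qed

definition reading :: "nat list list \<Rightarrow> nat list" where
  "reading P = concat (rev P)"

definition rows_decr :: "nat list list \<Rightarrow> bool" where
  "rows_decr P \<longleftrightarrow> (\<forall>R\<in>set P. R \<noteq> [] \<and> sorted_wrt (>) R)"

lemma knuth_equiv_reading_tab_ins:
  assumes "rows_decr P" "distinct (concat P)" "a \<notin> set (concat P)"
  shows "knuth_equiv (reading (tab_ins P a)) (reading P @ [a])"
  using assms
proof (induction P arbitrary: a)
  case Nil
  then show ?case by (simp add: reading_def)
next
  case (Cons R T)
  have sR: "sorted_wrt (>) R" and dR: "distinct R" and aR: "a \<notin> set R"
    using Cons.prems by (auto simp: rows_decr_def)
  show ?case
  proof (cases "bump_pos R a = length R")
    case True
    then show ?thesis using tab_ins_append[OF sR aR True] by (simp add: reading_def)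
  next
    case False
    then have q: "bump_pos R a < length R" using bump_pos_le[of R a] by simp
    let ?b = "R ! bump_pos R a"
    have bT: "?b \<notin> set (concat T)" using Cons.prems(2) q
      by (auto dest: nth_mem)
    have IH: "knuth_equiv (reading (tab_ins T ?b)) (reading T @ [?b])"
      using Cons.IH Cons.prems bT by (auto simp: rows_decr_def)
    have "knuth_equiv (reading (tab_ins (R # T) a)) (reading (tab_ins T ?b) @ R[bump_pos R a := a])"
      using tab_ins_bump[OF sR dR aR q] by (simp add: reading_def)
    also have "knuth_equiv \<dots> ((reading T @ [?b]) @ R[bump_pos R a := a])"
      using knuth_equiv_append[OF IH] by blast
    also have "knuth_equiv \<dots> (reading T @ (R @ [a]))"
      using knuth_equiv_append_cong[OF knuth_equiv_sym[OF knuth_equiv_row_bump[OF sR aR q]], of "reading T" "[]"] by simp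
    finally show ?thesis by (simp add: reading_def)
  qed
qed

definition cols_decr :: "nat list list \<Rightarrow> bool" where
  "cols_decr P \<longleftrightarrow> (\<forall>i. Suc i < length P \<longrightarrow> length (P ! Suc i) \<le> length (P ! i) \<and>
      (\<forall>c < length (P ! Suc i). P ! Suc i ! c < P ! i ! c))"

lemma cols_decr_Nil[simp]: "cols_decr []" and cols_decr_single[simp]: "cols_decr [X]"
  unfolding cols_decr_def by auto

lemma cols_decr_Cons2: "cols_decr (X # Y # Z) \<longleftrightarrow>
   (length Y \<le> length X \<and> (\<forall>c<length Y. Y ! c < X ! c)) \<and> cols_decr (Y # Z)"
proof
  assume A: "cols_decr (X # Y # Z)"
  have "length Y \<le> length X \<and> (\<forall>c<length Y. Y ! c < X ! c)"
    using A[unfolded cols_decr_def, rule_format, of 0] by simp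
  moreover have "cols_decr (Y # Z)" unfolding cols_decr_def
  proof (intro allI impI)
    fix i assume "Suc i < length (Y # Z)"
    then show "length ((Y # Z) ! Suc i) \<le> length ((Y # Z) ! i) \<and>
      (\<forall>c<length ((Y # Z) ! Suc i). (Y # Z) ! Suc i ! c < (Y # Z) ! i ! c)"
      using A[unfolded cols_decr_def, rule_format, of "Suc i"] by simp
  qed
  ultimately show "(length Y \<le> length X \<and> (\<forall>c<length Y. Y ! c < X ! c)) \<and> cols_decr (Y # Z)" by blast
next
  assume B: "(length Y \<le> length X \<and> (\<forall>c<length Y. Y ! c < X ! c)) \<and> cols_decr (Y # Z)"
  show "cols_decr (X # Y # Z)" unfolding cols_decr_def
  proof (intro allI impI)
    fix i assume i: "Suc i < length (X # Y # Z)"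
    show "length ((X # Y # Z) ! Suc i) \<le> length ((X # Y # Z) ! i) \<and>
      (\<forall>c<length ((X # Y # Z) ! Suc i). (X # Y # Z) ! Suc i ! c < (X # Y # Z) ! i ! c)"
    proof (cases i)
      case 0
      then show ?thesis using B by simp
    next
      case (Suc j)
      then show ?thesis using B[THEN conjunct2, unfolded cols_decr_def, rule_format, of j] i by simp
    qed
  qed
qed

definition ins_row :: "nat list \<Rightarrow> nat \<Rightarrow> nat list" where
  "ins_row R a = (if bump_pos R a = length R then R @ [a] else R[bump_pos R a := a])"

lemma bump_split:
  assumes "sorted_wrt (>) R" "a \<notin> set R" "bump_pos R a < length R"
  obtains L b S where "R = L @ b # S" "R[bump_pos R a := a] = L @ a # S"
    "\<forall>x\<in>set L. a < x" "\<forall>x\<in>set S. x < b" "b < a" "length L = bump_pos R a" "R ! bump_pos R a = b"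
proof -
  let ?q = "bump_pos R a"
  define L where "L = take ?q R"
  define b where "b = R ! ?q"
  define S where "S = drop (Suc ?q) R"
  have R: "R = L @ b # S" unfolding L_def b_def S_def using assms(3) by (simp add: id_take_nth_drop)
  have R': "R[?q := a] = L @ a # S" unfolding L_def S_def using assms(3)
    by (simp add: upd_conv_take_nth_drop)
  have ba: "b < a" unfolding b_def using bump_pos_after[OF assms(1,2)] assms(3) by simp
  have La: "\<forall>x\<in>set L. a < x" unfolding L_def bump_pos_def by (metis set_takeWhileD takeWhile_eq_take)
  have "sorted_wrt (>) (L @ b # S)" using assms(1) R by simp
  then have Sb: "\<forall>x\<in>set S. x < b" by (simp add: sorted_wrt_append)
  have len: "length L = ?q" unfolding L_def using assms(3) by simp
  show ?thesis by (rule that[OF R R' La Sb ba len b_def[symmetric]])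
qed

lemma ins_row_sorted:
  assumes "sorted_wrt (>) R" "a \<notin> set R"
  shows "sorted_wrt (>) (ins_row R a)"
proof (cases "bump_pos R a = length R")
  case True
  have "\<forall>x\<in>set R. a < x" using bump_pos_before[of _ R a] True by (metis in_set_conv_nth)
  then show ?thesis using True assms by (simp add: ins_row_def sorted_wrt_append)
next
  case False
  then have q: "bump_pos R a < length R" using bump_pos_le[of R a] by simp
  obtain L b S where LS: "R = L @ b # S" "R[bump_pos R a := a] = L @ a # S"
    "\<forall>x\<in>set L. a < x" "\<forall>x\<in>set S. x < b" "b < a" "length L = bump_pos R a" "R ! bump_pos R a = b"
    by (rule bump_split[OF assms q])
  have "sorted_wrt (>) (L @ b # S)" using assms(1) LS(1) by simp
  then have "sorted_wrt (>) (L @ a # S)" using LS(3,4,5) by (auto simp: sorted_wrt_append)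
  then show ?thesis using LS(2) False by (simp add: ins_row_def)
qed

lemma tab_ins_Cons:
  assumes "sorted_wrt (>) R" "distinct R" "a \<notin> set R"
  shows "tab_ins (R # T) a = (if bump_pos R a = length R then (R @ [a]) # T
     else ins_row R a # tab_ins T (R ! bump_pos R a))"
  using tab_ins_append[OF assms(1,3)] tab_ins_bump[OF assms] bump_pos_le[of R a]
  by (auto simp: ins_row_def)

lemma tab_ins_invariants:
  assumes "rows_decr P" "distinct (concat P)" "a \<notin> set (concat P)"
  shows "rows_decr (tab_ins P a) \<and> distinct (concat (tab_ins P a)) \<and>
    set (concat (tab_ins P a)) = insert a (set (concat P)) \<and> tab_ins P a \<noteq> [] \<and>
    hd (tab_ins P a) = (case P of [] \<Rightarrow> [a] | R # _ \<Rightarrow> ins_row R a)"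
  using assms
proof (induction P arbitrary: a)
  case Nil
  then show ?case by (simp add: rows_decr_def)
next
  case (Cons R T)
  have sR: "sorted_wrt (>) R" and dR: "distinct R" and aR: "a \<notin> set R"
    using Cons.prems by (auto simp: rows_decr_def)
  have rT: "rows_decr T" using Cons.prems by (simp add: rows_decr_def)
  show ?case
  proof (cases "bump_pos R a = length R")
    case True
    have "sorted_wrt (>) (R @ [a])" using ins_row_sorted[OF sR aR] True by (simp add: ins_row_def)
    then show ?thesis using tab_ins_append[OF sR aR True] Cons.prems True
      by (auto simp: rows_decr_def ins_row_def)
  next
    case False
    then have q: "bump_pos R a < length R" using bump_pos_le[of R a] by simp
    obtain L b S where LS: "R = L @ b # S" "R[bump_pos R a := a] = L @ a # S"
      "\<forall>x\<in>set L. a < x" "\<forall>x\<in>set S. x < b" "b < a" "length L = bump_pos R a" "R ! bump_pos R a = b"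
      by (rule bump_split[OF sR aR q])
    have bT: "b \<notin> set (concat T)" using Cons.prems(2) q LS(7) by (auto dest: nth_mem)
    have IH: "rows_decr (tab_ins T b) \<and> distinct (concat (tab_ins T b)) \<and>
      set (concat (tab_ins T b)) = insert b (set (concat T))"
      using Cons.IH[OF rT _ bT] Cons.prems by auto
    have eq: "tab_ins (R # T) a = ins_row R a # tab_ins T b"
      using tab_ins_Cons[OF sR dR aR] False LS(7) by simp
    have ir: "ins_row R a = L @ a # S" using False LS(2) by (simp add: ins_row_def)
    have srt: "sorted_wrt (>) (ins_row R a)" by (rule ins_row_sorted[OF sR aR])
    have dRR: "distinct (L @ b # S)" using dR LS(1) by simp
    have "distinct (concat (R # T))" using Cons.prems by simp
    then have disj: "set (L @ b # S) \<inter> set (concat T) = {}" using LS(1) by auto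
    have aLS: "a \<notin> set (L @ b # S)" using aR LS(1) by simp
    have "distinct (ins_row R a @ concat (tab_ins T b))"
      using dRR IH Cons.prems(3) disj aLS ir by auto
    moreover have "set (concat (tab_ins (R # T) a)) = insert a (set (concat (R # T)))"
      using eq IH ir LS(1) by auto
    ultimately show ?thesis using eq IH srt ir
      by (auto simp: rows_decr_def)
  qed
qed

lemma ins_row_below:
  assumes sR: "sorted_wrt (>) R" and sR1: "sorted_wrt (>) R1" and aR: "a \<notin> set R"
    and q: "bump_pos R a < length R" and bR1: "R ! bump_pos R a \<notin> set R1"
    and len: "length R1 \<le> length R" and ent: "\<forall>c<length R1. R1 ! c < R ! c"
  shows "length (ins_row R1 (R ! bump_pos R a)) \<le> length (ins_row R a) \<and>
    (\<forall>c<length (ins_row R1 (R ! bump_pos R a)). ins_row R1 (R ! bump_pos R a) ! c < ins_row R a ! c)"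
proof -
  let ?q = "bump_pos R a"
  let ?b = "R ! ?q"
  let ?q1 = "bump_pos R1 ?b"
  have ba: "?b < a" using bump_pos_after[OF sR aR] q by simp
  have IR: "ins_row R a = R[?q := a]" using q by (simp add: ins_row_def)
  have q1q: "?q1 \<le> ?q"
  proof (rule ccontr)
    assume "\<not> ?q1 \<le> ?q"
    then have "?q < length R1" "?b < R1 ! ?q" using bump_pos_le[of R1 ?b] bump_pos_before[of ?q R1 ?b] by auto
    then show False using ent by force
  qed
  have "ins_row R1 ?b ! c < R[?q := a] ! c" if c: "c < length (ins_row R1 ?b)" for c
  proof -
    have v: "ins_row R1 ?b ! c = (if c = ?q1 then ?b else R1 ! c)" "c \<noteq> ?q1 \<Longrightarrow> c < length R1"
      using c bump_pos_le[of R1 ?b] by (auto simp: ins_row_def nth_append split: if_splits)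
    have "?b < R ! c" if "c < ?q" using sorted_wrt_greater_nth[OF sR that q] .
    then show ?thesis using v ent ba q q1q len by (cases "c = ?q") (auto simp: le_less)
  qed
  moreover have "length (ins_row R1 ?b) \<le> length R" using q1q q len by (auto simp: ins_row_def)
  ultimately show ?thesis using IR by simp
qed

lemma cols_decr_tab_ins:
  assumes "rows_decr P" "distinct (concat P)" "a \<notin> set (concat P)" "cols_decr P"
  shows "cols_decr (tab_ins P a)"
  using assms
proof (induction P arbitrary: a)
  case Nil
  then show ?case by simp
next
  case (Cons R T)
  have sR: "sorted_wrt (>) R" and dR: "distinct R" and aR: "a \<notin> set R"
    using Cons.prems by (auto simp: rows_decr_def)
  have rT: "rows_decr T" using Cons.prems by (simp add: rows_decr_def)
  have cT: "cols_decr T" using Cons.prems(4) by (cases T) (auto simp: cols_decr_Cons2)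
  show ?case
  proof (cases "bump_pos R a = length R")
    case True
    then have "tab_ins (R # T) a = (R @ [a]) # T" using tab_ins_Cons[OF sR dR aR] by simp
    then show ?thesis using Cons.prems(4) by (cases T) (auto simp: cols_decr_Cons2 nth_append)
  next
    case False
    then have q: "bump_pos R a < length R" using bump_pos_le[of R a] by simp
    let ?b = "R ! bump_pos R a"
    define R1 where "R1 = (case T of [] \<Rightarrow> [] | R1 # _ \<Rightarrow> R1)"
    have bT: "?b \<notin> set (concat T)" using Cons.prems(2) q by (auto dest: nth_mem)
    have IH: "cols_decr (tab_ins T ?b)" using Cons.IH[OF rT _ bT cT] Cons.prems by simp
    have B: "tab_ins T ?b \<noteq> [] \<and> hd (tab_ins T ?b) = (case T of [] \<Rightarrow> [?b] | R1 # _ \<Rightarrow> ins_row R1 ?b)"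
      using tab_ins_invariants[OF rT _ bT] Cons.prems by simp
    then obtain Z where HZ: "tab_ins T ?b = ins_row R1 ?b # Z"
      unfolding R1_def by (cases "tab_ins T ?b"; cases T) (auto simp: ins_row_def bump_pos_def)
    have "sorted_wrt (>) R1" "?b \<notin> set R1" "length R1 \<le> length R" "\<forall>c<length R1. R1 ! c < R ! c"
      using rT bT Cons.prems(4) unfolding R1_def
      by (cases T; simp add: rows_decr_def cols_decr_Cons2)+
    then have "length (ins_row R1 ?b) \<le> length (ins_row R a) \<and>
        (\<forall>c<length (ins_row R1 ?b). ins_row R1 ?b ! c < ins_row R a ! c)"
      using ins_row_below[OF sR _ aR q] by blast
    moreover have "tab_ins (R # T) a = ins_row R a # tab_ins T ?b"
      using tab_ins_Cons[OF sR dR aR] False by simp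
    ultimately show ?thesis using HZ IH by (simp add: cols_decr_Cons2)
  qed
qed

definition ins_tableau :: "nat list \<Rightarrow> nat list list" where
  "ins_tableau w = foldl tab_ins [] w"

lemma ins_tableau_props:
  assumes "distinct w"
  shows "rows_decr (ins_tableau w) \<and> distinct (concat (ins_tableau w)) \<and> set (concat (ins_tableau w)) = set w \<and>
    cols_decr (ins_tableau w) \<and> knuth_equiv (reading (ins_tableau w)) w"
  using assms
proof (induction w rule: rev_induct)
  case Nil
  then show ?case by (simp add: ins_tableau_def rows_decr_def reading_def)
next
  case (snoc a w)
  have IH: "rows_decr (ins_tableau w) \<and> distinct (concat (ins_tableau w)) \<and> set (concat (ins_tableau w)) = set w \<and>
    cols_decr (ins_tableau w) \<and> knuth_equiv (reading (ins_tableau w)) w" using snoc by simp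
  have aw: "a \<notin> set (concat (ins_tableau w))" using IH snoc.prems by simp
  have eq: "ins_tableau (w @ [a]) = tab_ins (ins_tableau w) a" by (simp add: ins_tableau_def)
  have k: "knuth_equiv (reading (tab_ins (ins_tableau w) a)) (reading (ins_tableau w) @ [a])"
    using knuth_equiv_reading_tab_ins aw IH by blast
  have "knuth_equiv (reading (ins_tableau w) @ [a]) (w @ [a])" using knuth_equiv_append IH by blast
  then have "knuth_equiv (reading (tab_ins (ins_tableau w) a)) (w @ [a])" using k by (rule rtranclp_trans[rotated])
  then show ?case using eq tab_ins_invariants[OF _ _ aw] cols_decr_tab_ins[OF _ _ aw] IH by auto
qed

lemma cols_decr_nth:
  assumes "cols_decr P" "i < i'" "i' < length P" "c < length (P ! i')"
  shows "c < length (P ! i) \<and> P ! i' ! c < P ! i ! c"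
  using assms(2-4)
proof (induction i' arbitrary: c)
  case 0
  then show ?case by simp
next
  case (Suc j)
  have S: "length (P ! Suc j) \<le> length (P ! j) \<and> (\<forall>c<length (P ! Suc j). P ! Suc j ! c < P ! j ! c)"
    using assms(1) Suc.prems unfolding cols_decr_def by blast
  show ?case
  proof (cases "i = j")
    case True
    then show ?thesis using S Suc.prems by auto
  next
    case False
    then have "i < j" using Suc.prems by simp
    moreover have "c < length (P ! j)" using S Suc.prems by simp
    ultimately have "c < length (P ! i) \<and> P ! j ! c < P ! i ! c" using Suc.IH Suc.prems by simp
    then show ?thesis using S Suc.prems by force
  qed
qed

lemma reading_split:
  assumes "i < length P"
  shows "reading P = concat (rev (drop (Suc i) P)) @ P ! i @ concat (rev (take i P))"
proof -
  have "P = take i P @ [P ! i] @ drop (Suc i) P" using assms by (simp add: id_take_nth_drop)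
  then have "rev P = rev (take i P @ [P ! i] @ drop (Suc i) P)" by (rule arg_cong[where f=rev])
  also have "\<dots> = rev (drop (Suc i) P) @ [P ! i] @ rev (take i P)" by simp
  finally have "rev P = rev (drop (Suc i) P) @ [P ! i] @ rev (take i P)" .
  then show ?thesis unfolding reading_def by simp
qed

lemma precedes_reading:
  assumes "i < i'" "i' < length P" "c < length (P ! i)" "c' < length (P ! i')"
  shows "precedes (reading P) (P ! i' ! c') (P ! i ! c)"
proof -
  have l: "i' - Suc i < length (drop (Suc i) P)" using assms by simp
  have "drop (Suc i) P ! (i' - Suc i) = P ! i'" using assms by simp
  then have "P ! i' \<in> set (drop (Suc i) P)" using nth_mem[OF l] by simp
  moreover have "P ! i' ! c' \<in> set (P ! i')" using assms(4) by simp
  ultimately have "P ! i' ! c' \<in> set (concat (rev (drop (Suc i) P)))" by auto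
  moreover have "P ! i ! c \<in> set (P ! i @ concat (rev (take i P)))" using assms(3) by simp
  ultimately show ?thesis using reading_split[of i P] assms by (simp only: precedes_append) simp
qed

lemma precedes_if_sorted_wrt_greater: "sorted_wrt (>) R \<Longrightarrow> a \<in> set R \<Longrightarrow> b \<in> set R \<Longrightarrow> a < b \<Longrightarrow> precedes R b a"
  by (induction R) auto

lemma decr_in_reading_row:
  assumes "rows_decr P" "i < length P"
  shows "decr_in (reading P) (set (P ! i))"
  unfolding decr_in_def
proof (intro conjI ballI impI)
  show "set (P ! i) \<subseteq> set (reading P)" using reading_split[OF assms(2)] by auto
  fix a b assume "a \<in> set (P ! i)" "b \<in> set (P ! i)" "a < b"
  moreover have "sorted_wrt (>) (P ! i)" using assms unfolding rows_decr_def by simp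
  ultimately have "precedes (P ! i) b a" using precedes_if_sorted_wrt_greater by blast
  then show "precedes (reading P) b a" using reading_split[OF assms(2)] by simp
qed

lemma rows_disjoint:
  "distinct (concat P) \<Longrightarrow> i < j \<Longrightarrow> j < length P \<Longrightarrow> set (P ! i) \<inter> set (P ! j) = {}"
proof (induction P arbitrary: i j)
  case Nil
  then show ?case by simp
next
  case (Cons R T)
  obtain j' where j: "j = Suc j'" using Cons.prems by (cases j) auto
  show ?case
  proof (cases i)
    case 0
    have "T ! j' \<in> set T" using Cons.prems j by simp
    then have "set (T ! j') \<subseteq> set (concat T)" by auto
    moreover have "set R \<inter> set (concat T) = {}" using Cons.prems(1) by simp
    ultimately show ?thesis using 0 j by auto
  next
    case (Suc i')
    then show ?thesis using Cons.IH[of i' j'] Cons.prems j by simp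
  qed
qed

definition row_sum :: "nat list list \<Rightarrow> nat \<Rightarrow> nat" where
  "row_sum P k = (\<Sum>i<min k (length P). length (P ! i))"

lemma row_sum_le_greene_reading:
  assumes "rows_decr P" "distinct (concat P)"
  shows "row_sum P k \<le> greene (reading P) k"
proof -
  define C where "C l = (if l < length P then set (P ! l) else {})" for l
  have f: "decr_family (reading P) k C" unfolding decr_family_def C_def using decr_in_reading_row[OF assms(1)] by simp
  have U: "(\<Union>l<k. C l) = (\<Union>l<min k (length P). set (P ! l))" unfolding C_def by auto
  have "card (\<Union>l<min k (length P). set (P ! l)) = (\<Sum>l<min k (length P). card (set (P ! l)))"
  proof (rule card_UN_disjoint)
    show "\<forall>i\<in>{..<min k (length P)}. \<forall>j\<in>{..<min k (length P)}. i \<noteq> j \<longrightarrow> set (P ! i) \<inter> set (P ! j) = {}"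
      using rows_disjoint[OF assms(2)] by (metis Int_commute lessThan_iff linorder_neqE_nat min_less_iff_conj)
  qed auto
  also have "\<dots> = row_sum P k" unfolding row_sum_def
  proof (rule sum.cong)
    fix l assume "l \<in> {..<min k (length P)}"
    then have "P ! l \<in> set P" by simp
    then have "distinct (P ! l)" using assms(2) by (simp add: distinct_concat_iff)
    then show "card (set (P ! l)) = length (P ! l)" by (rule distinct_card)
  qed simp
  finally show ?thesis using card_Union_le_greene[OF f] U by simp
qed

text \<open>If every column of a down-closed diagram \<open>T\<close> meets \<open>U\<close> in at most \<open>k\<close> cells, pushing the
  cells of \<open>U\<close> up within their columns injects \<open>U\<close> into the first \<open>k\<close> rows of \<open>T\<close>.\<close>

lemma card_le_card_top_rows:
  fixes T U :: "(nat \<times> nat) set"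
  assumes "finite T" "U \<subseteq> T"
    and down: "\<And>i i' c. (i', c) \<in> T \<Longrightarrow> i \<le> i' \<Longrightarrow> (i, c) \<in> T"
    and col: "\<And>c. card {i. (i, c) \<in> U} \<le> k"
  shows "card U \<le> card {(i, c) \<in> T. i < k}"
proof -
  define rank where "rank i c = card {i'. (i', c) \<in> U \<and> i' < i}" for i c
  have fin: "finite {i'. (i', c) \<in> U \<and> P i'}" for c P
    using finite_subset[OF assms(2,1)] by (rule finite_subset[rotated, OF finite_imageI[of _ fst]]) force
  have rank_less: "rank i c < rank i' c" if "(i, c) \<in> U" "i < i'" for i i' c
  proof -
    have "insert i {j. (j, c) \<in> U \<and> j < i} \<subseteq> {j. (j, c) \<in> U \<and> j < i'}" using that by auto
    then have "card (insert i {j. (j, c) \<in> U \<and> j < i}) \<le> rank i' c"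
      unfolding rank_def by (rule card_mono[OF fin])
    then show ?thesis unfolding rank_def using fin by simp
  qed
  have "inj_on (\<lambda>(i, c). (rank i c, c)) U"
  proof (rule inj_onI)
    fix p q assume pq: "p \<in> U" "q \<in> U" "(\<lambda>(i, c). (rank i c, c)) p = (\<lambda>(i, c). (rank i c, c)) q"
    then obtain i c i' where ic: "p = (i, c)" "q = (i', c)" "rank i c = rank i' c" by (cases p, cases q) auto
    then show "p = q"
      using pq rank_less[of i c i'] rank_less[of i' c i] by (cases i i' rule: linorder_cases) auto
  qed
  moreover have "(\<lambda>(i, c). (rank i c, c)) ` U \<subseteq> {(i, c) \<in> T. i < k}"
  proof clarify
    fix i c assume ic: "(i, c) \<in> U"
    have "{i'. (i', c) \<in> U \<and> i' < i} \<subseteq> {..<i}" by auto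
    then have "rank i c \<le> i" unfolding rank_def using card_mono[of "{..<i}"] by simp
    then have "(rank i c, c) \<in> T" using down ic assms(2) by blast
    moreover have "rank i c < card {i. (i, c) \<in> U}"
    proof -
      have "finite {i. (i, c) \<in> U}" using fin[of c "\<lambda>_. True"] by simp
      moreover have "insert i {i'. (i', c) \<in> U \<and> i' < i} \<subseteq> {i. (i, c) \<in> U}" using ic by auto
      ultimately have "card (insert i {i'. (i', c) \<in> U \<and> i' < i}) \<le> card {i. (i, c) \<in> U}"
        by (rule card_mono)
      then show ?thesis unfolding rank_def using fin by simp
    qed
    ultimately show "(rank i c, c) \<in> T \<and> rank i c < k" using col[of c] by simp
  qed
  moreover have "finite {(i, c) \<in> T. i < k}" using assms(1) by (rule finite_subset[rotated]) auto
  ultimately show ?thesis by (rule card_inj_on_le)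
qed

definition cells :: "nat list list \<Rightarrow> (nat \<times> nat) set" where
  "cells P = Sigma {..<length P} (\<lambda>i. {..<length (P ! i)})"

lemma finite_cells: "finite (cells P)"
  unfolding cells_def by auto

lemma card_cells_top_rows: "card {(i, c) \<in> cells P. i < k} = row_sum P k"
proof -
  have "{(i, c) \<in> cells P. i < k} = Sigma {..<min k (length P)} (\<lambda>i. {..<length (P ! i)})"
    unfolding cells_def by auto
  then show ?thesis unfolding row_sum_def by simp
qed

lemma bij_betw_cells:
  assumes "distinct (concat P)"
  shows "bij_betw (\<lambda>(i, c). P ! i ! c) (cells P) (set (concat P))"
proof (rule bij_betw_imageI)
  show "inj_on (\<lambda>(i, c). P ! i ! c) (cells P)"
  proof (rule inj_onI, clarify)
    fix i c i' c' assume ic: "(i, c) \<in> cells P" "(i', c') \<in> cells P" and eq: "P ! i ! c = P ! i' ! c'"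
    have "i = i'"
      using rows_disjoint[OF assms, of i i'] rows_disjoint[OF assms, of i' i] ic eq
      by (cases i i' rule: linorder_cases) (auto simp: cells_def, (metis IntI empty_iff nth_mem)+)
    moreover have "distinct (P ! i)" using assms ic by (auto simp: cells_def distinct_concat_iff)
    ultimately show "i = i' \<and> c = c'" using ic eq by (simp add: cells_def nth_eq_iff_index_eq)
  qed
  show "(\<lambda>(i, c). P ! i ! c) ` cells P = set (concat P)"
    unfolding cells_def by (force simp: in_set_conv_nth)
qed

text \<open>Entries of a column are read bottom-up, i.e.\ in increasing order, so a decreasing
  subsequence of the reading word meets every column at most once.\<close>

lemma decr_in_reading_column:
  assumes dist: "distinct (concat P)" and cols: "cols_decr P" and S: "decr_in (reading P) S"
    and ic: "(i, c) \<in> cells P" "(i', c) \<in> cells P" "P ! i ! c \<in> S" "P ! i' ! c \<in> S"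
  shows "i = i'"
proof -
  have distR: "distinct (reading P)" using dist by (simp add: reading_def)
  have False if "(j, c) \<in> cells P" "(j', c) \<in> cells P" "P ! j ! c \<in> S" "P ! j' ! c \<in> S" "j < j'"
    for j j'
  proof -
    have lt: "P ! j' ! c < P ! j ! c" using cols_decr_nth[OF cols \<open>j < j'\<close>] that by (simp add: cells_def)
    have "precedes (reading P) (P ! j' ! c) (P ! j ! c)"
      using precedes_reading[OF \<open>j < j'\<close>] that by (simp add: cells_def)
    moreover have "precedes (reading P) (P ! j ! c) (P ! j' ! c)"
      using S that(3,4) lt unfolding decr_in_def by blast
    ultimately show False using precedes_asym[OF distR] by blast
  qed
  then show ?thesis using ic by (cases i i' rule: linorder_cases) blast+
qed

lemma card_decr_family_reading_le:
  assumes dist: "distinct (concat P)" and cols: "cols_decr P"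
    and fam: "decr_family (reading P) k C"
  shows "card (\<Union>l<k. C l) \<le> row_sum P k"
proof -
  let ?e = "\<lambda>(i, c). P ! i ! c"
  define U where "U = {ic \<in> cells P. ?e ic \<in> (\<Union>l<k. C l)}"
  have bij: "bij_betw ?e (cells P) (set (concat P))" by (rule bij_betw_cells[OF dist])
  have "(\<Union>l<k. C l) \<subseteq> ?e ` cells P"
    using decr_family_Union_subset[OF fam] bij_betw_imp_surj_on[OF bij] by (simp add: reading_def)
  then have "?e ` U = (\<Union>l<k. C l)"
  proof (intro equalityI subsetI)
    fix x assume "x \<in> (\<Union>l<k. C l)"
    then obtain ic where "ic \<in> cells P" "?e ic = x" using \<open>_ \<subseteq> ?e ` cells P\<close> by blast
    then show "x \<in> ?e ` U" using \<open>x \<in> _\<close> unfolding U_def by blast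
  qed (auto simp: U_def)
  moreover have "inj_on ?e U"
    using bij_betw_imp_inj_on[OF bij] by (rule inj_on_subset) (auto simp: U_def)
  ultimately have "card (\<Union>l<k. C l) = card U" by (metis card_image)
  also have "card U \<le> card {(i, c) \<in> cells P. i < k}"
  proof (rule card_le_card_top_rows[OF finite_cells])
    show "U \<subseteq> cells P" unfolding U_def by blast
    show "(i, c) \<in> cells P" if "(i', c) \<in> cells P" "i \<le> i'" for i i' c
      using that cols_decr_nth[OF cols, of i i' c] by (cases "i = i'") (auto simp: cells_def)
    show "card {i. (i, c) \<in> U} \<le> k" for c
    proof -
      have "{i. (i, c) \<in> U} = (\<Union>l<k. {i. (i, c) \<in> cells P \<and> P ! i ! c \<in> C l})"
        unfolding U_def by auto
      also have "card \<dots> \<le> (\<Sum>l<k. card {i. (i, c) \<in> cells P \<and> P ! i ! c \<in> C l})"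
        by (rule card_UN_le) simp
      also have "\<dots> \<le> (\<Sum>l<k. 1)"
      proof (rule sum_mono)
        fix l assume "l \<in> {..<k}"
        then have "decr_in (reading P) (C l)" using fam unfolding decr_family_def by simp
        moreover have "finite {i. (i, c) \<in> cells P \<and> P ! i ! c \<in> C l}"
          by (rule finite_subset[of _ "{..<length P}"]) (auto simp: cells_def)
        ultimately show "card {i. (i, c) \<in> cells P \<and> P ! i ! c \<in> C l} \<le> 1"
          using decr_in_reading_column[OF dist cols] by (auto simp: card_le_Suc0_iff_eq)
      qed
      finally show ?thesis by simp
    qed
  qed
  also have "\<dots> = row_sum P k" by (rule card_cells_top_rows)
  finally show ?thesis .
qed

lemma greene_reading:
  assumes "rows_decr P" "distinct (concat P)" "cols_decr P"
  shows "greene (reading P) k = row_sum P k"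
proof -
  obtain C where "decr_family (reading P) k C" "card (\<Union>l<k. C l) = greene (reading P) k"
    by (rule greene_attained)
  then have "greene (reading P) k \<le> row_sum P k" using card_decr_family_reading_le[OF assms(2,3)] by metis
  then show ?thesis using row_sum_le_greene_reading[OF assms(1,2), of k] by (rule antisym)
qed

theorem greene_ins_tableau:
  assumes "distinct w"
  shows "greene w k = row_sum (ins_tableau w) k"
proof -
  have P: "rows_decr (ins_tableau w)" "distinct (concat (ins_tableau w))" "cols_decr (ins_tableau w)"
    "knuth_equiv (reading (ins_tableau w)) w"
    using ins_tableau_props[OF assms] by auto
  have "distinct (reading (ins_tableau w))" using P(2) by (simp add: reading_def)
  then have "greene (reading (ins_tableau w)) k = greene w k" using greene_knuth_equiv[OF P(4)] by blast
  then show ?thesis using greene_reading[OF P(1-3)] by simp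
qed

definition cum :: "(int \<Rightarrow> nat) \<Rightarrow> nat \<Rightarrow> nat" where
  "cum lam i = (\<Sum>k\<in>{1..i}. lam (int k))"

lemma cum_0[simp]: "cum lam 0 = 0" by (simp add: cum_def)

lemma cum_Suc: "cum lam (Suc i) = cum lam i + lam (int (Suc i))"
  by (simp add: cum_def)

lemma cum_mono: "i \<le> j \<Longrightarrow> cum lam i \<le> cum lam j"
  unfolding cum_def by (rule sum_mono2) auto

lemma Rblk_pos: "i > 0 \<Longrightarrow> Rblk lam i = {int (cum lam (nat i - 1)) + 1 .. int (cum lam (nat i))}"
proof -
  assume "i > 0"
  have "{1..<nat i} = {1..nat i - 1}" using \<open>i > 0\<close> by auto
  then show ?thesis using \<open>i > 0\<close> unfolding Rblk_def cum_def by simp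
qed

lemma Rblk_neg: "i < 0 \<Longrightarrow> Rblk lam i = uminus ` Rblk lam (- i)"
proof -
  assume "i < 0"
  then show ?thesis unfolding Rblk_def by simp
qed

lemma Ir_iff: "i \<in> Ir r \<longleftrightarrow> i \<noteq> 0 \<and> \<bar>i\<bar> \<le> int r"
  unfolding Ir_def by auto

lemma signedset_iff: "x \<in> signedset d \<longleftrightarrow> x \<noteq> 0 \<and> \<bar>x\<bar> \<le> int d"
  unfolding signedset_def by auto

lemma Ir_uminus[simp]: "- i \<in> Ir r \<longleftrightarrow> i \<in> Ir r"
  unfolding Ir_iff by auto

lemma signedset_uminus[simp]: "- x \<in> signedset d \<longleftrightarrow> x \<in> signedset d"
  unfolding signedset_iff by auto

lemma finite_Ir[simp]: "finite (Ir r)" unfolding Ir_def by simp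
lemma finite_signedset[simp]: "finite (signedset d)" unfolding signedset_def by simp

locale blocks =
  fixes r d :: nat and lam :: "int \<Rightarrow> nat"
  assumes tot: "cum lam r = d"
begin

definition bpos :: "int \<Rightarrow> nat" where
  "bpos x = (LEAST i. x \<le> int (cum lam i))"

definition blk :: "int \<Rightarrow> int" where
  "blk x = (if x > 0 then int (bpos x) else - int (bpos (- x)))"

lemma bpos_props:
  assumes "0 < x" "x \<le> int d"
  shows "1 \<le> bpos x \<and> bpos x \<le> r \<and> x \<le> int (cum lam (bpos x)) \<and> int (cum lam (bpos x - 1)) < x"
proof -
  have ex: "x \<le> int (cum lam r)" using assms tot by simp
  have le: "x \<le> int (cum lam (bpos x))" unfolding bpos_def by (rule LeastI[of _ r]) (rule ex)
  have r: "bpos x \<le> r" unfolding bpos_def by (rule Least_le) (rule ex)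
  have ne0: "bpos x \<noteq> 0" using le assms by (intro notI) simp
  have "\<not> x \<le> int (cum lam (bpos x - 1))"
  proof
    assume "x \<le> int (cum lam (bpos x - 1))"
    then have "bpos x \<le> bpos x - 1" unfolding bpos_def by (rule Least_le)
    then show False using ne0 by simp
  qed
  then show ?thesis using le r ne0 by simp
qed

lemma bpos_mono: "0 < x \<Longrightarrow> x \<le> y \<Longrightarrow> y \<le> int d \<Longrightarrow> bpos x \<le> bpos y"
proof -
  assume a: "0 < x" "x \<le> y" "y \<le> int d"
  have "y \<le> int (cum lam (bpos y))" using bpos_props[of y] a by simp
  then have "x \<le> int (cum lam (bpos y))" using a by simp
  then show ?thesis unfolding bpos_def by (rule Least_le)
qed

lemma bpos_eq:
  assumes "1 \<le> i" "i \<le> r" "int (cum lam (i - 1)) < x" "x \<le> int (cum lam i)"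
  shows "bpos x = i"
proof -
  have le: "bpos x \<le> i" unfolding bpos_def by (rule Least_le) (rule assms(4))
  have xd: "x \<le> int d" using assms cum_mono[of i r lam] tot by simp
  have x0: "0 < x" using assms by simp
  have p: "x \<le> int (cum lam (bpos x))" using bpos_props[OF x0 xd] by simp
  have "\<not> bpos x < i"
  proof
    assume "bpos x < i"
    then have "cum lam (bpos x) \<le> cum lam (i - 1)" by (intro cum_mono) simp
    then show False using p assms(3) by simp
  qed
  then show ?thesis using le by simp
qed

lemma blk_in:
  assumes "x \<in> signedset d"
  shows "blk x \<in> Ir r \<and> x \<in> Rblk lam (blk x)"
proof (cases "x > 0")
  case True
  have xd: "x \<le> int d" using assms unfolding signedset_iff by linarith
  note b = bpos_props[OF True xd]
  have "blk x = int (bpos x)" using True by (simp add: blk_def)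
  then show ?thesis using b True by (auto simp: Ir_iff Rblk_pos)
next
  case False
  then have x0: "0 < - x" using assms unfolding signedset_iff by simp
  have xd: "- x \<le> int d" using assms unfolding signedset_iff by linarith
  note b = bpos_props[OF x0 xd]
  have bl: "blk x = - int (bpos (- x))" using False by (simp add: blk_def)
  have "- x \<in> Rblk lam (int (bpos (- x)))" using b by (auto simp: Rblk_pos)
  then have "x \<in> Rblk lam (- int (bpos (- x)))" using b by (auto simp: Rblk_neg image_iff intro: bexI[of _ "- x"])
  then show ?thesis using b bl by (auto simp: Ir_iff)
qed

lemma Rblk_blk:
  assumes "i \<in> Ir r" "x \<in> Rblk lam i"
  shows "x \<in> signedset d \<and> blk x = i"
proof (cases "i > 0")
  case True
  have i: "1 \<le> nat i" "nat i \<le> r" using assms(1) True by (auto simp: Ir_iff)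
  have x: "int (cum lam (nat i - 1)) < x" "x \<le> int (cum lam (nat i))"
    using assms(2) True by (auto simp: Rblk_pos)
  have "bpos x = nat i" by (rule bpos_eq[OF i x])
  moreover have "x \<le> int d" using x cum_mono[of "nat i" r lam] tot i by simp
  moreover have "0 < x" using x by simp
  ultimately show ?thesis using True by (simp add: blk_def signedset_iff)
next
  case False
  then have ineg: "i < 0" using assms(1) by (simp add: Ir_iff)
  then obtain y where y: "y \<in> Rblk lam (- i)" "x = - y" using assms(2) by (auto simp: Rblk_neg)
  have i: "1 \<le> nat (- i)" "nat (- i) \<le> r" using assms(1) ineg by (auto simp: Ir_iff)
  have yy: "int (cum lam (nat (- i) - 1)) < y" "y \<le> int (cum lam (nat (- i)))"
    using y(1) ineg by (auto simp: Rblk_pos)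
  have "bpos y = nat (- i)" by (rule bpos_eq[OF i yy])
  moreover have "y \<le> int d" using yy cum_mono[of "nat (- i)" r lam] tot i by simp
  moreover have "0 < y" using yy by simp
  ultimately show ?thesis using ineg y by (simp add: blk_def signedset_iff)
qed

lemma blk_mono:
  assumes "x \<in> signedset d" "y \<in> signedset d" "x \<le> y"
  shows "blk x \<le> blk y"
proof -
  have xd: "\<bar>x\<bar> \<le> int d" "x \<noteq> 0" and yd: "\<bar>y\<bar> \<le> int d" "y \<noteq> 0"
    using assms unfolding signedset_iff by auto
  show ?thesis
  proof (cases "x > 0")
    case True
    then have "y > 0" using assms by simp
    then show ?thesis using True bpos_mono[of x y] assms yd by (simp add: blk_def)
  next
    case False
    then have x0: "x < 0" using xd by simp
    show ?thesis
    proof (cases "y > 0")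
      case True
      then show ?thesis using x0 by (simp add: blk_def)
    next
      case False
      then have "y < 0" using yd by simp
      then have "bpos (- y) \<le> bpos (- x)" using bpos_mono[of "- y" "- x"] assms xd by simp
      then show ?thesis using x0 \<open>y < 0\<close> by (simp add: blk_def)
    qed
  qed
qed

lemma blk_less: "x \<in> signedset d \<Longrightarrow> y \<in> signedset d \<Longrightarrow> blk x < blk y \<Longrightarrow> x < y"
  using blk_mono[of y x] by force

lemma blk_uminus: "x \<in> signedset d \<Longrightarrow> blk (- x) = - blk x"
  unfolding blk_def signedset_iff by auto

lemma blk_sign: "x \<in> signedset d \<Longrightarrow> (blk x > 0 \<longleftrightarrow> x > 0)"
  unfolding blk_def signedset_iff using bpos_props[of x] bpos_props[of "- x"] by auto

lemma Rblk_sub: "i \<in> Ir r \<Longrightarrow> Rblk lam i \<subseteq> signedset d"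
  using Rblk_blk by blast

lemma Rblk_eq: "i \<in> Ir r \<Longrightarrow> Rblk lam i = {x \<in> signedset d. blk x = i}"
  using Rblk_blk blk_in by blast

lemma finite_Rblk[simp]: "finite (Rblk lam i)"
  by (cases "i > 0") (auto simp: Rblk_pos Rblk_neg Rblk_def)

lemma card_Rblk: "i \<in> Ir r \<Longrightarrow> card (Rblk lam i) = lam \<bar>i\<bar>"
proof -
  have pos: "card (Rblk lam i) = lam i" if "i > 0" "i \<in> Ir r" for i
  proof -
    have "nat i \<ge> 1" using that by simp
    then have "cum lam (nat i) = cum lam (nat i - 1) + lam (int (nat i))"
      using cum_Suc[of lam "nat i - 1"] by simp
    then show ?thesis using that by (simp add: Rblk_pos)
  qed
  assume i: "i \<in> Ir r"
  show ?thesis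
  proof (cases "i > 0")
    case True
    then show ?thesis using pos i by simp
  next
    case False
    then have "i < 0" using i by (simp add: Ir_iff)
    then have "card (Rblk lam i) = card (Rblk lam (- i))" by (simp add: Rblk_neg card_image)
    then show ?thesis using pos[of "- i"] i \<open>i < 0\<close> by simp
  qed
qed

end

lemma sum_decrement_at:
  fixes f :: "'i \<Rightarrow> nat"
  assumes "finite I" "i0 \<in> I" "0 < f i0"
  shows "(\<Sum>i\<in>I. if i = i0 then f i - 1 else f i) = (\<Sum>i\<in>I. f i) - 1"
proof -
  have "(\<Sum>i\<in>I - {i0}. if i = i0 then f i - 1 else f i) = (\<Sum>i\<in>I - {i0}. f i)"
    by (rule sum.cong) auto
  then show ?thesis using assms by (simp add: sum.remove)
qed

lemma card_fibre_Diff_singleton: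
  assumes "x \<in> X"
  shows "card {y\<in>X - {x}. g y = c} = card {y\<in>X. g y = c} - (if g x = c then 1 else 0)"
proof -
  have "{y\<in>X - {x}. g y = c} = {y\<in>X. g y = c} - {x}" by auto
  then show ?thesis using assms by (simp add: card_Diff_singleton_if)
qed

text \<open>A matrix \<open>a\<close> whose column sums count the fibres of \<open>colf\<close> and whose row sums count the fibres
  of \<open>rowf\<close> is realized by a bijection \<open>P \<rightarrow> V\<close>: match a point of column \<open>j\<^sub>0\<close> with a point of
  row \<open>i\<^sub>0\<close> for some nonzero entry \<open>a i\<^sub>0 j\<^sub>0\<close>, decrease that entry and induct.\<close>

lemma exists_bij_with_cell_counts:
  fixes colf :: "'p \<Rightarrow> 'j" and rowf :: "'v \<Rightarrow> 'i" and a :: "'i \<Rightarrow> 'j \<Rightarrow> nat"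
  assumes "finite P" "finite V" "finite I" "finite J" "colf ` P \<subseteq> J" "rowf ` V \<subseteq> I"
    and "\<forall>j\<in>J. card {p\<in>P. colf p = j} = (\<Sum>i\<in>I. a i j)"
    and "\<forall>i\<in>I. card {v\<in>V. rowf v = i} = (\<Sum>j\<in>J. a i j)"
  shows "\<exists>f. bij_betw f P V \<and> (\<forall>i\<in>I. \<forall>j\<in>J. card {p\<in>P. colf p = j \<and> rowf (f p) = i} = a i j)"
  using assms
proof (induction "card P" arbitrary: P V a)
  case 0
  then have P: "P = {}" by simp
  have a0: "a i j = 0" if "i \<in> I" "j \<in> J" for i j
  proof -
    have "(\<Sum>i\<in>I. a i j) = 0" using 0 P that by simp
    then show ?thesis using 0 that by simp
  qed
  have "V = {}"
  proof (rule ccontr)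
    assume "V \<noteq> {}"
    then obtain v where v: "v \<in> V" by blast
    then have "rowf v \<in> I" using 0(7) by blast
    then have "card {w\<in>V. rowf w = rowf v} = 0" using 0(9) a0 by simp
    then show False using v 0(3) by auto
  qed
  then show ?case using P a0 by (simp add: bij_betw_def)
next
  case (Suc n)
  then obtain p0 where p0: "p0 \<in> P" by (metis card.empty ex_in_conv nat.simps(3))
  define j0 where "j0 = colf p0"
  have j0: "j0 \<in> J" using Suc.prems(5) p0 unfolding j0_def by blast
  have "p0 \<in> {p\<in>P. colf p = j0}" using p0 unfolding j0_def by simp
  then have "0 < card {p\<in>P. colf p = j0}" using Suc.prems(1) by (auto simp: card_gt_0_iff)
  then have "(\<Sum>i\<in>I. a i j0) \<noteq> 0" using Suc.prems(7) j0 by simp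
  then obtain i0 where "i0 \<in> I" "a i0 j0 \<noteq> 0" by (rule sum.not_neutral_contains_not_neutral)
  then have i0: "i0 \<in> I" "0 < a i0 j0" by auto
  have "a i0 j0 \<le> (\<Sum>j\<in>J. a i0 j)" using j0 Suc.prems(4) by (intro member_le_sum) auto
  then have "0 < card {v\<in>V. rowf v = i0}" using Suc.prems(8) i0 by simp
  then obtain v0 where v0: "v0 \<in> V" "rowf v0 = i0" by (metis (mono_tags, lifting) card_gt_0_iff empty_Collect_eq)
  define a' where "a' i j = (if i = i0 \<and> j = j0 then a i j - 1 else a i j)" for i j
  have col: "\<forall>j\<in>J. card {p\<in>P - {p0}. colf p = j} = (\<Sum>i\<in>I. a' i j)"
  proof
    fix j assume j: "j \<in> J"
    have "(\<Sum>i\<in>I. a' i j) = (\<Sum>i\<in>I. a i j) - (if colf p0 = j then 1 else 0)"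
      using sum_decrement_at[OF Suc.prems(3) i0(1), of "\<lambda>i. a i j0"] i0 unfolding a'_def j0_def by auto
    then show "card {p\<in>P - {p0}. colf p = j} = (\<Sum>i\<in>I. a' i j)"
      using j Suc.prems(7) card_fibre_Diff_singleton[OF p0, of colf j] by simp
  qed
  have row: "\<forall>i\<in>I. card {v\<in>V - {v0}. rowf v = i} = (\<Sum>j\<in>J. a' i j)"
  proof
    fix i assume i: "i \<in> I"
    have "(\<Sum>j\<in>J. a' i j) = (\<Sum>j\<in>J. a i j) - (if rowf v0 = i then 1 else 0)"
      using sum_decrement_at[OF Suc.prems(4) j0, of "\<lambda>j. a i0 j"] i0 v0 unfolding a'_def by auto
    then show "card {v\<in>V - {v0}. rowf v = i} = (\<Sum>j\<in>J. a' i j)"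
      using i Suc.prems(8) card_fibre_Diff_singleton[OF v0(1), of rowf i] by simp
  qed
  have "n = card (P - {p0})" using Suc.hyps(2) p0 Suc.prems(1) by simp
  moreover have "finite (P - {p0})" "finite (V - {v0})" using Suc.prems(1,2) by auto
  moreover have "colf ` (P - {p0}) \<subseteq> J" "rowf ` (V - {v0}) \<subseteq> I" using Suc.prems(5,6) by auto
  ultimately obtain f where f: "bij_betw f (P - {p0}) (V - {v0})"
    "\<forall>i\<in>I. \<forall>j\<in>J. card {p\<in>P - {p0}. colf p = j \<and> rowf (f p) = i} = a' i j"
    using Suc.hyps(1)[OF _ _ _ Suc.prems(3,4) _ _ col row] by blast
  have "bij_betw (f(p0 := v0)) P V"
    using notIn_Un_bij_betw[of p0 "P - {p0}" "f(p0 := v0)" "V - {v0}"] p0 v0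
      bij_betw_cong[of "P - {p0}" f "f(p0 := v0)"] f(1) by (simp add: insert_absorb)
  moreover have "card {p\<in>P. colf p = j \<and> rowf ((f(p0 := v0)) p) = i} = a i j" if "i \<in> I" "j \<in> J" for i j
  proof -
    have "{p\<in>P. colf p = j \<and> rowf ((f(p0 := v0)) p) = i} =
        {p\<in>P - {p0}. colf p = j \<and> rowf (f p) = i} \<union> (if i = i0 \<and> j = j0 then {p0} else {})"
      using p0 v0 unfolding j0_def by auto
    then show ?thesis using f(2) that i0 Suc.prems(1) unfolding a'_def by auto
  qed
  ultimately show ?case by blast
qed

lemma sum_Ir_split: "(\<Sum>i\<in>Ir r. f i) = (\<Sum>k\<in>{1..r}. f (int k)) + (\<Sum>k\<in>{1..r}. f (- int k))"
proof -
  have I: "Ir r = int ` {1..r} \<union> (\<lambda>k. - int k) ` {1..r}"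
  proof
    show "Ir r \<subseteq> int ` {1..r} \<union> (\<lambda>k. - int k) ` {1..r}"
    proof
      fix i assume "i \<in> Ir r"
      then have i: "i \<noteq> 0" "\<bar>i\<bar> \<le> int r" by (auto simp: Ir_iff)
      show "i \<in> int ` {1..r} \<union> (\<lambda>k. - int k) ` {1..r}"
      proof (cases "i > 0")
        case True
        then have "i = int (nat i)" "nat i \<in> {1..r}" using i by auto
        then show ?thesis by blast
      next
        case False
        then have "i = - int (nat (- i))" "nat (- i) \<in> {1..r}" using i by auto
        then show ?thesis by blast
      qed
    qed
  qed (auto simp: Ir_iff)
  have "(\<Sum>i\<in>Ir r. f i) = (\<Sum>i\<in>int ` {1..r}. f i) + (\<Sum>i\<in>(\<lambda>k. - int k) ` {1..r}. f i)"
    unfolding I by (rule sum.union_disjoint) auto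
  also have "\<dots> = (\<Sum>k\<in>{1..r}. f (int k)) + (\<Sum>k\<in>{1..r}. f (- int k))"
    by (simp add: sum.reindex inj_on_def)
  finally show ?thesis .
qed

lemma sum_Ir_neg: "(\<Sum>i\<in>Ir r. f (- i)) = (\<Sum>i\<in>Ir r. f i)"
proof -
  have "(\<Sum>i\<in>Ir r. f (- i)) = (\<Sum>i\<in>uminus ` Ir r. f i)"
    by (simp add: sum.reindex inj_on_def)
  also have "uminus ` Ir r = Ir r"
  proof
    show "uminus ` Ir r \<subseteq> Ir r" by auto
    show "Ir r \<subseteq> uminus ` Ir r"
    proof
      fix x assume "x \<in> Ir r"
      then have "- x \<in> Ir r" by simp
      then show "x \<in> uminus ` Ir r" by (metis image_eqI minus_minus)
    qed
  qed
  finally show ?thesis by simp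
qed

locale Pi_i_matrix =
  fixes r d :: nat and A :: "int \<Rightarrow> int \<Rightarrow> nat"
  assumes r1: "r \<ge> 1" and d1: "d \<ge> 1" and APi: "A \<in> Pi_i r d"
begin

lemma A_sym: "i \<in> Ir r \<Longrightarrow> j \<in> Ir r \<Longrightarrow> A (- i) (- j) = A i j"
proof -
  assume ij: "i \<in> Ir r" "j \<in> Ir r"
  have "\<forall>i\<in>Ir r. \<forall>j\<in>Ir r. A i j = A (- i) (- j)" using APi unfolding Pi_i_def by blast
  then have "A i j = A (- i) (- j)" using ij by blast
  then show ?thesis by (rule sym)
qed

lemma A_tot: "(\<Sum>(i,j)\<in>Ir r \<times> Ir r. A i j) = 2 * d"
  using APi unfolding Pi_i_def by simp

lemma ro_sym: "i \<in> Ir r \<Longrightarrow> ro r A (- i) = ro r A i"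
proof -
  assume i: "i \<in> Ir r"
  have "ro r A (- i) = (\<Sum>j\<in>Ir r. A (- i) (- j))" unfolding ro_def by (rule sum_Ir_neg[symmetric])
  also have "\<dots> = ro r A i" unfolding ro_def using A_sym i by simp
  finally show ?thesis .
qed

lemma co_sym: "j \<in> Ir r \<Longrightarrow> co r A (- j) = co r A j"
proof -
  assume j: "j \<in> Ir r"
  have "co r A (- j) = (\<Sum>i\<in>Ir r. A (- i) (- j))" unfolding co_def by (rule sum_Ir_neg[symmetric])
  also have "\<dots> = co r A j" unfolding co_def using A_sym j by simp
  finally show ?thesis .
qed

lemma ro_tot: "(\<Sum>i\<in>Ir r. ro r A i) = 2 * d"
  using A_tot unfolding ro_def by (simp only: sum.cartesian_product)

lemma co_tot: "(\<Sum>j\<in>Ir r. co r A j) = 2 * d"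
  using A_tot unfolding co_def by (subst sum.swap) (simp add: sum.cartesian_product)

lemma cum_eq_half:
  assumes "\<And>i. i \<in> Ir r \<Longrightarrow> f (- i) = f i" "(\<Sum>i\<in>Ir r. f i) = 2 * d"
  shows "cum f r = d"
proof -
  have "(\<Sum>k\<in>{1..r}. f (- int k)) = (\<Sum>k\<in>{1..r}. f (int k))"
    using assms(1) by (intro sum.cong) (auto simp: Ir_iff)
  then show ?thesis using assms(2) sum_Ir_split[of f r] unfolding cum_def by simp
qed

sublocale rb: blocks r d "ro r A"
  by unfold_locales (rule cum_eq_half[OF ro_sym ro_tot])

sublocale cb: blocks r d "co r A"
  by unfold_locales (rule cum_eq_half[OF co_sym co_tot])

abbreviation "Sg \<equiv> signedset d"
abbreviation "Rr \<equiv> Rblk (ro r A)"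
abbreviation "Rc \<equiv> Rblk (co r A)"
abbreviation "br \<equiv> rb.blk"
abbreviation "bc \<equiv> cb.blk"

definition realizes :: "(int \<Rightarrow> int) \<Rightarrow> bool" where
  "realizes x \<longleftrightarrow> (\<forall>i\<in>Ir r. \<forall>j\<in>Ir r. card {s \<in> Rc j. x s \<in> Rr i} = A i j)"

definition cell :: "(int \<Rightarrow> int) \<Rightarrow> int \<Rightarrow> int \<times> int" where
  "cell x s = (br (x s), bc s)"

lemma cell_in: "s \<in> Sg \<Longrightarrow> x s \<in> Sg \<Longrightarrow> cell x s \<in> Ir r \<times> Ir r"
  unfolding cell_def using rb.blk_in cb.blk_in by auto

lemma cell_fiber:
  assumes "x ` Sg \<subseteq> Sg" "i \<in> Ir r" "j \<in> Ir r"
  shows "{s \<in> Sg. cell x s = (i, j)} = {s \<in> Rc j. x s \<in> Rr i}"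
proof -
  have "s \<in> Sg \<and> cell x s = (i, j) \<longleftrightarrow> s \<in> Rc j \<and> x s \<in> Rr i" for s
  proof
    assume a: "s \<in> Sg \<and> cell x s = (i, j)"
    then have "x s \<in> Sg" using assms(1) by blast
    then show "s \<in> Rc j \<and> x s \<in> Rr i" using a cb.blk_in[of s] rb.blk_in[of "x s"]
      unfolding cell_def by auto
  next
    assume a: "s \<in> Rc j \<and> x s \<in> Rr i"
    then show "s \<in> Sg \<and> cell x s = (i, j)" using cb.Rblk_blk[OF assms(3)] rb.Rblk_blk[OF assms(2)]
      unfolding cell_def by auto
  qed
  then show ?thesis by blast
qed

lemma card_cell_in:
  assumes "x ` Sg \<subseteq> Sg" "realizes x" "F \<subseteq> Ir r \<times> Ir r"
  shows "card {s \<in> Sg. cell x s \<in> F} = (\<Sum>(i,j)\<in>F. A i j)"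
proof -
  have finF: "finite F" using assms(3) by (rule finite_subset) simp
  have "{s \<in> Sg. cell x s \<in> F} = (\<Union>c\<in>F. {s \<in> Sg. cell x s = c})" by auto
  moreover have "card (\<Union>c\<in>F. {s \<in> Sg. cell x s = c}) = (\<Sum>c\<in>F. card {s \<in> Sg. cell x s = c})"
    by (rule card_UN_disjoint[OF finF]) auto
  ultimately have "card {s \<in> Sg. cell x s \<in> F} = (\<Sum>c\<in>F. card {s \<in> Sg. cell x s = c})"
    by simp
  also have "\<dots> = (\<Sum>(i,j)\<in>F. A i j)"
  proof (rule sum.cong)
    fix c assume "c \<in> F"
    then obtain i j where c: "c = (i, j)" "i \<in> Ir r" "j \<in> Ir r" using assms(3) by blast
    then show "card {s \<in> Sg. cell x s = c} = (case c of (i, j) \<Rightarrow> A i j)"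
      using cell_fiber[OF assms(1) c(2,3)] assms(2) unfolding realizes_def by simp
  qed simp
  finally show ?thesis .
qed

lemma card_cell_pairs_in:
  assumes "x ` Sg \<subseteq> Sg" "realizes x" "J \<subseteq> (Ir r \<times> Ir r) \<times> (Ir r \<times> Ir r)"
  shows "card {(p, q). p \<in> Sg \<and> q \<in> Sg \<and> (cell x p, cell x q) \<in> J} =
    (\<Sum>(c1, c2)\<in>J. (case c1 of (i, j) \<Rightarrow> A i j) * (case c2 of (i, j) \<Rightarrow> A i j))"
proof -
  have finJ: "finite J" using assms(3) by (rule finite_subset) simp
  have "{(p, q). p \<in> Sg \<and> q \<in> Sg \<and> (cell x p, cell x q) \<in> J} =
    (\<Union>cc\<in>J. {s \<in> Sg. cell x s = fst cc} \<times> {s \<in> Sg. cell x s = snd cc})" by auto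
  moreover have "card (\<Union>cc\<in>J. {s \<in> Sg. cell x s = fst cc} \<times> {s \<in> Sg. cell x s = snd cc}) =
    (\<Sum>cc\<in>J. card ({s \<in> Sg. cell x s = fst cc} \<times> {s \<in> Sg. cell x s = snd cc}))"
  proof (rule card_UN_disjoint[OF finJ])
    show "\<forall>cc\<in>J. finite ({s \<in> Sg. cell x s = fst cc} \<times> {s \<in> Sg. cell x s = snd cc})" by simp
    show "\<forall>cc1\<in>J. \<forall>cc2\<in>J. cc1 \<noteq> cc2 \<longrightarrow>
      ({s \<in> Sg. cell x s = fst cc1} \<times> {s \<in> Sg. cell x s = snd cc1}) \<inter>
      ({s \<in> Sg. cell x s = fst cc2} \<times> {s \<in> Sg. cell x s = snd cc2}) = {}"
    proof (intro ballI impI)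
      fix cc1 cc2 :: "(int \<times> int) \<times> (int \<times> int)" assume "cc1 \<noteq> cc2"
      then have "fst cc1 \<noteq> fst cc2 \<or> snd cc1 \<noteq> snd cc2" by (simp add: prod_eq_iff)
      then show "({s \<in> Sg. cell x s = fst cc1} \<times> {s \<in> Sg. cell x s = snd cc1}) \<inter>
        ({s \<in> Sg. cell x s = fst cc2} \<times> {s \<in> Sg. cell x s = snd cc2}) = {}" by auto
    qed
  qed
  ultimately have "card {(p, q). p \<in> Sg \<and> q \<in> Sg \<and> (cell x p, cell x q) \<in> J} =
    (\<Sum>cc\<in>J. card ({s \<in> Sg. cell x s = fst cc} \<times> {s \<in> Sg. cell x s = snd cc}))"
    by simp
  also have "\<dots> = (\<Sum>(c1, c2)\<in>J. (case c1 of (i, j) \<Rightarrow> A i j) * (case c2 of (i, j) \<Rightarrow> A i j))"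
  proof (rule sum.cong)
    fix cc assume "cc \<in> J"
    then obtain i1 j1 i2 j2 where c: "cc = ((i1, j1), (i2, j2))" "i1 \<in> Ir r" "j1 \<in> Ir r"
      "i2 \<in> Ir r" "j2 \<in> Ir r" using assms(3) by force
    show "card ({s \<in> Sg. cell x s = fst cc} \<times> {s \<in> Sg. cell x s = snd cc}) =
      (case cc of (c1, c2) \<Rightarrow> (case c1 of (i, j) \<Rightarrow> A i j) * (case c2 of (i, j) \<Rightarrow> A i j))"
      using cell_fiber[OF assms(1) c(2,3)] cell_fiber[OF assms(1) c(4,5)] assms(2) c
      unfolding realizes_def by (simp add: card_cartesian_product)
  qed simp
  finally show ?thesis .
qed

end

lemma to_pos_range: "s \<in> signedset d \<Longrightarrow> 1 \<le> to_pos d s \<and> to_pos d s \<le> 2 * d"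
  unfolding to_pos_def signedset_iff by auto

lemma from_pos_range: "1 \<le> t \<Longrightarrow> t \<le> 2 * d \<Longrightarrow> from_pos d t \<in> signedset d"
  unfolding from_pos_def signedset_iff by auto

lemma from_pos_to_pos: "s \<in> signedset d \<Longrightarrow> from_pos d (to_pos d s) = s"
  unfolding to_pos_def from_pos_def signedset_iff by auto

lemma to_pos_from_pos: "1 \<le> t \<Longrightarrow> t \<le> 2 * d \<Longrightarrow> to_pos d (from_pos d t) = t"
  unfolding to_pos_def from_pos_def by auto

lemma to_pos_less_iff:
  "s1 \<in> signedset d \<Longrightarrow> s2 \<in> signedset d \<Longrightarrow> to_pos d s1 < to_pos d s2 \<longleftrightarrow> s1 < s2"
  unfolding to_pos_def signedset_iff by auto

lemma to_pos_eq_iff: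
  "s1 \<in> signedset d \<Longrightarrow> s2 \<in> signedset d \<Longrightarrow> to_pos d s1 = to_pos d s2 \<longleftrightarrow> s1 = s2"
  unfolding to_pos_def signedset_iff by auto

lemma length_word_of: "length (word_of d w) = 2 * d"
  unfolding word_of_def by simp

lemma nth_word_of: "p < 2 * d \<Longrightarrow> word_of d w ! p = to_pos d (w (from_pos d (Suc p)))"
  unfolding word_of_def by (simp del: upt_Suc)

lemma nth_word_of_to_pos:
  assumes "s \<in> signedset d"
  shows "word_of d w ! (to_pos d s - 1) = to_pos d (w s)"
proof -
  have t: "to_pos d s - 1 < 2 * d" "Suc (to_pos d s - 1) = to_pos d s"
    using to_pos_range[OF assms] by linarith+
  show ?thesis using nth_word_of[OF t(1)] t(2) from_pos_to_pos[OF assms] by simp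
qed

lemma distinct_word_of:
  assumes bij: "bij_betw w (signedset d) (signedset d)"
  shows "distinct (word_of d w)"
proof -
  have "inj_on (\<lambda>t. to_pos d (w (from_pos d t))) {1..<2 * d + 1}"
  proof (rule inj_onI)
    fix t1 t2 assume t: "t1 \<in> {1..<2 * d + 1}" "t2 \<in> {1..<2 * d + 1}"
      "to_pos d (w (from_pos d t1)) = to_pos d (w (from_pos d t2))"
    have f: "from_pos d t1 \<in> signedset d" "from_pos d t2 \<in> signedset d" using t(1,2) from_pos_range by auto
    then have "w (from_pos d t1) = w (from_pos d t2)"
      using to_pos_eq_iff bij_betw_apply[OF bij] t(3) by metis
    then have "from_pos d t1 = from_pos d t2" using bij f unfolding bij_betw_def inj_on_def by blast
    then show "t1 = t2" using to_pos_from_pos t(1,2) by (metis atLeastLessThan_iff less_Suc_eq_le Suc_eq_plus1)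
  qed
  then show ?thesis unfolding word_of_def by (simp add: distinct_map del: upt_Suc)
qed

text \<open>Through \<^term>\<open>to_pos d \<circ> w\<close>, the position of an entry of the word is its argument, so
  decreasing subsequences of \<^term>\<open>word_of d w\<close> are the sets on which \<open>w\<close> decreases.\<close>

definition decr_on :: "(int \<Rightarrow> int) \<Rightarrow> int set \<Rightarrow> bool" where
  "decr_on w S \<longleftrightarrow> (\<forall>s1\<in>S. \<forall>s2\<in>S. s1 < s2 \<longrightarrow> w s2 < w s1)"

lemma set_word_of:
  assumes "bij_betw w (signedset d) (signedset d)"
  shows "set (word_of d w) = (\<lambda>s. to_pos d (w s)) ` signedset d"
proof -
  have "set (word_of d w) = (\<lambda>t. to_pos d (w (from_pos d t))) ` {1..<2 * d + 1}"
    unfolding word_of_def by (simp del: upt_Suc)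
  also have "\<dots> = (\<lambda>s. to_pos d (w s)) ` (from_pos d ` {1..<2 * d + 1})" by (simp add: image_image)
  also have "from_pos d ` {1..<2 * d + 1} = signedset d"
    using from_pos_range to_pos_range from_pos_to_pos
    by (force simp: image_iff intro: bexI[of _ "to_pos d _"])
  finally show ?thesis .
qed

lemma inj_on_to_pos_comp:
  assumes bij: "bij_betw w (signedset d) (signedset d)"
  shows "inj_on (\<lambda>s. to_pos d (w s)) (signedset d)"
  using bij to_pos_eq_iff bij_betw_apply[OF bij] unfolding bij_betw_def inj_on_def by metis

lemma precedes_word_of_iff:
  assumes bij: "bij_betw w (signedset d) (signedset d)" and s: "s1 \<in> signedset d" "s2 \<in> signedset d"
  shows "precedes (word_of d w) (to_pos d (w s1)) (to_pos d (w s2)) \<longleftrightarrow> s1 < s2"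
proof
  let ?g = "\<lambda>s. to_pos d (w s)"
  note ginj = inj_on_to_pos_comp[OF bij]
  assume "precedes (word_of d w) (?g s1) (?g s2)"
  then obtain i j where ij: "i < j" "j < 2 * d" "word_of d w ! i = ?g s1" "word_of d w ! j = ?g s2"
    unfolding precedes_def length_word_of by blast
  have "from_pos d (Suc i) \<in> signedset d" "from_pos d (Suc j) \<in> signedset d"
    using ij from_pos_range by auto
  moreover have "?g (from_pos d (Suc i)) = ?g s1" "?g (from_pos d (Suc j)) = ?g s2"
    using ij nth_word_of by auto
  ultimately have "from_pos d (Suc i) = s1" "from_pos d (Suc j) = s2"
    using ginj s unfolding inj_on_def by blast+
  moreover have "from_pos d (Suc i) < from_pos d (Suc j)"
    using ij unfolding from_pos_def by auto
  ultimately show "s1 < s2" by simp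
next
  assume "s1 < s2"
  then have "to_pos d s1 - 1 < to_pos d s2 - 1"
    using to_pos_less_iff[OF s] to_pos_range[OF s(1)] by (simp add: less_diff_iff)
  moreover have "to_pos d s2 - 1 < length (word_of d w)"
    using to_pos_range[OF s(2)] length_word_of by (metis Suc_le_eq Suc_pred' less_le_trans zero_less_one)
  ultimately show "precedes (word_of d w) (to_pos d (w s1)) (to_pos d (w s2))"
    unfolding precedes_def using nth_word_of_to_pos s by metis
qed

lemma decr_in_word_of_iff:
  assumes bij: "bij_betw w (signedset d) (signedset d)" and S: "S \<subseteq> signedset d"
  shows "decr_in (word_of d w) ((\<lambda>s. to_pos d (w s)) ` S) \<longleftrightarrow> decr_on w S"
proof -
  have wS: "w s \<in> signedset d" if "s \<in> S" for s using bij_betw_apply[OF bij] S that by blast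
  have less: "to_pos d (w s1) < to_pos d (w s2) \<longleftrightarrow> w s1 < w s2" if "s1 \<in> S" "s2 \<in> S" for s1 s2
    using to_pos_less_iff[OF wS wS] that by blast
  have inj: "w s1 = w s2 \<longleftrightarrow> s1 = s2" if "s1 \<in> S" "s2 \<in> S" for s1 s2
    using bij S that unfolding bij_betw_def inj_on_def by blast
  have prec: "precedes (word_of d w) (to_pos d (w s1)) (to_pos d (w s2)) \<longleftrightarrow> s1 < s2"
    if "s1 \<in> S" "s2 \<in> S" for s1 s2
    using precedes_word_of_iff[OF bij] S that by blast
  have "(\<forall>s1\<in>S. \<forall>s2\<in>S. to_pos d (w s1) < to_pos d (w s2) \<longrightarrow>
          precedes (word_of d w) (to_pos d (w s2)) (to_pos d (w s1))) \<longleftrightarrow> decr_on w S"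
    (is "?P \<longleftrightarrow> _")
  proof
    assume ?P
    show "decr_on w S" unfolding decr_on_def
    proof (intro ballI impI)
      fix s1 s2 assume s: "s1 \<in> S" "s2 \<in> S" "s1 < s2"
      show "w s2 < w s1"
      proof (rule ccontr)
        assume "\<not> w s2 < w s1"
        then have "w s1 < w s2" using inj[OF s(1,2)] s(3) by auto
        then have "to_pos d (w s1) < to_pos d (w s2)" using less s by blast
        then have "precedes (word_of d w) (to_pos d (w s2)) (to_pos d (w s1))" using \<open>?P\<close> s by blast
        then show False using prec[OF s(2,1)] s(3) by simp
      qed
    qed
  next
    assume decr: "decr_on w S"
    show ?P
    proof (intro ballI impI)
      fix s1 s2 assume s: "s1 \<in> S" "s2 \<in> S" "to_pos d (w s1) < to_pos d (w s2)"
      then have "w s1 < w s2" using less by blast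
      then have "s2 < s1" using decr s(1,2) unfolding decr_on_def by (metis less_asym linorder_neqE)
      then show "precedes (word_of d w) (to_pos d (w s2)) (to_pos d (w s1))" using prec s by blast
    qed
  qed
  moreover have "(\<lambda>s. to_pos d (w s)) ` S \<subseteq> set (word_of d w)" using set_word_of[OF bij] S by auto
  ultimately show ?thesis unfolding decr_in_def by auto
qed

lemma is_chain_subset: "is_chain C \<Longrightarrow> D \<subseteq> C \<Longrightarrow> is_chain D"
  unfolding is_chain_def by blast

definition chain_sums :: "nat \<Rightarrow> (int \<Rightarrow> int \<Rightarrow> nat) \<Rightarrow> nat \<Rightarrow> nat set" where
  "chain_sums r A k = {(\<Sum>(i,j)\<in>F. A i j) | F. \<exists>C :: nat \<Rightarrow> (int \<times> int) set.
      (\<forall>l<k. C l \<subseteq> Ir r \<times> Ir r \<and> is_chain (C l)) \<and>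
      (\<forall>l<k. \<forall>m<k. l \<noteq> m \<longrightarrow> C l \<inter> C m = {}) \<and>
      F = (\<Union>l<k. C l)}"

lemma finite_chain_sums: "finite (chain_sums r A k)"
proof -
  have "chain_sums r A k \<subseteq> (\<lambda>F. \<Sum>(i,j)\<in>F. A i j) ` Pow (Ir r \<times> Ir r)"
    unfolding chain_sums_def by blast
  then show ?thesis by (rule finite_subset) simp
qed

lemma sfrak_ge:
  assumes "\<forall>l<k. C l \<subseteq> Ir r \<times> Ir r \<and> is_chain (C l)" "disjoint_family_on C {..<k}"
  shows "(\<Sum>(i,j)\<in>(\<Union>l<k. C l). A i j) \<le> sfrak r A k"
proof -
  have "(\<Sum>(i,j)\<in>(\<Union>l<k. C l). A i j) \<in> chain_sums r A k"
    unfolding chain_sums_def using assms unfolding disjoint_family_on_def by blast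
  then show ?thesis unfolding sfrak_def chain_sums_def[symmetric]
    using finite_chain_sums by (rule Max_ge[rotated])
qed

lemma sfrak_attained:
  obtains C where "\<forall>l<k. C l \<subseteq> Ir r \<times> Ir r \<and> is_chain (C l)"
    "sfrak r A k = (\<Sum>(i,j)\<in>(\<Union>l<k. C l). A i j)"
proof -
  have "(\<Sum>(i,j)\<in>{}. A i j) \<in> chain_sums r A k"
    unfolding chain_sums_def
    by (rule CollectI, rule exI[of _ "{}"]) (auto simp: is_chain_def intro!: exI[of _ "\<lambda>_. {}"])
  then have "chain_sums r A k \<noteq> {}" by (metis empty_iff)
  then have "sfrak r A k \<in> chain_sums r A k"
    unfolding sfrak_def chain_sums_def[symmetric] by (rule Max_in[OF finite_chain_sums])
  then show ?thesis unfolding chain_sums_def using that by auto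
qed

context Pi_i_matrix
begin

text \<open>Block decreasing permutations reverse the order inside every column block and inside the
  preimage of every row block; they will turn out to be the longest elements of their double
  cosets.\<close>

definition block_decreasing :: "(int \<Rightarrow> int) \<Rightarrow> bool" where
  "block_decreasing x \<longleftrightarrow>
     (\<forall>s1\<in>Sg. \<forall>s2\<in>Sg. s1 < s2 \<and> (bc s1 = bc s2 \<or> br (x s1) = br (x s2)) \<longrightarrow> x s2 < x s1)"

lemma is_chain_cell_image:
  assumes wS: "w ` Sg \<subseteq> Sg" and S: "S \<subseteq> Sg" and decr: "decr_on w S"
  shows "is_chain (cell w ` S)"
proof -
  have cmp: "ple (cell w a) (cell w b)" if "a \<in> S" "b \<in> S" "a \<le> b" for a b
  proof (cases "a = b")
    case True
    then show ?thesis unfolding ple_def by simp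
  next
    case False
    then have "w b < w a" using decr that unfolding decr_on_def by simp
    then show ?thesis unfolding ple_def cell_def
      using rb.blk_mono[of "w b" "w a"] cb.blk_mono[of a b] wS S that by auto
  qed
  show ?thesis unfolding is_chain_def
  proof (intro ballI)
    fix c1 c2 assume "c1 \<in> cell w ` S" "c2 \<in> cell w ` S"
    then obtain a b where "a \<in> S" "b \<in> S" "c1 = cell w a" "c2 = cell w b" by blast
    then show "ple c1 c2 \<or> ple c2 c1" using cmp[of a b] cmp[of b a] by (cases "a \<le> b") auto
  qed
qed

lemma decr_on_cell_preimage:
  assumes wS: "w ` Sg \<subseteq> Sg" and bd: "block_decreasing w" and C: "is_chain C"
  shows "decr_on w {s \<in> Sg. cell w s \<in> C}"
  unfolding decr_on_def
proof (intro ballI impI)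
  fix s1 s2 assume s: "s1 \<in> {s \<in> Sg. cell w s \<in> C}" "s2 \<in> {s \<in> Sg. cell w s \<in> C}" "s1 < s2"
  have ch: "ple (cell w s1) (cell w s2) \<or> ple (cell w s2) (cell w s1)"
    using C s unfolding is_chain_def by blast
  have "bc s1 \<le> bc s2" using cb.blk_mono s by simp
  show "w s2 < w s1"
  proof (cases "br (w s2) < br (w s1)")
    case True
    then show ?thesis using rb.blk_less wS s by blast
  next
    case False
    then have "br (w s1) = br (w s2) \<or> bc s1 = bc s2"
      using ch \<open>bc s1 \<le> bc s2\<close> unfolding ple_def cell_def by auto
    then show ?thesis using bd s unfolding block_decreasing_def by blast
  qed
qed

lemma greene_word_of_le_sfrak:
  assumes bij: "bij_betw w Sg Sg" and realizes: "realizes w"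
  shows "greene (word_of d w) k \<le> sfrak r A k"
proof -
  let ?g = "\<lambda>s. to_pos d (w s)"
  have wS: "w ` Sg \<subseteq> Sg" using bij by (simp add: bij_betw_def)
  obtain C where C: "decr_family (word_of d w) k C" "card (\<Union>l<k. C l) = greene (word_of d w) k"
    by (rule greene_attained)
  define S where "S l = {s \<in> Sg. ?g s \<in> C l}" for l
  have CS: "C l = ?g ` S l" if "l < k" for l
    using C(1) that set_word_of[OF bij] unfolding decr_family_def decr_in_def S_def by auto
  have decr: "decr_on w (S l)" if "l < k" for l
    using decr_in_word_of_iff[OF bij, of "S l"] C(1) CS that unfolding decr_family_def S_def by auto
  define D where "D = disjointed (\<lambda>l. cell w ` S l)"
  have chains: "\<forall>l<k. D l \<subseteq> Ir r \<times> Ir r \<and> is_chain (D l)"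
  proof (intro allI impI conjI)
    fix l assume "l < k"
    have "cell w ` S l \<subseteq> Ir r \<times> Ir r" using cell_in wS unfolding S_def by blast
    then show "D l \<subseteq> Ir r \<times> Ir r" unfolding D_def disjointed_def by blast
    have "is_chain (cell w ` S l)" using is_chain_cell_image[OF wS _ decr[OF \<open>l < k\<close>]] by (auto simp: S_def)
    then show "is_chain (D l)" unfolding D_def disjointed_def by (rule is_chain_subset) blast
  qed
  have disj: "disjoint_family_on D {..<k}"
    unfolding D_def by (rule disjoint_family_on_mono[OF subset_UNIV disjoint_family_disjointed])
  have UD: "(\<Union>l<k. D l) = cell w ` (\<Union>l<k. S l)"
    using finite_UN_disjointed_eq[of "\<lambda>l. cell w ` S l" k] unfolding D_def by (auto simp: atLeast0LessThan)
  have "greene (word_of d w) k = card (?g ` (\<Union>l<k. S l))" using C(2) CS by (simp add: image_UN)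
  also have "\<dots> = card (\<Union>l<k. S l)"
    using inj_on_to_pos_comp[OF bij] by (intro card_image) (rule inj_on_subset, auto simp: S_def)
  also have "\<dots> \<le> card {s \<in> Sg. cell w s \<in> (\<Union>l<k. D l)}"
    by (rule card_mono) (auto simp: UD S_def)
  also have "\<dots> = (\<Sum>(i,j)\<in>(\<Union>l<k. D l). A i j)"
    using card_cell_in[OF wS realizes, of "\<Union>l<k. D l"] chains by blast
  also have "\<dots> \<le> sfrak r A k" by (rule sfrak_ge[OF chains disj])
  finally show ?thesis .
qed

lemma sfrak_le_greene_word_of:
  assumes bij: "bij_betw w Sg Sg" and bd: "block_decreasing w" and realizes: "realizes w"
  shows "sfrak r A k \<le> greene (word_of d w) k"
proof -
  let ?g = "\<lambda>s. to_pos d (w s)"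
  have wS: "w ` Sg \<subseteq> Sg" using bij by (simp add: bij_betw_def)
  obtain C where C: "\<forall>l<k. C l \<subseteq> Ir r \<times> Ir r \<and> is_chain (C l)"
    "sfrak r A k = (\<Sum>(i,j)\<in>(\<Union>l<k. C l). A i j)"
    by (rule sfrak_attained)
  define S where "S l = {s \<in> Sg. cell w s \<in> C l}" for l
  have fam: "decr_family (word_of d w) k (\<lambda>l. ?g ` S l)" unfolding decr_family_def
  proof (intro allI impI)
    fix l assume "l < k"
    then have "decr_on w (S l)" unfolding S_def using decr_on_cell_preimage[OF wS bd] C(1) by blast
    then show "decr_in (word_of d w) (?g ` S l)" using decr_in_word_of_iff[OF bij] by (auto simp: S_def)
  qed
  have "(\<Union>l<k. C l) \<subseteq> Ir r \<times> Ir r" using C(1) by blast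
  then have "sfrak r A k = card {s \<in> Sg. cell w s \<in> (\<Union>l<k. C l)}"
    by (simp only: C(2) card_cell_in[OF wS realizes])
  also have "{s \<in> Sg. cell w s \<in> (\<Union>l<k. C l)} = (\<Union>l<k. S l)" unfolding S_def by auto
  also have "card (\<Union>l<k. S l) = card (\<Union>l<k. ?g ` S l)"
    using inj_on_to_pos_comp[OF bij] by (subst image_UN[symmetric], intro card_image[symmetric])
      (rule inj_on_subset, auto simp: S_def)
  also have "\<dots> \<le> greene (word_of d w) k" by (rule card_Union_le_greene[OF fam])
  finally show ?thesis .
qed

lemma greene_word_of:
  assumes "bij_betw w Sg Sg" "block_decreasing w" "realizes w"
  shows "greene (word_of d w) k = sfrak r A k"
  using greene_word_of_le_sfrak[OF assms(1,3)] sfrak_le_greene_word_of[OF assms] by (rule antisym)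

end

section \<open>Parabolic double cosets\<close>

definition signed_swap :: "int \<Rightarrow> int \<Rightarrow> int \<Rightarrow> int" where
  "signed_swap a b x = (if x = a then b else if x = b then a else if x = - a then - b else if x = - b then - a else x)"

lemma W_C_bij: "x \<in> W_C d \<Longrightarrow> bij_betw x (signedset d) (signedset d)"
  unfolding W_C_def by blast

lemma W_C_odd: "x \<in> W_C d \<Longrightarrow> s \<in> signedset d \<Longrightarrow> x (- s) = - x s"
  unfolding W_C_def by blast

lemma W_C_outside: "x \<in> W_C d \<Longrightarrow> s \<notin> signedset d \<Longrightarrow> x s = s"
  unfolding W_C_def by blast

lemma W_C_in: "x \<in> W_C d \<Longrightarrow> s \<in> signedset d \<Longrightarrow> x s \<in> signedset d"
  by (rule bij_betw_apply[OF W_C_bij])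

lemma W_C_inj: "x \<in> W_C d \<Longrightarrow> s \<in> signedset d \<Longrightarrow> t \<in> signedset d \<Longrightarrow> x s = x t \<longleftrightarrow> s = t"
  using W_C_bij unfolding bij_betw_def inj_on_def by metis

lemma W_C_surj: "x \<in> W_C d \<Longrightarrow> a \<in> signedset d \<Longrightarrow> \<exists>s\<in>signedset d. x s = a"
  using W_C_bij unfolding bij_betw_def by (metis imageE)

lemma W_C_comp: "x \<in> W_C d \<Longrightarrow> y \<in> W_C d \<Longrightarrow> x \<circ> y \<in> W_C d"
  unfolding W_C_def by (auto intro: bij_betw_trans)

lemma W_C_id: "id \<in> W_C d"
  unfolding W_C_def by simp

lemma W_par_comp: "x \<in> W_par r d lam \<Longrightarrow> y \<in> W_par r d lam \<Longrightarrow> x \<circ> y \<in> W_par r d lam"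
proof -
  assume x: "x \<in> W_par r d lam" and y: "y \<in> W_par r d lam"
  have "x \<in> W_C d" "y \<in> W_C d" using x y unfolding W_par_def by auto
  then have "x \<circ> y \<in> W_C d" by (rule W_C_comp)
  moreover have "(x \<circ> y) ` Rblk lam i = Rblk lam i" if "i \<in> Ir r" for i
  proof -
    have "(x \<circ> y) ` Rblk lam i = x ` (y ` Rblk lam i)" by (simp add: image_comp)
    then show ?thesis using x y that unfolding W_par_def by simp
  qed
  ultimately show ?thesis unfolding W_par_def by blast
qed

lemma W_par_id: "id \<in> W_par r d lam"
  unfolding W_par_def using W_C_id by simp

lemma signed_swap_invol:
  assumes "a \<noteq> 0" "b \<noteq> 0" shows "signed_swap a b (signed_swap a b x) = x"
proof -
  have "a \<noteq> - a" "b \<noteq> - b" using assms by auto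
  then show ?thesis unfolding signed_swap_def by auto
qed

lemma signed_swap_odd:
  assumes "a \<noteq> 0" "b \<noteq> 0" shows "signed_swap a b (- x) = - signed_swap a b x"
proof -
  have "a \<noteq> - a" "b \<noteq> - b" using assms by auto
  then show ?thesis unfolding signed_swap_def
    by (cases "x = a"; cases "x = b"; cases "x = - a"; cases "x = - b") auto
qed

lemma signed_swap_W_C:
  assumes "a \<in> signedset d" "b \<in> signedset d"
  shows "signed_swap a b \<in> W_C d"
proof -
  have a0: "a \<noteq> 0" "b \<noteq> 0" using assms by (auto simp: signedset_iff)
  have "signed_swap a b x \<in> signedset d" if "x \<in> signedset d" for x
    using that assms unfolding signed_swap_def by auto
  then have "bij_betw (signed_swap a b) (signedset d) (signedset d)"
    by (intro bij_betw_byWitness[where f' = "signed_swap a b"]) (auto simp: signed_swap_invol[OF a0])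
  moreover have "signed_swap a b x = x" if "x \<notin> signedset d" for x
    using that assms unfolding signed_swap_def by auto
  ultimately show ?thesis unfolding W_C_def using signed_swap_odd[OF a0] by blast
qed

context blocks
begin

lemma W_par_mem_iff:
  assumes "u \<in> W_par r d lam" "i \<in> Ir r" "z \<in> signedset d"
  shows "u z \<in> Rblk lam i \<longleftrightarrow> z \<in> Rblk lam i"
proof
  assume "z \<in> Rblk lam i"
  then show "u z \<in> Rblk lam i" using assms unfolding W_par_def by blast
next
  assume "u z \<in> Rblk lam i"
  then have "u z \<in> u ` Rblk lam i" using assms unfolding W_par_def by blast
  then obtain z' where z': "z' \<in> Rblk lam i" "u z = u z'" by blast
  have uW: "u \<in> W_C d" using assms unfolding W_par_def by blast
  have "z' \<in> signedset d" using Rblk_sub[OF assms(2)] z'(1) by blast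
  then have "z = z'" using W_C_inj[OF uW assms(3)] z'(2) by blast
  then show "z \<in> Rblk lam i" using z' by simp
qed

lemma blk_neq_neg: "x \<in> signedset d \<Longrightarrow> blk (- x) \<noteq> blk x"
  using blk_uminus blk_in[of x] by (auto simp: Ir_iff)

lemma blk_signed_swap:
  assumes "a \<in> signedset d" "b \<in> signedset d" "blk a = blk b" "x \<in> signedset d"
  shows "blk (signed_swap a b x) = blk x"
  using assms blk_uminus unfolding signed_swap_def by auto

lemma signed_swap_W_par:
  assumes i: "i \<in> Ir r" and a: "a \<in> Rblk lam i" and b: "b \<in> Rblk lam i"
  shows "signed_swap a b \<in> W_par r d lam"
proof -
  have ab: "a \<in> signedset d" "b \<in> signedset d" "blk a = blk b"
    using Rblk_blk[OF i a] Rblk_blk[OF i b] by auto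
  have W: "signed_swap a b \<in> W_C d" using ab(1,2) by (rule signed_swap_W_C)
  have "signed_swap a b ` Rblk lam j = Rblk lam j" if j: "j \<in> Ir r" for j
  proof -
    have "signed_swap a b x \<in> Rblk lam j" if "x \<in> Rblk lam j" for x
      using Rblk_eq[OF j] that W_C_in[OF W] blk_signed_swap[OF ab] by auto
    moreover have "a \<noteq> 0" "b \<noteq> 0" using ab by (auto simp: signedset_iff)
    ultimately have "bij_betw (signed_swap a b) (Rblk lam j) (Rblk lam j)"
      by (intro bij_betw_byWitness[where f' = "signed_swap a b"]) (auto simp: signed_swap_invol)
    then show ?thesis by (rule bij_betw_imp_surj_on)
  qed
  then show ?thesis unfolding W_par_def using W by blast
qed

end

context Pi_i_matrix
begin

abbreviation "Wr \<equiv> W_par r d (ro r A)"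
abbreviation "Wc \<equiv> W_par r d (co r A)"
abbreviation "DC y \<equiv> dcoset r d (ro r A) y (co r A)"

lemma DC_iff: "x \<in> DC y \<longleftrightarrow> (\<exists>u\<in>Wr. \<exists>v\<in>Wc. x = u \<circ> y \<circ> v)"
  unfolding dcoset_def by blast

lemma DC_self: "y \<in> DC y"
  unfolding DC_iff by (rule bexI[of _ id], rule bexI[of _ id]) (auto simp: W_par_id)

lemma DC_W_C: "y \<in> W_C d \<Longrightarrow> x \<in> DC y \<Longrightarrow> x \<in> W_C d"
proof -
  assume y: "y \<in> W_C d" and "x \<in> DC y"
  then obtain u v where uv: "u \<in> Wr" "v \<in> Wc" "x = u \<circ> y \<circ> v" unfolding DC_iff by blast
  have "u \<in> W_C d" "v \<in> W_C d" using uv unfolding W_par_def by auto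
  then show ?thesis using uv(3) y W_C_comp by metis
qed

lemma DC_left: "x \<in> DC y \<Longrightarrow> t \<in> Wr \<Longrightarrow> t \<circ> x \<in> DC y"
proof -
  assume "x \<in> DC y" "t \<in> Wr"
  then obtain u v where uv: "u \<in> Wr" "v \<in> Wc" "x = u \<circ> y \<circ> v" unfolding DC_iff by blast
  have "t \<circ> x = (t \<circ> u) \<circ> y \<circ> v" using uv(3) by (simp add: comp_assoc)
  moreover have "t \<circ> u \<in> Wr" by (rule W_par_comp[OF \<open>t \<in> Wr\<close> uv(1)])
  ultimately show ?thesis unfolding DC_iff using uv(2) by blast
qed

lemma DC_right: "x \<in> DC y \<Longrightarrow> t \<in> Wc \<Longrightarrow> x \<circ> t \<in> DC y"
proof -
  assume "x \<in> DC y" "t \<in> Wc"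
  then obtain u v where uv: "u \<in> Wr" "v \<in> Wc" "x = u \<circ> y \<circ> v" unfolding DC_iff by blast
  have "x \<circ> t = u \<circ> y \<circ> (v \<circ> t)" using uv(3) by (simp add: comp_assoc)
  moreover have "v \<circ> t \<in> Wc" by (rule W_par_comp[OF uv(2) \<open>t \<in> Wc\<close>])
  ultimately show ?thesis unfolding DC_iff using uv(1) by blast
qed

lemma DC_realizes:
  assumes y: "y \<in> W_C d" "realizes y" and x: "x \<in> DC y"
  shows "realizes x"
proof -
  obtain u v where uv: "u \<in> Wr" "v \<in> Wc" "x = u \<circ> y \<circ> v" using x unfolding DC_iff by blast
  have vW: "v \<in> W_C d" and uW: "u \<in> W_C d" using uv unfolding W_par_def by auto
  show ?thesis unfolding realizes_def
  proof (intro ballI)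
    fix i j assume ij: "i \<in> Ir r" "j \<in> Ir r"
    define X where "X = {s \<in> Rc j. x s \<in> Rr i}"
    have XS: "X \<subseteq> Sg" unfolding X_def using cb.Rblk_sub[OF ij(2)] by blast
    have "v ` X = {t \<in> Rc j. y t \<in> Rr i}"
    proof
      show "v ` X \<subseteq> {t \<in> Rc j. y t \<in> Rr i}"
      proof
        fix t assume "t \<in> v ` X"
        then obtain s where s: "s \<in> X" "t = v s" by blast
        have sS: "s \<in> Sg" using s XS by blast
        have "v s \<in> Rc j" using s cb.W_par_mem_iff[OF uv(2) ij(2) sS] unfolding X_def by blast
        moreover have "y (v s) \<in> Rr i"
          using s rb.W_par_mem_iff[OF uv(1) ij(1) W_C_in[OF y(1) W_C_in[OF vW sS]]] uv(3) unfolding X_def by simp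
        ultimately show "t \<in> {t \<in> Rc j. y t \<in> Rr i}" using s by simp
      qed
      show "{t \<in> Rc j. y t \<in> Rr i} \<subseteq> v ` X"
      proof
        fix t assume t: "t \<in> {t \<in> Rc j. y t \<in> Rr i}"
        then have "t \<in> v ` Rc j" using uv(2) ij(2) unfolding W_par_def by blast
        then obtain s where s: "s \<in> Rc j" "t = v s" by blast
        have tS: "t \<in> Sg" using t cb.Rblk_sub[OF ij(2)] by blast
        have "u (y t) \<in> Rr i" using t rb.W_par_mem_iff[OF uv(1) ij(1) W_C_in[OF y(1) tS]] by simp
        then have "s \<in> X" unfolding X_def using s uv(3) by simp
        then show "t \<in> v ` X" using s by blast
      qed
    qed
    moreover have "inj_on v X" using W_C_inj[OF vW] XS unfolding inj_on_def by blast
    ultimately have "card X = card {t \<in> Rc j. y t \<in> Rr i}" by (metis card_image)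
    then show "card {s \<in> Rc j. x s \<in> Rr i} = A i j" using y(2) ij unfolding realizes_def X_def by simp
  qed
qed

definition potential :: "(int \<Rightarrow> int) \<Rightarrow> int" where
  "potential x = (\<Sum>s\<in>Sg. (s + x s)\<^sup>2)"

lemma potential_nonneg: "0 \<le> potential x"
  unfolding potential_def by (intro sum_nonneg) simp

lemma potential_swap_less:
  assumes x: "x \<in> W_C d" and pq: "p \<in> Sg" "q \<in> Sg" "p < q" "q \<noteq> - p" and lt: "x p < x q"
    and x'1: "x' p = x q" "x' q = x p" "x' (- p) = x (- q)" "x' (- q) = x (- p)"
    and x'2: "\<And>s. s \<in> Sg \<Longrightarrow> s \<notin> {p, q, - p, - q} \<Longrightarrow> x' s = x s"
  shows "potential x' < potential x"
proof -
  define K where "K = {p, q, - p, - q}"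
  have KS: "K \<subseteq> Sg" unfolding K_def using pq by simp
  have p0: "p \<noteq> 0" "q \<noteq> 0" using pq by (auto simp: signedset_iff)
  have dist: "p \<noteq> q" "p \<noteq> - p" "q \<noteq> - q" "- p \<noteq> - q" "p \<noteq> - q" using pq p0 by auto
  have split: "(\<Sum>s\<in>Sg. f s) = (\<Sum>s\<in>Sg - K. f s) + (f p + f q + f (- p) + f (- q))" for f :: "int \<Rightarrow> int"
  proof -
    have "(\<Sum>s\<in>Sg. f s) = (\<Sum>s\<in>Sg - K. f s) + (\<Sum>s\<in>K. f s)"
      using KS by (metis add.commute finite_signedset sum.subset_diff)
    moreover have "(\<Sum>s\<in>K. f s) = f p + f q + f (- p) + f (- q)"
      unfolding K_def using dist by (simp add: add.assoc)
    ultimately show ?thesis by simp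
  qed
  have rest: "(\<Sum>s\<in>Sg - K. (s + x' s)\<^sup>2) = (\<Sum>s\<in>Sg - K. (s + x s)\<^sup>2)"
    using x'2 unfolding K_def by (intro sum.cong) auto
  have oddp: "x (- p) = - x p" and oddq: "x (- q) = - x q" using W_C_odd[OF x] pq by auto
  have key: "(p + x q)\<^sup>2 + (q + x p)\<^sup>2 + (- p + - x q)\<^sup>2 + (- q + - x p)\<^sup>2
      - ((p + x p)\<^sup>2 + (q + x q)\<^sup>2 + (- p + - x p)\<^sup>2 + (- q + - x q)\<^sup>2) = 4 * ((p - q) * (x q - x p))"
    by (simp add: power2_eq_square algebra_simps)
  have neg: "(p - q) * (x q - x p) < 0" using pq(3) lt by (simp add: mult_neg_pos)
  have "potential x' - potential x = 4 * ((p - q) * (x q - x p))"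
    unfolding potential_def using split[of "\<lambda>s. (s + x' s)\<^sup>2"] split[of "\<lambda>s. (s + x s)\<^sup>2"] rest x'1 oddp oddq key
    by simp
  then show ?thesis using neg by simp
qed

lemma potential_swap_right_less:
  assumes m: "m \<in> W_C d" and s: "s1 \<in> Sg" "s2 \<in> Sg" "s1 < s2" "s2 \<noteq> - s1" and lt: "m s1 < m s2"
  shows "potential (m \<circ> signed_swap s1 s2) < potential m"
proof (rule potential_swap_less[OF m s lt])
  have "s1 \<noteq> 0" "s2 \<noteq> 0" using s by (auto simp: signedset_iff)
  then show "(m \<circ> signed_swap s1 s2) s1 = m s2" "(m \<circ> signed_swap s1 s2) s2 = m s1"
    "(m \<circ> signed_swap s1 s2) (- s1) = m (- s2)" "(m \<circ> signed_swap s1 s2) (- s2) = m (- s1)"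
    unfolding signed_swap_def using s by auto
  show "(m \<circ> signed_swap s1 s2) s = m s" if "s \<notin> {s1, s2, - s1, - s2}" for s
    using that unfolding signed_swap_def by auto
qed

lemma potential_swap_left_less:
  assumes m: "m \<in> W_C d" and s: "s1 \<in> Sg" "s2 \<in> Sg" "s1 < s2" "m s2 \<noteq> - m s1" and lt: "m s1 < m s2"
  shows "potential (signed_swap (m s1) (m s2) \<circ> m) < potential m"
proof -
  let ?t = "signed_swap (m s1) (m s2)"
  have mS: "m s1 \<in> Sg" "m s2 \<in> Sg" using W_C_in[OF m] s(1,2) by auto
  have odd: "m (- s1) = - m s1" "m (- s2) = - m s2" using W_C_odd[OF m] s(1,2) by auto
  have "s2 \<noteq> - s1" using s(4) odd by auto
  then show ?thesis
  proof (rule potential_swap_less[OF m s(1-3) _ lt])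
    have "m s1 \<noteq> 0" "m s2 \<noteq> 0" using mS by (auto simp: signedset_iff)
    then show "(?t \<circ> m) s1 = m s2" "(?t \<circ> m) s2 = m s1" "(?t \<circ> m) (- s1) = m (- s2)"
      "(?t \<circ> m) (- s2) = m (- s1)"
      unfolding signed_swap_def using s(4) lt odd by auto
    fix s assume sS: "s \<in> Sg" "s \<notin> {s1, s2, - s1, - s2}"
    then have "m s \<noteq> m s1" "m s \<noteq> m s2" "m s \<noteq> m (- s1)" "m s \<noteq> m (- s2)"
      using W_C_inj[OF m] s(1,2) by auto
    then show "(?t \<circ> m) s = m s" unfolding signed_swap_def using odd by auto
  qed
qed

lemma block_decreasing_if_potential_min:
  assumes y: "y \<in> W_C d" and m: "m \<in> DC y" and mmin: "\<And>x. x \<in> DC y \<Longrightarrow> potential m \<le> potential x"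
  shows "block_decreasing m"
  unfolding block_decreasing_def
proof (intro ballI impI)
  fix s1 s2 assume s: "s1 \<in> Sg" "s2 \<in> Sg" "s1 < s2 \<and> (bc s1 = bc s2 \<or> br (m s1) = br (m s2))"
  have mW: "m \<in> W_C d" using DC_W_C[OF y m] .
  show "m s2 < m s1"
  proof (rule ccontr)
    assume "\<not> m s2 < m s1"
    moreover have "m s1 \<noteq> m s2" using W_C_inj[OF mW s(1,2)] s(3) by simp
    ultimately have lt: "m s1 < m s2" by simp
    consider "bc s1 = bc s2" | "br (m s1) = br (m s2)" using s(3) by blast
    then show False
    proof cases
      case 1
      then have "s1 \<in> Rc (bc s1)" "s2 \<in> Rc (bc s1)" "bc s1 \<in> Ir r" using cb.blk_in s(1,2) by metis+
      then have "m \<circ> signed_swap s1 s2 \<in> DC y" using DC_right[OF m] cb.signed_swap_W_par by blast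
      moreover have "s2 \<noteq> - s1" using cb.blk_neq_neg[OF s(1)] 1 by auto
      ultimately show False using mmin potential_swap_right_less[OF mW s(1,2) _ _ lt] s(3) by fastforce
    next
      case 2
      have mS: "m s1 \<in> Sg" "m s2 \<in> Sg" using W_C_in[OF mW] s(1,2) by auto
      then have "m s1 \<in> Rr (br (m s1))" "m s2 \<in> Rr (br (m s1))" "br (m s1) \<in> Ir r"
        using rb.blk_in 2 by metis+
      then have "signed_swap (m s1) (m s2) \<circ> m \<in> DC y" using DC_left[OF m] rb.signed_swap_W_par by blast
      moreover have "m s2 \<noteq> - m s1" using rb.blk_neq_neg[OF mS(1)] 2 by auto
      ultimately show False using mmin potential_swap_left_less[OF mW s(1,2) _ _ lt] s(3) by fastforce
    qed
  qed
qed

lemma DC_block_decreasing: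
  assumes y: "y \<in> W_C d"
  shows "\<exists>m\<in>DC y. block_decreasing m"
proof -
  obtain m where m: "m \<in> DC y" "\<forall>x. x \<in> DC y \<longrightarrow> nat (potential m) \<le> nat (potential x)"
    using ex_has_least_nat[of "\<lambda>x. x \<in> DC y" y "\<lambda>x. nat (potential x)"] DC_self by blast
  have "potential m \<le> potential x" if "x \<in> DC y" for x using m(2) that potential_nonneg[of m] potential_nonneg[of x] by force
  then show ?thesis using block_decreasing_if_potential_min[OF y m(1)] m(1) by blast
qed

end

section \<open>Length of signed permutations\<close>

text \<open>\<^term>\<open>2 * lenC d x\<close> counts the inversions of \<open>x\<close> on all of \<^term>\<open>signedset d\<close>: those among
  negative arguments mirror those among positive ones, and those with arguments of opposite signs
  correspond to the pairs \<open>(i, j)\<close> of positives with \<open>x i + x j < 0\<close>.\<close>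

lemma card_neg_sum_pairs:
  fixes x :: "int \<Rightarrow> int"
  shows "card {(i, j). i \<in> {1..int d} \<and> j \<in> {1..int d} \<and> x i + x j < 0}
      + card {p \<in> signedset d. 0 < p \<and> x p < 0}
    = 2 * card {(i, j). i \<in> {1..int d} \<and> j \<in> {1..int d} \<and> i \<le> j \<and> x i + x j < 0}"
proof -
  define P where "P = {1..int d}"
  define Mlt where "Mlt = {(i, j). i \<in> P \<and> j \<in> P \<and> i < j \<and> x i + x j < 0}"
  define Mgt where "Mgt = {(i, j). i \<in> P \<and> j \<in> P \<and> j < i \<and> x i + x j < 0}"
  define Meq where "Meq = {(i, j). i \<in> P \<and> j \<in> P \<and> i = j \<and> x i + x j < 0}"
  have fin: "finite Mlt" "finite Mgt" "finite Meq"
    unfolding Mlt_def Mgt_def Meq_def P_def by (auto intro: finite_subset[of _ "{1..int d} \<times> {1..int d}"])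
  have "{(i, j). i \<in> P \<and> j \<in> P \<and> x i + x j < 0} = Mlt \<union> Mgt \<union> Meq"
    unfolding Mlt_def Mgt_def Meq_def by auto
  moreover have "{(i, j). i \<in> P \<and> j \<in> P \<and> i \<le> j \<and> x i + x j < 0} = Mlt \<union> Meq"
    unfolding Mlt_def Meq_def by auto
  moreover have "card Mgt = card Mlt"
  proof -
    have "Mgt = (\<lambda>(i, j). (j, i)) ` Mlt" unfolding Mgt_def Mlt_def by (auto simp: image_iff add.commute)
    moreover have "inj_on (\<lambda>(i, j). (j, i)) Mlt" by (auto simp: inj_on_def)
    ultimately show ?thesis by (simp add: card_image)
  qed
  moreover have "card Meq = card {p \<in> signedset d. 0 < p \<and> x p < 0}"
  proof -
    have "Meq = (\<lambda>i. (i, i)) ` {p \<in> signedset d. 0 < p \<and> x p < 0}"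
      unfolding Meq_def P_def by (auto simp: signedset_iff)
    then show ?thesis by (simp add: card_image inj_on_def)
  qed
  moreover have "Mlt \<inter> Mgt = {}" "(Mlt \<union> Mgt) \<inter> Meq = {}" "Mlt \<inter> Meq = {}"
    unfolding Mlt_def Mgt_def Meq_def by auto
  ultimately show ?thesis using fin unfolding P_def by (simp add: card_Un_disjoint)
qed

lemma card_inversions_W_C:
  assumes x: "x \<in> W_C d"
  shows "card {(p, q). p \<in> signedset d \<and> q \<in> signedset d \<and> p < q \<and> x q < x p}
    = 2 * card {(i, j). i \<in> {1..int d} \<and> j \<in> {1..int d} \<and> i < j \<and> x j < x i}
      + card {(i, j). i \<in> {1..int d} \<and> j \<in> {1..int d} \<and> x i + x j < 0}"
proof -
  let ?S = "signedset d"
  define Pd where "Pd = {1..int d}"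
  let ?P = Pd
  define N where "N = {(i, j). i \<in> ?P \<and> j \<in> ?P \<and> i < j \<and> x j < x i}"
  define Ipp where "Ipp = {(p, q). p \<in> ?S \<and> q \<in> ?S \<and> p < q \<and> x q < x p \<and> 0 < p}"
  define Inn where "Inn = {(p, q). p \<in> ?S \<and> q \<in> ?S \<and> p < q \<and> x q < x p \<and> q < 0}"
  define Inp where "Inp = {(p, q). p \<in> ?S \<and> q \<in> ?S \<and> p < q \<and> x q < x p \<and> p < 0 \<and> 0 < q}"
  have P: "p \<in> ?P \<longleftrightarrow> p \<in> ?S \<and> 0 < p" for p by (auto simp: signedset_iff Pd_def)
  have odd: "x (- p) = - x p" if "p \<in> ?S" for p using W_C_odd[OF x that] .
  have fin: "finite Ipp" "finite Inn" "finite Inp"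
    unfolding Ipp_def Inn_def Inp_def by (auto intro: finite_subset[of _ "?S \<times> ?S"])
  have "{(p, q). p \<in> ?S \<and> q \<in> ?S \<and> p < q \<and> x q < x p} = Ipp \<union> Inn \<union> Inp"
  proof -
    have "p < 0 \<or> 0 < p" if "p \<in> ?S" for p using that by (auto simp: signedset_iff)
    then show ?thesis unfolding Ipp_def Inn_def Inp_def by auto
  qed
  moreover have "Ipp \<inter> Inn = {}" "(Ipp \<union> Inn) \<inter> Inp = {}" unfolding Ipp_def Inn_def Inp_def by auto
  moreover have "Ipp = N" unfolding Ipp_def N_def Pd_def by (auto simp: signedset_iff)
  moreover have "Inn = (\<lambda>(i, j). (- j, - i)) ` N"
  proof (intro equalityI subsetI)
    fix pq assume "pq \<in> Inn"
    then obtain p q where pq: "pq = (p, q)" "p \<in> ?S" "q \<in> ?S" "p < q" "x q < x p" "q < 0"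
      unfolding Inn_def by blast
    then have "(- q, - p) \<in> N" unfolding N_def using odd P by auto
    then show "pq \<in> (\<lambda>(i, j). (- j, - i)) ` N" using pq by (auto intro: rev_image_eqI)
  next
    fix pq assume "pq \<in> (\<lambda>(i, j). (- j, - i)) ` N"
    then obtain i j where "pq = (- j, - i)" "i \<in> ?P" "j \<in> ?P" "i < j" "x j < x i"
      unfolding N_def by auto
    then show "pq \<in> Inn" unfolding Inn_def using odd P by auto
  qed
  moreover have "Inp = (\<lambda>(i, j). (- i, j)) ` {(i, j). i \<in> ?P \<and> j \<in> ?P \<and> x i + x j < 0}"
  proof (intro equalityI subsetI)
    fix pq assume "pq \<in> Inp"
    then obtain p q where pq: "pq = (p, q)" "p \<in> ?S" "q \<in> ?S" "x q < x p" "p < 0" "0 < q"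
      unfolding Inp_def by blast
    then have "(- p, q) \<in> {(i, j). i \<in> ?P \<and> j \<in> ?P \<and> x i + x j < 0}" using odd P by auto
    then show "pq \<in> (\<lambda>(i, j). (- i, j)) ` {(i, j). i \<in> ?P \<and> j \<in> ?P \<and> x i + x j < 0}"
      using pq by (auto intro: rev_image_eqI)
  next
    fix pq assume "pq \<in> (\<lambda>(i, j). (- i, j)) ` {(i, j). i \<in> ?P \<and> j \<in> ?P \<and> x i + x j < 0}"
    then obtain i j where "pq = (- i, j)" "i \<in> ?P" "j \<in> ?P" "x i + x j < 0" by auto
    then show "pq \<in> Inp" unfolding Inp_def using odd P by auto
  qed
  ultimately show ?thesis using fin unfolding N_def Pd_def[symmetric]
    by (simp add: card_Un_disjoint card_image inj_on_def)
qed

lemma double_lenC: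
  assumes x: "x \<in> W_C d"
  shows "2 * lenC d x = card {(p, q). p \<in> signedset d \<and> q \<in> signedset d \<and> p < q \<and> x q < x p}
      + card {p \<in> signedset d. 0 < p \<and> x p < 0}"
  using card_inversions_W_C[OF x] card_neg_sum_pairs[of d x] unfolding lenC_def by simp

context Pi_i_matrix
begin

definition I2 :: "(int \<Rightarrow> int) \<Rightarrow> (int \<times> int) set" where
  "I2 x = {(p, q). p \<in> Sg \<and> q \<in> Sg \<and> p < q \<and> x q < x p}"

definition NI :: "(int \<Rightarrow> int) \<Rightarrow> (int \<times> int) set" where
  "NI x = {(p, q). p \<in> Sg \<and> q \<in> Sg \<and> p < q \<and> x p < x q}"

definition TT :: "(int \<times> int) set" where
  "TT = {(p, q). p \<in> Sg \<and> q \<in> Sg \<and> p < q}"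

definition J0 :: "((int \<times> int) \<times> (int \<times> int)) set" where
  "J0 = {(c1, c2). c1 \<in> Ir r \<times> Ir r \<and> c2 \<in> Ir r \<times> Ir r \<and> fst c1 < fst c2 \<and> snd c1 < snd c2}"

definition Bs :: "(int \<Rightarrow> int) \<Rightarrow> (int \<times> int) set" where
  "Bs x = {(p, q). p \<in> Sg \<and> q \<in> Sg \<and> (cell x p, cell x q) \<in> J0}"

definition F0 :: "(int \<times> int) set" where
  "F0 = {(i, j). i \<in> Ir r \<and> j \<in> Ir r \<and> i < 0 \<and> 0 < j}"

lemma finite_ordered_pairs: "finite TT"
proof -
  have "TT \<subseteq> Sg \<times> Sg" unfolding TT_def by auto
  then show ?thesis by (rule finite_subset) simp
qed

lemma card_inversions_noninversions:
  assumes x: "x \<in> W_C d"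
  shows "card (I2 x) + card (NI x) = card TT"
proof -
  have "TT = I2 x \<union> NI x"
  proof
    show "TT \<subseteq> I2 x \<union> NI x"
    proof
      fix pq assume "pq \<in> TT"
      then obtain p q where pq: "pq = (p, q)" "p \<in> Sg" "q \<in> Sg" "p < q" unfolding TT_def by blast
      have "x p \<noteq> x q" using W_C_inj[OF x pq(2,3)] pq(4) by simp
      then show "pq \<in> I2 x \<union> NI x" unfolding I2_def NI_def using pq by (auto simp: neq_iff)
    qed
    show "I2 x \<union> NI x \<subseteq> TT" unfolding I2_def NI_def TT_def by auto
  qed
  moreover have "I2 x \<inter> NI x = {}" unfolding I2_def NI_def by auto
  moreover have "finite (I2 x)" "finite (NI x)"
    using finite_ordered_pairs unfolding TT_def I2_def NI_def by (auto elim: finite_subset[rotated])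
  ultimately show ?thesis by (simp add: card_Un_disjoint)
qed

lemma up_pairs_subset_noninversions:
  assumes x: "x \<in> W_C d"
  shows "Bs x \<subseteq> NI x"
proof
  fix pq assume "pq \<in> Bs x"
  then obtain p q where pq: "pq = (p, q)" "p \<in> Sg" "q \<in> Sg" "(cell x p, cell x q) \<in> J0"
    unfolding Bs_def by blast
  have lt: "br (x p) < br (x q)" "bc p < bc q" using pq(4) unfolding J0_def cell_def by auto
  have "p < q" using cb.blk_less pq(2,3) lt(2) by blast
  moreover have "x p < x q" using rb.blk_less W_C_in[OF x pq(2)] W_C_in[OF x pq(3)] lt(1) by blast
  ultimately show "pq \<in> NI x" unfolding NI_def using pq by simp
qed

lemma noninversions_subset_up_pairs:
  assumes x: "x \<in> W_C d" and block_decreasing: "block_decreasing x"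
  shows "NI x \<subseteq> Bs x"
proof
  fix pq assume "pq \<in> NI x"
  then obtain p q where pq: "pq = (p, q)" "p \<in> Sg" "q \<in> Sg" "p < q" "x p < x q"
    unfolding NI_def by blast
  have ne: "bc p \<noteq> bc q" "br (x p) \<noteq> br (x q)"
  proof -
    have "\<not> x q < x p" using pq(5) by simp
    then show "bc p \<noteq> bc q" "br (x p) \<noteq> br (x q)"
      using block_decreasing pq(2,3,4) unfolding block_decreasing_def by blast+
  qed
  have xS: "x p \<in> Sg" "x q \<in> Sg" using W_C_in[OF x] pq by auto
  have "bc p \<le> bc q" using cb.blk_mono pq by simp
  moreover have "br (x p) \<le> br (x q)" using rb.blk_mono xS pq(5) by simp
  ultimately have "bc p < bc q" "br (x p) < br (x q)" using ne by auto
  moreover have "cell x p \<in> Ir r \<times> Ir r" "cell x q \<in> Ir r \<times> Ir r" using cell_in pq xS by auto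
  ultimately show "pq \<in> Bs x" unfolding Bs_def J0_def cell_def using pq by auto
qed

lemma card_up_pairs:
  assumes x: "x \<in> W_C d" and realizes: "realizes x"
  shows "card (Bs x) = (\<Sum>(c1, c2)\<in>J0. (case c1 of (i, j) \<Rightarrow> A i j) * (case c2 of (i, j) \<Rightarrow> A i j))"
proof -
  have "x ` Sg \<subseteq> Sg" using W_C_in[OF x] by blast
  moreover have "J0 \<subseteq> (Ir r \<times> Ir r) \<times> (Ir r \<times> Ir r)" unfolding J0_def by auto
  ultimately show ?thesis unfolding Bs_def using card_cell_pairs_in realizes by blast
qed

lemma card_sign_changes:
  assumes x: "x \<in> W_C d" and realizes: "realizes x"
  shows "card {p \<in> Sg. 0 < p \<and> x p < 0} = (\<Sum>(i,j)\<in>F0. A i j)"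
proof -
  have xs: "x ` Sg \<subseteq> Sg" using W_C_in[OF x] by blast
  have "{p \<in> Sg. 0 < p \<and> x p < 0} = {p \<in> Sg. cell x p \<in> F0}"
  proof -
    have "0 < p \<and> x p < 0 \<longleftrightarrow> cell x p \<in> F0" if p: "p \<in> Sg" for p
    proof -
      have xp: "x p \<in> Sg" using W_C_in[OF x p] .
      have "x p < 0 \<longleftrightarrow> br (x p) < 0"
        using rb.blk_sign[OF xp] rb.blk_in[OF xp] xp by (auto simp: signedset_iff Ir_iff)
      moreover have "0 < p \<longleftrightarrow> 0 < bc p" using cb.blk_sign[OF p] by simp
      moreover have "cell x p \<in> Ir r \<times> Ir r" using cell_in p xp by blast
      ultimately show ?thesis unfolding F0_def cell_def by auto
    qed
    then show ?thesis by blast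
  qed
  moreover have "F0 \<subseteq> Ir r \<times> Ir r" unfolding F0_def by auto
  ultimately show ?thesis using card_cell_in[OF xs realizes] by simp
qed

lemma lenC_cmp:
  assumes x: "x \<in> W_C d" "realizes x" and m: "m \<in> W_C d" "realizes m" "block_decreasing m"
  shows "lenC d x \<le> lenC d m" and "lenC d m \<le> lenC d x \<Longrightarrow> block_decreasing x"
proof -
  have fNI: "finite (NI x)" using finite_ordered_pairs unfolding TT_def NI_def by (auto elim: finite_subset[rotated])
  have B: "card (Bs x) = card (Bs m)" using card_up_pairs x m by simp
  have Bm: "Bs m = NI m" using up_pairs_subset_noninversions[OF m(1)] noninversions_subset_up_pairs[OF m(1) m(3)] by blast
  have NIx: "card (Bs x) \<le> card (NI x)" using up_pairs_subset_noninversions[OF x(1)] fNI by (rule card_mono[rotated])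
  have neg: "card {p \<in> Sg. 0 < p \<and> x p < 0} = card {p \<in> Sg. 0 < p \<and> m p < 0}"
    using card_sign_changes x m by simp
  have Lx: "2 * lenC d x = card (I2 x) + card {p \<in> Sg. 0 < p \<and> x p < 0}"
    using double_lenC[OF x(1)] unfolding I2_def by simp
  have Lm: "2 * lenC d m = card (I2 m) + card {p \<in> Sg. 0 < p \<and> m p < 0}"
    using double_lenC[OF m(1)] unfolding I2_def by simp
  have Ix: "card (I2 x) + card (NI x) = card TT" by (rule card_inversions_noninversions[OF x(1)])
  have Im: "card (I2 m) + card (NI m) = card TT" by (rule card_inversions_noninversions[OF m(1)])
  show "lenC d x \<le> lenC d m" using Lx Lm Ix Im neg B Bm NIx by simp
  assume "lenC d m \<le> lenC d x"
  then have "card (NI x) \<le> card (Bs x)" using Lx Lm Ix Im neg B Bm by simp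
  then have eq: "NI x = Bs x" using up_pairs_subset_noninversions[OF x(1)] fNI by (metis card_seteq)
  show "block_decreasing x" unfolding block_decreasing_def
  proof (intro ballI impI)
    fix s1 s2 assume s: "s1 \<in> Sg" "s2 \<in> Sg" "s1 < s2 \<and> (bc s1 = bc s2 \<or> br (x s1) = br (x s2))"
    show "x s2 < x s1"
    proof (rule ccontr)
      assume "\<not> x s2 < x s1"
      moreover have "x s1 \<noteq> x s2" using W_C_inj[OF x(1) s(1,2)] s(3) by simp
      ultimately have "x s1 < x s2" by simp
      then have "(s1, s2) \<in> Bs x" using eq s unfolding NI_def by auto
      then show False using s(3) unfolding Bs_def J0_def cell_def by auto
    qed
  qed
qed

end

lemma sum_Ir_pos_neg:
  "(\<Sum>j\<in>Ir r. f j) = (\<Sum>j\<in>{j\<in>Ir r. 0 < j}. f j) + (\<Sum>j\<in>{j\<in>Ir r. 0 < j}. f (- j))"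
proof -
  let ?J = "{j\<in>Ir r. 0 < j}"
  have "Ir r = ?J \<union> uminus ` ?J"
  proof (intro equalityI subsetI)
    fix j assume "j \<in> Ir r"
    then show "j \<in> ?J \<union> uminus ` ?J" by (cases "0 < j") (auto simp: Ir_iff intro!: image_eqI[of _ _ "- j"])
  qed auto
  then have "(\<Sum>j\<in>Ir r. f j) = (\<Sum>j\<in>?J \<union> uminus ` ?J. f j)" by (rule arg_cong)
  also have "\<dots> = (\<Sum>j\<in>?J. f j) + (\<Sum>j\<in>uminus ` ?J. f j)"
    by (rule sum.union_disjoint) auto
  also have "(\<Sum>j\<in>uminus ` ?J. f j) = (\<Sum>j\<in>?J. f (- j))" by (simp add: sum.reindex inj_on_def)
  finally show ?thesis .
qed

definition odd_ext :: "nat \<Rightarrow> (int \<Rightarrow> int) \<Rightarrow> int \<Rightarrow> int" where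
  "odd_ext d f s = (if s \<in> {1..int d} then f s else if - s \<in> {1..int d} then - f (- s) else s)"

lemma odd_ext_uminus: "odd_ext d f (- s) = - odd_ext d f s"
  unfolding odd_ext_def by (cases "0 < s") auto

lemma odd_ext_in_W_C:
  assumes f: "bij_betw f {1..int d} V" and V: "V \<subseteq> signedset d"
    and half: "\<And>v. v \<in> signedset d \<Longrightarrow> v \<in> V \<longleftrightarrow> - v \<notin> V"
  shows "odd_ext d f \<in> W_C d"
proof -
  let ?y = "odd_ext d f"
  have pos: "s \<in> {1..int d} \<longleftrightarrow> s \<in> signedset d \<and> 0 < s" for s by (auto simp: signedset_iff)
  have fV: "f p \<in> V" if "p \<in> {1..int d}" for p using bij_betw_apply[OF f that] .
  have "?y s \<in> signedset d" if "s \<in> signedset d" for s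
  proof (cases "0 < s")
    case True
    then have s: "s \<in> {1..int d}" using pos that by blast
    then have "?y s = f s" unfolding odd_ext_def by simp
    then show ?thesis using fV[OF s] V by auto
  next
    case False
    then have "- s \<in> {1..int d}" "s \<notin> {1..int d}" using that by (auto simp: signedset_iff)
    then have "?y s = - f (- s)" unfolding odd_ext_def by simp
    then show ?thesis using fV[OF \<open>- s \<in> _\<close>] V by auto
  qed
  then have "?y ` signedset d \<subseteq> signedset d" by blast
  moreover have "signedset d \<subseteq> ?y ` signedset d"
  proof
    fix v assume v: "v \<in> signedset d"
    show "v \<in> ?y ` signedset d"
    proof (cases "v \<in> V")
      case True
      then obtain p where p: "p \<in> {1..int d}" "f p = v" using f unfolding bij_betw_def by blast
      then have "p \<in> signedset d" "?y p = v" using pos unfolding odd_ext_def by auto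
      then show ?thesis by (metis rev_image_eqI)
    next
      case False
      then have "- v \<in> f ` {1..int d}" using f half[OF v] unfolding bij_betw_def by simp
      then obtain p where p: "p \<in> {1..int d}" "f p = - v" by (metis imageE)
      then have "- p \<in> signedset d" "?y (- p) = v" unfolding odd_ext_def by (auto simp: signedset_iff)
      then show ?thesis by (metis rev_image_eqI)
    qed
  qed
  ultimately have img: "?y ` signedset d = signedset d" by (rule subset_antisym)
  have "inj_on ?y (signedset d)"
    by (rule eq_card_imp_inj_on[OF finite_signedset]) (simp only: img)
  then have "bij_betw ?y (signedset d) (signedset d)" using img by (rule bij_betw_imageI)
  moreover have "?y s = s" if "s \<notin> signedset d" for s
    using that unfolding odd_ext_def by (auto simp: signedset_iff)
  ultimately show ?thesis unfolding W_C_def using odd_ext_uminus by blast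
qed

context Pi_i_matrix
begin

lemma card_Rblk_inter_image:
  assumes "y \<in> W_C d" "j \<in> Ir r"
  shows "card (Rr i \<inter> y ` Rc j) = card {s \<in> Rc j. y s \<in> Rr i}"
proof -
  have "Rr i \<inter> y ` Rc j = y ` {s \<in> Rc j. y s \<in> Rr i}" by auto
  moreover have "inj_on y {s \<in> Rc j. y s \<in> Rr i}"
    using W_C_inj[OF assms(1)] cb.Rblk_sub[OF assms(2)] unfolding inj_on_def by blast
  ultimately show ?thesis by (simp add: card_image)
qed

lemma realizes_iff_card:
  "y \<in> W_C d \<Longrightarrow> realizes y \<longleftrightarrow> (\<forall>i\<in>Ir r. \<forall>j\<in>Ir r. card (Rr i \<inter> y ` Rc j) = A i j)"
  unfolding realizes_def using card_Rblk_inter_image by auto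

lemma card_cell_uminus:
  assumes y: "y \<in> W_C d" and ij: "i \<in> Ir r" "j \<in> Ir r"
  shows "card {s \<in> Rc (- j). y s \<in> Rr (- i)} = card {s \<in> Rc j. y s \<in> Rr i}"
proof -
  have col: "s \<in> Rc (- j) \<longleftrightarrow> - s \<in> Rc j" for s
    using cb.Rblk_eq[OF ij(2)] cb.Rblk_eq[of "- j"] ij(2) cb.blk_uminus[of s]
    by (cases "s \<in> Sg") auto
  have row: "y s \<in> Rr (- i) \<longleftrightarrow> y (- s) \<in> Rr i" if "s \<in> Sg" for s
    using rb.Rblk_eq[OF ij(1)] rb.Rblk_eq[of "- i"] ij(1) W_C_odd[OF y that] W_C_in[OF y that]
      rb.blk_uminus[of "y s"] by auto
  have "{s \<in> Rc (- j). y s \<in> Rr (- i)} = uminus ` {s \<in> Rc j. y s \<in> Rr i}"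
  proof (intro equalityI subsetI)
    fix s assume "s \<in> {s \<in> Rc (- j). y s \<in> Rr (- i)}"
    moreover have "s \<in> Sg" using calculation cb.Rblk_sub[of "- j"] ij(2) by auto
    ultimately have "- s \<in> {s \<in> Rc j. y s \<in> Rr i}" using col row by simp
    then show "s \<in> uminus ` {s \<in> Rc j. y s \<in> Rr i}" by (metis minus_minus rev_image_eqI)
  next
    fix s assume "s \<in> uminus ` {s \<in> Rc j. y s \<in> Rr i}"
    then obtain t where t: "t \<in> Rc j" "y t \<in> Rr i" "s = - t" by blast
    moreover have "t \<in> Sg" using t(1) cb.Rblk_sub[OF ij(2)] by blast
    ultimately show "s \<in> {s \<in> Rc (- j). y s \<in> Rr (- i)}" using col row[of s] by simp
  qed
  then show ?thesis by (simp add: card_image)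
qed

text \<open>Given subsets \<open>X i \<subseteq> R\<^sub>i\<close> of the positive row blocks, keep \<open>X i\<close> and the negatives of
  \<open>R\<^sub>i - X i\<close>; this picks exactly one of \<open>\<plusminus>v\<close> for every \<open>v\<close>.\<close>

definition signed_half :: "(int \<Rightarrow> int set) \<Rightarrow> int set" where
  "signed_half X = {v \<in> Sg. (0 < v \<and> v \<in> X (br v)) \<or> (v < 0 \<and> - v \<notin> X (br (- v)))}"

lemma signed_half_uminus: "v \<in> Sg \<Longrightarrow> v \<in> signed_half X \<longleftrightarrow> - v \<notin> signed_half X"
  unfolding signed_half_def by (auto simp: signedset_iff)

lemma signed_half_row_pos:
  assumes i: "i \<in> Ir r" "0 < i" and X: "X i \<subseteq> Rr i"
  shows "{v \<in> signed_half X. br v = i} = X i"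
proof -
  have "v \<in> signed_half X \<and> br v = i \<longleftrightarrow> v \<in> X i" for v
  proof
    assume "v \<in> X i"
    then have v: "v \<in> Sg" "br v = i" using X rb.Rblk_eq[OF i(1)] by auto
    then have "0 < v" using rb.blk_sign i(2) by auto
    then show "v \<in> signed_half X \<and> br v = i" using v \<open>v \<in> X i\<close> unfolding signed_half_def by auto
  next
    assume v: "v \<in> signed_half X \<and> br v = i"
    then have "v \<in> Sg" "0 < v" using rb.blk_sign i(2) unfolding signed_half_def by auto
    then show "v \<in> X i" using v unfolding signed_half_def by auto
  qed
  then show ?thesis by blast
qed

lemma signed_half_row_neg:
  assumes i: "i \<in> Ir r" "i < 0"
  shows "{v \<in> signed_half X. br v = i} = uminus ` (Rr (- i) - X (- i))"
proof -
  have mi: "- i \<in> Ir r" using i by simp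
  have pt: "v \<in> signed_half X \<and> br v = i \<longleftrightarrow> - v \<in> Rr (- i) - X (- i)" for v
  proof
    assume v: "v \<in> signed_half X \<and> br v = i"
    then have vS: "v \<in> Sg" unfolding signed_half_def by blast
    then have "v < 0" "br (- v) = - i"
      using v rb.blk_sign[OF vS] i(2) rb.blk_uminus[OF vS] by (auto simp: signedset_iff)
    then show "- v \<in> Rr (- i) - X (- i)"
      using v vS rb.Rblk_eq[OF mi] unfolding signed_half_def by auto
  next
    assume v: "- v \<in> Rr (- i) - X (- i)"
    then have mv: "- v \<in> Sg" "br (- v) = - i" using rb.Rblk_eq[OF mi] by auto
    then have "v \<in> Sg" "v < 0" "br v = i" using rb.blk_sign[OF mv(1)] i(2) rb.blk_uminus[OF mv(1)] by auto
    then show "v \<in> signed_half X \<and> br v = i" using v mv unfolding signed_half_def by auto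
  qed
  show ?thesis
  proof (intro equalityI subsetI)
    fix v assume "v \<in> {v \<in> signed_half X. br v = i}"
    then have "- v \<in> Rr (- i) - X (- i)" using pt by blast
    then show "v \<in> uminus ` (Rr (- i) - X (- i))" by (metis minus_minus rev_image_eqI)
  next
    fix v assume "v \<in> uminus ` (Rr (- i) - X (- i))"
    then obtain u where "u \<in> Rr (- i) - X (- i)" "v = - u" by blast
    then show "v \<in> {v \<in> signed_half X. br v = i}" using pt[of v] by simp
  qed
qed

lemma exists_half_with_row_counts:
  obtains V where "V \<subseteq> Sg" "\<And>v. v \<in> Sg \<Longrightarrow> v \<in> V \<longleftrightarrow> - v \<notin> V"
    "\<And>i. i \<in> Ir r \<Longrightarrow> card {v\<in>V. br v = i} = (\<Sum>j\<in>{j\<in>Ir r. 0 < j}. A i j)"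
proof -
  define c where "c i = (\<Sum>j\<in>{j\<in>Ir r. 0 < j}. A i j)" for i
  have "c i \<le> card (Rr i)" if "i \<in> Ir r" for i
  proof -
    have "c i \<le> (\<Sum>j\<in>Ir r. A i j)" unfolding c_def by (rule sum_mono2) auto
    then show ?thesis using rb.card_Rblk[OF that] ro_sym[OF that] that unfolding ro_def
      by (cases "0 < i") (auto simp: abs_if)
  qed
  then have "\<forall>i. \<exists>X. i \<in> Ir r \<longrightarrow> X \<subseteq> Rr i \<and> card X = c i"
    by (meson obtain_subset_with_card_n)
  then obtain X where X: "\<And>i. i \<in> Ir r \<Longrightarrow> X i \<subseteq> Rr i \<and> card (X i) = c i" by metis
  have "card {v \<in> signed_half X. br v = i} = c i" if i: "i \<in> Ir r" for i
  proof (cases "0 < i")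
    case True
    then show ?thesis using signed_half_row_pos[OF i True] X[OF i] by simp
  next
    case False
    then have mi: "- i \<in> Ir r" "i < 0" using i by (auto simp: Ir_iff)
    have "card {v \<in> signed_half X. br v = i} = card (Rr (- i)) - c (- i)"
      using signed_half_row_neg[OF i mi(2)] X[OF mi(1)] finite_subset[of "X (- i)" "Rr (- i)"]
      by (simp add: card_image card_Diff_subset)
    also have "card (Rr (- i)) = (\<Sum>j\<in>Ir r. A (- i) j)"
      using rb.card_Rblk[OF mi(1)] mi unfolding ro_def by simp
    also have "\<dots> = c (- i) + (\<Sum>j\<in>{j\<in>Ir r. 0 < j}. A (- i) (- j))"
      unfolding c_def by (rule sum_Ir_pos_neg)
    also have "(\<Sum>j\<in>{j\<in>Ir r. 0 < j}. A (- i) (- j)) = c i"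
      unfolding c_def using A_sym[OF i] by (intro sum.cong) auto
    finally show ?thesis by simp
  qed
  then show ?thesis using that[of "signed_half X"] signed_half_uminus unfolding c_def signed_half_def
    by blast
qed

lemma exists_realizing: "\<exists>y\<in>W_C d. realizes y"
proof -
  define J where "J = {j\<in>Ir r. 0 < j}"
  obtain V where V: "V \<subseteq> Sg" "\<And>v. v \<in> Sg \<Longrightarrow> v \<in> V \<longleftrightarrow> - v \<notin> V"
    "\<And>i. i \<in> Ir r \<Longrightarrow> card {v\<in>V. br v = i} = (\<Sum>j\<in>J. A i j)"
    by (rule exists_half_with_row_counts[folded J_def]) blast
  have pos: "s \<in> {1..int d} \<longleftrightarrow> s \<in> Sg \<and> 0 < s" for s by (auto simp: signedset_iff)
  have RcJ: "Rc j = {p\<in>{1..int d}. bc p = j}" if "j \<in> J" for j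
    using cb.Rblk_eq[of j] cb.blk_sign that pos unfolding J_def by auto
  have cols: "\<forall>j\<in>J. card {p\<in>{1..int d}. bc p = j} = (\<Sum>i\<in>Ir r. A i j)"
  proof
    fix j assume j: "j \<in> J"
    then have "card (Rc j) = co r A j" using cb.card_Rblk unfolding J_def by simp
    then show "card {p\<in>{1..int d}. bc p = j} = (\<Sum>i\<in>Ir r. A i j)"
      using RcJ[OF j] unfolding co_def by simp
  qed
  have "bc p \<in> J" if "p \<in> {1..int d}" for p
  proof -
    have "p \<in> Sg" "0 < p" using that by (auto simp: signedset_iff)
    then show ?thesis using cb.blk_in cb.blk_sign unfolding J_def by auto
  qed
  then have bc_img: "bc ` {1..int d} \<subseteq> J" by blast
  have br_img: "br ` V \<subseteq> Ir r" using V(1) rb.blk_in by blast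
  have fin: "finite V" "finite J" using finite_subset[OF V(1)] unfolding J_def by auto
  have rows: "\<forall>i\<in>Ir r. card {v\<in>V. br v = i} = (\<Sum>j\<in>J. A i j)" using V(3) by blast
  obtain f where f: "bij_betw f {1..int d} V"
    "\<forall>i\<in>Ir r. \<forall>j\<in>J. card {p\<in>{1..int d}. bc p = j \<and> br (f p) = i} = A i j"
    using exists_bij_with_cell_counts[OF finite_atLeastAtMost_int fin(1) finite_Ir fin(2) bc_img br_img
        cols rows] by blast
  define y where "y = odd_ext d f"
  have y: "y \<in> W_C d" unfolding y_def using f(1) V(1,2) by (rule odd_ext_in_W_C)
  have pos_cells: "card {s \<in> Rc j. y s \<in> Rr i} = A i j" if "i \<in> Ir r" "j \<in> J" for i j
  proof -
    have "{s \<in> Rc j. y s \<in> Rr i} = {p\<in>{1..int d}. bc p = j \<and> br (f p) = i}"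
      using RcJ[OF that(2)] rb.Rblk_eq[OF that(1)] bij_betw_apply[OF f(1)] V(1)
      unfolding y_def odd_ext_def by auto
    then show ?thesis using f(2) that by simp
  qed
  have "realizes y" unfolding realizes_def
  proof (intro ballI)
    fix i j assume ij: "i \<in> Ir r" "j \<in> Ir r"
    show "card {s \<in> Rc j. y s \<in> Rr i} = A i j"
    proof (cases "0 < j")
      case True
      then show ?thesis using pos_cells ij unfolding J_def by simp
    next
      case False
      then have "- j \<in> J" using ij unfolding J_def by (auto simp: Ir_iff)
      then show ?thesis
        using pos_cells[of "- i" "- j"] card_cell_uminus[OF y, of "- i" "- j"] A_sym ij by simp
    qed
  qed
  then show ?thesis using y by blast
qed

end

context Pi_i_matrix
begin

lemma block_decreasing_unique_aux:
  assumes x: "x \<in> W_C d" "block_decreasing x" "realizes x" and x': "x' \<in> W_C d" "block_decreasing x'" "realizes x'"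
    and p: "p \<in> Sg" and below: "\<And>s. s \<in> Sg \<Longrightarrow> s < p \<Longrightarrow> x s = x' s"
    and lt: "br (x' p) < br (x p)"
  shows False
proof -
  define i where "i = br (x p)"
  define j where "j = bc p"
  have xp: "x p \<in> Sg" "x' p \<in> Sg" using W_C_in x(1) x'(1) p by auto
  have ij: "i \<in> Ir r" "j \<in> Ir r" "x p \<in> Rr i" "p \<in> Rc j"
    using rb.blk_in[OF xp(1)] cb.blk_in[OF p] unfolding i_def j_def by auto
  define K where "K = {s \<in> Rc j. x s \<in> Rr i}"
  define K' where "K' = {s \<in> Rc j. x' s \<in> Rr i}"
  have cK: "card K = card K'" using x(3) x'(3) ij unfolding realizes_def K_def K'_def by simp
  have fin: "finite K" "finite K'" unfolding K_def K'_def by auto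
  have lo: "{s \<in> K. s < p} = {s \<in> K'. s < p}"
    unfolding K_def K'_def using below cb.Rblk_sub[OF ij(2)] by auto
  have spl: "card A' = card {s \<in> A'. s < p} + card {s \<in> A'. \<not> s < p}" if "finite A'" for A'
  proof -
    have "A' = {s \<in> A'. s < p} \<union> {s \<in> A'. \<not> s < p}" by auto
    moreover have "{s \<in> A'. s < p} \<inter> {s \<in> A'. \<not> s < p} = {}" by auto
    ultimately show ?thesis using that by (metis (no_types, lifting) card_Un_disjoint finite_Un)
  qed
  have "card {s \<in> K'. \<not> s < p} = card {s \<in> K. \<not> s < p}"
    using spl[OF fin(1)] spl[OF fin(2)] cK lo by simp
  moreover have "p \<in> {s \<in> K. \<not> s < p}" unfolding K_def using ij by simp
  moreover have "finite {s \<in> K. \<not> s < p}" using fin by simp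
  ultimately have "card {s \<in> K'. \<not> s < p} \<noteq> 0" by (metis card_0_eq empty_iff)
  then obtain q where q: "q \<in> K'" "\<not> q < p" by (metis (no_types, lifting) Collect_empty_eq card.empty)
  have qS: "q \<in> Sg" using q cb.Rblk_sub[OF ij(2)] unfolding K'_def by blast
  have bq: "bc q = j" "br (x' q) = i" using q cb.Rblk_blk[OF ij(2)] rb.Rblk_blk[OF ij(1)] unfolding K'_def by auto
  have "q \<noteq> p" using bq(2) lt unfolding i_def by auto
  then have pq: "p < q" using q(2) by simp
  then have "x' q < x' p" using x'(2) p qS bq(1) unfolding block_decreasing_def j_def by auto
  moreover have "x' p < x' q" using rb.blk_less[OF xp(2) W_C_in[OF x'(1) qS]] bq(2) lt unfolding i_def by simp
  ultimately show False by simp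
qed

lemma block_decreasing_unique:
  assumes x: "x \<in> W_C d" "block_decreasing x" "realizes x" and x': "x' \<in> W_C d" "block_decreasing x'" "realizes x'"
  shows "x = x'"
proof (rule ccontr)
  assume ne: "x \<noteq> x'"
  have "\<exists>s. x s \<noteq> x' s" using ne by auto
  then obtain s0 where s0: "x s0 \<noteq> x' s0" by blast
  have s0S: "s0 \<in> Sg" using s0 W_C_outside[OF x(1)] W_C_outside[OF x'(1)] by metis
  define Dif where "Dif = {s \<in> Sg. x s \<noteq> x' s}"
  have fD: "finite Dif" "Dif \<noteq> {}" unfolding Dif_def using s0 s0S by auto
  define p where "p = Min Dif"
  have pD: "p \<in> Dif" unfolding p_def using fD by (rule Min_in)
  have pS: "p \<in> Sg" and pne: "x p \<noteq> x' p" using pD unfolding Dif_def by auto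
  have below: "x s = x' s" if "s \<in> Sg" "s < p" for s
  proof (rule ccontr)
    assume "x s \<noteq> x' s"
    then have "s \<in> Dif" unfolding Dif_def using that by simp
    then have "p \<le> s" unfolding p_def using fD by simp
    then show False using that by simp
  qed
  consider "br (x' p) < br (x p)" | "br (x p) < br (x' p)" | "br (x p) = br (x' p)" by linarith
  then show False
  proof cases
    case 1
    then show False using block_decreasing_unique_aux[OF x x' pS below] by blast
  next
    case 2
    then show False using block_decreasing_unique_aux[OF x' x pS] below by (metis)
  next
    case 3
    have xpS: "x p \<in> Sg" "x' p \<in> Sg" using W_C_in x(1) x'(1) pS by auto
    obtain q where q: "q \<in> Sg" "x q = x' p" using W_C_surj[OF x(1) xpS(2)] by blast
    have "q \<noteq> p" using q pne by auto
    moreover have "\<not> q < p"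
    proof
      assume "q < p"
      then have "x' q = x' p" using below q by simp
      then have "q = p" using W_C_inj[OF x'(1) q(1) pS] by simp
      then show False using \<open>q < p\<close> by simp
    qed
    ultimately have "p < q" by simp
    then have lt1: "x' p < x p" using x(2) pS q 3 unfolding block_decreasing_def by metis
    obtain q' where q': "q' \<in> Sg" "x' q' = x p" using W_C_surj[OF x'(1) xpS(1)] by blast
    have "q' \<noteq> p" using q' pne by auto
    moreover have "\<not> q' < p"
    proof
      assume "q' < p"
      then have "x q' = x p" using below q' by simp
      then have "q' = p" using W_C_inj[OF x(1) q'(1) pS] by simp
      then show False using \<open>q' < p\<close> by simp
    qed
    ultimately have "p < q'" by simp
    then have "x p < x' p" using x'(2) pS q' 3 unfolding block_decreasing_def by metis
    then show False using lt1 by simp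
  qed
qed

lemma wAplus_props: "wAplus r d A \<in> W_C d \<and> block_decreasing (wAplus r d A) \<and> realizes (wAplus r d A)"
proof -
  define Q where "Q w \<longleftrightarrow> (\<exists>y\<in>W_C d. (\<forall>i\<in>Ir r. \<forall>j\<in>Ir r. card (Rr i \<inter> y ` Rc j) = A i j) \<and>
      w \<in> DC y \<and> (\<forall>v\<in>DC y. lenC d v \<le> lenC d w))" for w
  have W: "wAplus r d A = (THE w. Q w)" unfolding wAplus_def Q_def by simp
  have props: "w \<in> W_C d \<and> block_decreasing w \<and> realizes w" if "Q w" for w
  proof -
    obtain y where y: "y \<in> W_C d" "\<forall>i\<in>Ir r. \<forall>j\<in>Ir r. card (Rr i \<inter> y ` Rc j) = A i j"
      "w \<in> DC y" "\<forall>v\<in>DC y. lenC d v \<le> lenC d w" using \<open>Q w\<close> unfolding Q_def by blast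
    have my: "realizes y" using realizes_iff_card[OF y(1)] y(2) by blast
    have wW: "w \<in> W_C d" and mw: "realizes w" using DC_W_C[OF y(1) y(3)] DC_realizes[OF y(1) my y(3)] by auto
    obtain m where m: "m \<in> DC y" "block_decreasing m" using DC_block_decreasing[OF y(1)] by blast
    have mW: "m \<in> W_C d" and mm: "realizes m" using DC_W_C[OF y(1) m(1)] DC_realizes[OF y(1) my m(1)] by auto
    have "lenC d m \<le> lenC d w" using y(4) m(1) by blast
    then have "block_decreasing w" using lenC_cmp(2)[OF wW mw mW mm m(2)] by blast
    then show ?thesis using wW mw by blast
  qed
  have ex: "\<exists>w. Q w"
  proof -
    obtain y where y: "y \<in> W_C d" "\<forall>i\<in>Ir r. \<forall>j\<in>Ir r. card (Rr i \<inter> y ` Rc j) = A i j"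
      using exists_realizing realizes_iff_card by blast
    have my: "realizes y" using realizes_iff_card[OF y(1)] y(2) by blast
    obtain m where m: "m \<in> DC y" "block_decreasing m" using DC_block_decreasing[OF y(1)] by blast
    have mW: "m \<in> W_C d" and mm: "realizes m" using DC_W_C[OF y(1) m(1)] DC_realizes[OF y(1) my m(1)] by auto
    have "\<forall>v\<in>DC y. lenC d v \<le> lenC d m"
    proof
      fix v assume v: "v \<in> DC y"
      have vW: "v \<in> W_C d" and mv: "realizes v" using DC_W_C[OF y(1) v] DC_realizes[OF y(1) my v] by auto
      show "lenC d v \<le> lenC d m" by (rule lenC_cmp(1)[OF vW mv mW mm m(2)])
    qed
    then have "Q m" unfolding Q_def using y m(1) by blast
    then show ?thesis by blast
  qed
  have un: "w1 = w2" if "Q w1" "Q w2" for w1 w2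
    using props[OF that(1)] props[OF that(2)] block_decreasing_unique by blast
  have "Q (THE w. Q w)" using ex un by (metis theI)
  then show ?thesis using props W by simp
qed

end

lemma row_sum_Suc: "row_sum P (Suc j) = row_sum P j + (if j < length P then length (P ! j) else 0)"
  unfolding row_sum_def by (cases "j < length P") (auto simp: min_def lessThan_Suc)

lemma row_sum_mono: "j \<le> j' \<Longrightarrow> row_sum P j \<le> row_sum P j'"
  unfolding row_sum_def by (rule sum_mono2) auto

lemma row_sum_length: "row_sum P (length P) = length (concat P)"
  unfolding row_sum_def by (simp add: length_concat sum_list_sum_nth atLeast0LessThan)

lemma length_le_if_row_sum_ge:
  assumes "rows_decr P" "length (concat P) \<le> row_sum P k"
  shows "length P \<le> k"
proof (rule ccontr)
  assume "\<not> length P \<le> k"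
  then have "row_sum P (Suc k) = row_sum P k + length (P ! k)" "0 < length (P ! k)"
    using assms(1) row_sum_Suc[of P k] unfolding rows_decr_def by auto
  moreover have "row_sum P (Suc k) \<le> length (concat P)"
    using row_sum_mono[of "Suc k" "length P" P] \<open>\<not> length P \<le> k\<close> row_sum_length by simp
  ultimately show False using assms(2) by simp
qed

context Pi_i_matrix
begin

lemma sfrak_2r_ge: "2 * d \<le> sfrak r A (2 * r)"
proof -
  define jl :: "nat \<Rightarrow> int" where "jl l = (if l < r then int l + 1 else - (int (l - r) + 1))" for l
  define C where "C l = {(i, jl l) | i. i \<in> Ir r}" for l
  have jlI: "jl l \<in> Ir r" if "l < 2 * r" for l using that unfolding jl_def Ir_iff by auto
  have jlinj: "jl l = jl m \<Longrightarrow> l < 2 * r \<Longrightarrow> m < 2 * r \<Longrightarrow> l = m" for l m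
    unfolding jl_def by (auto split: if_splits)
  have jlsurj: "\<exists>l<2 * r. jl l = j" if "j \<in> Ir r" for j
  proof (cases "j > 0")
    case True
    then show ?thesis using that unfolding jl_def Ir_iff
      by (intro exI[of _ "nat j - 1"]) auto
  next
    case False
    then show ?thesis using that unfolding jl_def Ir_iff
      by (intro exI[of _ "r + nat (- j) - 1"]) auto
  qed
  have ch: "\<forall>l<2 * r. C l \<subseteq> Ir r \<times> Ir r \<and> is_chain (C l)"
    unfolding C_def is_chain_def ple_def using jlI by auto
  have dj: "disjoint_family_on C {..<2 * r}"
    unfolding C_def disjoint_family_on_def using jlinj by auto
  have U: "(\<Union>l<2 * r. C l) = Ir r \<times> Ir r"
  proof
    show "(\<Union>l<2 * r. C l) \<subseteq> Ir r \<times> Ir r" using ch by blast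
    show "Ir r \<times> Ir r \<subseteq> (\<Union>l<2 * r. C l)"
    proof
      fix x assume "x \<in> Ir r \<times> Ir r"
      then obtain i j where x: "x = (i, j)" "i \<in> Ir r" "j \<in> Ir r" by blast
      obtain l where "l < 2 * r" "jl l = j" using jlsurj x(3) by blast
      then show "x \<in> (\<Union>l<2 * r. C l)" unfolding C_def using x by blast
    qed
  qed
  show ?thesis using sfrak_ge[where A = A, OF ch dj] U A_tot by simp
qed

lemma sigma_i_eq_PT_i:
  assumes bij: "bij_betw w Sg Sg" and bd: "block_decreasing w" and re: "realizes w"
  shows "sigma_i r A = PT_i d w"
proof
  fix i
  let ?P = "ins_tableau (word_of d w)"
  have dist: "distinct (word_of d w)" by (rule distinct_word_of[OF bij])
  have rows: "sfrak r A k = row_sum ?P k" for k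
    using greene_word_of[OF bij bd re] greene_ins_tableau[OF dist] by simp
  have P: "rows_decr ?P" "distinct (concat ?P)" "set (concat ?P) = set (word_of d w)"
    using ins_tableau_props[OF dist] by auto
  have "length (concat ?P) = 2 * d"
    using distinct_card[OF P(2)] distinct_card[OF dist] P(3) length_word_of[of d w] by simp
  then have "length ?P \<le> 2 * r"
    using length_le_if_row_sum_ge[OF P(1)] sfrak_2r_ge rows by simp
  moreover have "PT_i d w = shape ?P" unfolding PT_i_def ins_tableau_def by simp
  ultimately show "sigma_i r A i = PT_i d w i"
    unfolding sigma_i_def shape_def using rows row_sum_Suc by (cases i) auto
qed

end

theorem lemma5p6:
  fixes r d :: nat and A :: "int \<Rightarrow> int \<Rightarrow> nat"
  assumes "r \<ge> 1" and "d \<ge> 1" and "A \<in> Pi_i r d"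
  shows "sigma_i r A = PT_i d (wAplus r d A)"
proof -
  interpret Pi_i_matrix r d A using assms by unfold_locales
  have "wAplus r d A \<in> W_C d" "block_decreasing (wAplus r d A)" "realizes (wAplus r d A)"
    using wAplus_props by auto
  then show ?thesis using sigma_i_eq_PT_i W_C_bij by blast
qed

end
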